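(* For every alcove $A$ let $\zeta_A$ denote the unique point of $Z$ lying in $A$. If $A\xrightarrow{\alpha}B$ is a pair of adjacent alcoves, then $\zeta_B-\zeta_A=\alpha/h$. If moreover $\Phi$ is simply laced (type $A$, $D$ or $E$), then conversely, for alcoves $A,B$ and a root $\alpha$, $\zeta_B-\zeta_A=\alpha/h$ implies $A\xrightarrow{\alpha}B$.
   Context: $\Phi$ is an irreducible root system in $\mathfrak h_{\mathbb R}^*$ with positive roots $\Phi^+$, coroots $\alpha^\vee=2\alpha/(\alpha,\alpha)$, weight lattice $\Lambda$, $\rho$ the sum of fundamental weights, $\theta^\vee$ the highest coroot and $h=(\rho,\theta^\vee)+1$ the Coxeter number. Hyperplanes $H_{\alpha,k}=\{\lambda:(\lambda,\alpha^\vee)=k\}$, $\alpha\in\Phi$, $k\in\mathbb Z$; alcoves are the connected components of the complement of their union. Two alcoves are adjacent if they are distinct and share a common wall; write $A\xrightarrow{\alpha}B$ if the common wall lies in some $H_{\alpha,k}$ and $\alpha$ points from $A$ to $B$ (i.e. $(x,\alpha^\vee)<k$ on $A$ and $>k$ on $B$). $Z=\{\zeta\in\Lambda/h:(\zeta,\alpha^\vee)\notin\mathbb Z\ \forall\alpha\in\Phi\}$; each alcove contains exactly one point of $Z$ (Kostant). *)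

theory Defs
  imports "HOL-Analysis.Analysis"
begin

definition coroot :: "'a::euclidean_space \<Rightarrow> 'a" where
  "coroot \<alpha> = (2 / (\<alpha> \<bullet> \<alpha>)) *\<^sub>R \<alpha>"

definition refl :: "'a::euclidean_space \<Rightarrow> 'a \<Rightarrow> 'a" where
  "refl \<alpha> x = x - (x \<bullet> coroot \<alpha>) *\<^sub>R \<alpha>"

definition root_system :: "'a::euclidean_space set \<Rightarrow> bool" where
  "root_system \<Phi> \<longleftrightarrow> finite \<Phi> \<and> 0 \<notin> \<Phi> \<and> span \<Phi> = UNIV \<and>
     (\<forall>\<alpha>\<in>\<Phi>. \<forall>\<beta>\<in>\<Phi>. refl \<alpha> \<beta> \<in> \<Phi>) \<and>
     (\<forall>\<alpha>\<in>\<Phi>. \<forall>\<beta>\<in>\<Phi>. \<beta> \<bullet> coroot \<alpha> \<in> \<int>) \<and>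
     (\<forall>\<alpha>\<in>\<Phi>. \<forall>c::real. c *\<^sub>R \<alpha> \<in> \<Phi> \<longrightarrow> c = 1 \<or> c = -1)"

definition irreducible_root_system :: "'a::euclidean_space set \<Rightarrow> bool" where
  "irreducible_root_system \<Phi> \<longleftrightarrow> root_system \<Phi> \<and>
     \<not> (\<exists>\<Phi>1 \<Phi>2. \<Phi>1 \<noteq> {} \<and> \<Phi>2 \<noteq> {} \<and> \<Phi>1 \<union> \<Phi>2 = \<Phi> \<and>
          (\<forall>\<alpha>\<in>\<Phi>1. \<forall>\<beta>\<in>\<Phi>2. \<alpha> \<bullet> \<beta> = 0))"

definition simply_laced :: "'a::euclidean_space set \<Rightarrow> bool" where
  "simply_laced \<Phi> \<longleftrightarrow> (\<forall>\<alpha>\<in>\<Phi>. \<forall>\<beta>\<in>\<Phi>. norm \<alpha> = norm \<beta>)"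

definition positive_system :: "'a::euclidean_space set \<Rightarrow> 'a set \<Rightarrow> bool" where
  "positive_system \<Phi> P \<longleftrightarrow> (\<exists>v. (\<forall>\<alpha>\<in>\<Phi>. \<alpha> \<bullet> v \<noteq> 0) \<and> P = {\<alpha>\<in>\<Phi>. \<alpha> \<bullet> v > 0})"

definition simple_roots :: "'a::euclidean_space set \<Rightarrow> 'a set" where
  "simple_roots P = {\<alpha>\<in>P. \<not> (\<exists>\<beta>\<in>P. \<exists>\<gamma>\<in>P. \<alpha> = \<beta> + \<gamma>)}"

definition fund_weight :: "'a::euclidean_space set \<Rightarrow> 'a \<Rightarrow> 'a" where
  "fund_weight P \<alpha> = (THE w. \<forall>\<beta>\<in>simple_roots P. w \<bullet> coroot \<beta> = (if \<beta> = \<alpha> then 1 else 0))"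

definition rho :: "'a::euclidean_space set \<Rightarrow> 'a" where
  "rho P = (\<Sum>\<alpha>\<in>simple_roots P. fund_weight P \<alpha>)"

definition highest_coroot :: "'a::euclidean_space set \<Rightarrow> 'a set \<Rightarrow> 'a" where
  "highest_coroot \<Phi> P = (THE t. t \<in> coroot ` \<Phi> \<and>
     (\<forall>\<beta>\<in>P. \<exists>c::'a \<Rightarrow> nat. t - coroot \<beta> = (\<Sum>\<gamma>\<in>simple_roots P. real (c \<gamma>) *\<^sub>R coroot \<gamma>)))"

definition coxeter_number :: "'a::euclidean_space set \<Rightarrow> 'a set \<Rightarrow> real" where
  "coxeter_number \<Phi> P = rho P \<bullet> highest_coroot \<Phi> P + 1"

definition weight_lattice :: "'a::euclidean_space set \<Rightarrow> 'a set" where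
  "weight_lattice \<Phi> = {l. \<forall>\<alpha>\<in>\<Phi>. l \<bullet> coroot \<alpha> \<in> \<int>}"

definition Zset :: "'a::euclidean_space set \<Rightarrow> 'a set \<Rightarrow> 'a set" where
  "Zset \<Phi> P = {\<zeta>. (\<exists>l\<in>weight_lattice \<Phi>. \<zeta> = (1 / coxeter_number \<Phi> P) *\<^sub>R l) \<and>
                   (\<forall>\<alpha>\<in>\<Phi>. \<zeta> \<bullet> coroot \<alpha> \<notin> \<int>)}"

definition hyp :: "'a::euclidean_space \<Rightarrow> int \<Rightarrow> 'a set" where
  "hyp \<alpha> k = {x. x \<bullet> coroot \<alpha> = of_int k}"

definition alcoves :: "'a::euclidean_space set \<Rightarrow> 'a set set" where
  "alcoves \<Phi> = components (UNIV - \<Union>{hyp \<alpha> k | \<alpha> k. \<alpha> \<in> \<Phi>})"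

definition wall_in :: "'a::euclidean_space set \<Rightarrow> 'a set \<Rightarrow> 'a \<Rightarrow> int \<Rightarrow> 'a set \<Rightarrow> bool" where
  "wall_in \<Phi> A \<alpha> k W \<longleftrightarrow> \<alpha> \<in> \<Phi> \<and> W = closure A \<inter> hyp \<alpha> k \<and> aff_dim W = int DIM('a) - 1"

text \<open>A --alpha--> B: A, B distinct adjacent alcoves with common wall in H_{alpha,k},
  alpha pointing from A to B.\<close>
definition alcove_arrow :: "'a::euclidean_space set \<Rightarrow> 'a set \<Rightarrow> 'a \<Rightarrow> 'a set \<Rightarrow> bool" where
  "alcove_arrow \<Phi> A \<alpha> B \<longleftrightarrow> A \<in> alcoves \<Phi> \<and> B \<in> alcoves \<Phi> \<and> A \<noteq> B \<and> \<alpha> \<in> \<Phi> \<and>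
     (\<exists>k::int. \<exists>W. wall_in \<Phi> A \<alpha> k W \<and> wall_in \<Phi> B \<alpha> k W \<and>
        (\<forall>x\<in>A. x \<bullet> coroot \<alpha> < of_int k) \<and> (\<forall>x\<in>B. x \<bullet> coroot \<alpha> > of_int k))"

definition zeta :: "'a::euclidean_space set \<Rightarrow> 'a set \<Rightarrow> 'a set \<Rightarrow> 'a" where
  "zeta \<Phi> P A = (THE \<zeta>. \<zeta> \<in> Zset \<Phi> P \<and> \<zeta> \<in> A)"

end

theory Submission
  imports Defs
begin

(*
  The affine Weyl group, generated by the reflections aff_refl alpha k in the hyperplanes
  hyp alpha k, permutes the alcoves, preserves Z (it shifts coroot coordinates by integers
  and h is an integer) and moves every alcove onto the fundamental alcove
  A0 = {x. 0 < x . alpha^v < 1 for all positive alpha}: reflecting in a hyperplane that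
  separates a point from rho/h lowers its squared distance to rho/h by an amount bounded
  below. Kostant's point rho/h is the only point of Z in A0, so zeta (w A) = w (zeta A).

  The walls of A0 lie in the hyperplanes H_{alpha_i,0} (alpha_i simple) and H_{theta,1}
  (theta^v the highest coroot); since rho . alpha_i^v = 1 and rho . theta^v = h - 1, the
  point rho/h has coroot distance 1/h to each wall, hence so has zeta A to each wall of A.
  If A --alpha--> B through H_{alpha,k}, then B is the mirror image of A and
  zeta B = aff_refl alpha k (zeta A) = zeta A + alpha/h.

  Conversely, moving A to A0 turns zeta B - zeta A = alpha/h into rho/h + gamma/h in Z for a
  root gamma. If all roots have the same length, gamma . alpha_i^v is -1, 0 or 1 for
  gamma <> +-alpha_i, and the value -1 would put rho/h + gamma/h on H_{alpha_i,0}. This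
  leaves gamma = -alpha_i or gamma = theta, the roots pointing out of A0 through a wall.
*)

section \<open>Reflections, coroots and affine reflections\<close>

lemma inner_coroot: "x \<bullet> coroot \<alpha> = 2 * (x \<bullet> \<alpha>) / (\<alpha> \<bullet> \<alpha>)"
  by (simp add: coroot_def)

lemma inner_coroot_self: "\<alpha> \<noteq> 0 \<Longrightarrow> \<alpha> \<bullet> coroot \<alpha> = 2"
  by (simp add: inner_coroot)

lemma coroot_inner_self: "\<alpha> \<noteq> 0 \<Longrightarrow> coroot \<alpha> \<bullet> \<alpha> = 2"
  using inner_coroot_self by (simp add: inner_commute)

lemma coroot_neg [simp]: "coroot (- \<alpha>) = - coroot \<alpha>"
  by (simp add: coroot_def)

lemma coroot_eq_0_iff [simp]: "coroot \<alpha> = 0 \<longleftrightarrow> \<alpha> = 0"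
  by (simp add: coroot_def)

lemma coroot_coroot: "\<alpha> \<noteq> 0 \<Longrightarrow> coroot (coroot \<alpha>) = \<alpha>"
  by (simp add: coroot_def power2_eq_square field_simps)

lemma linear_refl: "linear (refl \<alpha>)"
  by (rule linearI) (simp_all add: refl_def inner_add_left algebra_simps)

lemma refl_self: "\<alpha> \<noteq> 0 \<Longrightarrow> refl \<alpha> \<alpha> = - \<alpha>"
  by (simp add: refl_def inner_coroot_self scaleR_2)

lemma refl_refl [simp]: "\<alpha> \<noteq> 0 \<Longrightarrow> refl \<alpha> (refl \<alpha> x) = x"
  by (simp add: refl_def inner_diff_left inner_coroot_self algebra_simps)

lemma refl_inner: "\<alpha> \<noteq> 0 \<Longrightarrow> refl \<alpha> x \<bullet> refl \<alpha> y = x \<bullet> y"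
  by (simp add: refl_def inner_coroot inner_diff_left inner_diff_right field_simps inner_commute)

lemma refl_add: "refl \<alpha> (x + y) = refl \<alpha> x + refl \<alpha> y"
  by (simp add: refl_def inner_add_left algebra_simps)

lemma refl_scaleR: "refl \<alpha> (c *\<^sub>R x) = c *\<^sub>R refl \<alpha> x"
  by (simp add: refl_def algebra_simps)

lemma refl_diff: "refl \<alpha> (x - y) = refl \<alpha> x - refl \<alpha> y"
  by (simp add: refl_def inner_diff_left algebra_simps)

lemma refl_self_adjoint: "\<alpha> \<noteq> 0 \<Longrightarrow> refl \<alpha> x \<bullet> y = x \<bullet> refl \<alpha> y"
  by (metis refl_inner refl_refl)

lemma coroot_orthogonal_map:
  assumes "linear \<tau>" "\<And>x y. \<tau> x \<bullet> \<tau> y = x \<bullet> y"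
  shows "coroot (\<tau> \<beta>) = \<tau> (coroot \<beta>)"
  using assms by (simp add: coroot_def linear_scale)

lemma coroot_refl: "\<alpha> \<noteq> 0 \<Longrightarrow> coroot (refl \<alpha> \<beta>) = refl \<alpha> (coroot \<beta>)"
  by (rule coroot_orthogonal_map[OF linear_refl refl_inner])

lemma coroot_refl_eq:
  assumes "\<alpha> \<noteq> 0"
  shows "coroot (refl \<alpha> \<beta>) = coroot \<beta> - (\<alpha> \<bullet> coroot \<beta>) *\<^sub>R coroot \<alpha>"
proof -
  have "coroot (refl \<alpha> \<beta>) = coroot \<beta> - (coroot \<beta> \<bullet> coroot \<alpha>) *\<^sub>R \<alpha>"
    using coroot_refl[OF assms] by (simp add: refl_def)
  also have "(coroot \<beta> \<bullet> coroot \<alpha>) *\<^sub>R \<alpha> = (\<alpha> \<bullet> coroot \<beta>) *\<^sub>R coroot \<alpha>"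
    using assms by (simp add: coroot_def inner_commute field_simps)
  finally show ?thesis .
qed

lemma refl_coroot: "\<alpha> \<noteq> 0 \<Longrightarrow> refl (coroot \<alpha>) = refl \<alpha>"
  by (rule ext) (simp add: refl_def coroot_coroot coroot_def inner_commute field_simps)

lemma refl_fixes_orthogonal: "x \<bullet> \<alpha> = 0 \<Longrightarrow> refl \<alpha> x = x"
  by (simp add: refl_def inner_coroot)

lemma hyp_neg: "hyp (- \<gamma>) (- m) = hyp \<gamma> m"
  by (auto simp: hyp_def)

lemma aff_dim_hyp:
  fixes \<gamma> :: "'a::euclidean_space"
  assumes "\<gamma> \<noteq> 0" shows "aff_dim (hyp \<gamma> m) = int DIM('a) - 1"
proof -
  have "hyp \<gamma> m = {x. coroot \<gamma> \<bullet> x = of_int m}"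
    by (auto simp: hyp_def inner_commute)
  then show ?thesis using assms by simp
qed

definition aff_refl :: "'a::euclidean_space \<Rightarrow> int \<Rightarrow> 'a \<Rightarrow> 'a" where
  "aff_refl \<alpha> k x = refl \<alpha> x + of_int k *\<^sub>R \<alpha>"

lemma aff_refl_aff_refl: "\<alpha> \<noteq> 0 \<Longrightarrow> aff_refl \<alpha> k (aff_refl \<alpha> k x) = x"
  by (simp add: aff_refl_def refl_add refl_scaleR refl_self)

lemma aff_refl_eq: "aff_refl \<alpha> k x = x - (x \<bullet> coroot \<alpha> - of_int k) *\<^sub>R \<alpha>"
  by (simp add: aff_refl_def refl_def algebra_simps)

lemma aff_refl_fixes_hyp: "x \<in> hyp \<alpha> k \<Longrightarrow> aff_refl \<alpha> k x = x"
  by (simp add: aff_refl_eq hyp_def)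

lemma aff_refl_coroot: "\<alpha> \<noteq> 0 \<Longrightarrow> aff_refl \<alpha> k y \<bullet> coroot \<alpha> = 2 * of_int k - y \<bullet> coroot \<alpha>"
  by (simp add: aff_refl_eq inner_diff_left inner_coroot_self)

lemma inner_diff_scaleR_self: "((a::'a::real_inner) - u *\<^sub>R b) \<bullet> (a - u *\<^sub>R b)
    = a \<bullet> a - 2 * u * (a \<bullet> b) + u * u * (b \<bullet> b)"
  by (simp add: inner_diff_left inner_diff_right inner_commute algebra_simps)

lemma aff_refl_dist:
  assumes "\<beta> \<noteq> 0"
  shows "(aff_refl \<beta> m y - p) \<bullet> (aff_refl \<beta> m y - p)
      = (y - p) \<bullet> (y - p) + (y \<bullet> coroot \<beta> - of_int m) * (p \<bullet> coroot \<beta> - of_int m) * (\<beta> \<bullet> \<beta>)"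
proof -
  have bb: "\<beta> \<bullet> \<beta> \<noteq> 0" using assms by simp
  define u where "u = y \<bullet> coroot \<beta> - of_int m"
  define w where "w = p \<bullet> coroot \<beta> - of_int m"
  have yb: "(y - p) \<bullet> \<beta> = (u - w) * (\<beta> \<bullet> \<beta>) / 2"
    using bb by (simp add: u_def w_def coroot_def inner_diff_left field_simps)
  have e: "aff_refl \<beta> m y - p = (y - p) - u *\<^sub>R \<beta>"
    by (simp add: aff_refl_eq u_def)
  have "(aff_refl \<beta> m y - p) \<bullet> (aff_refl \<beta> m y - p)
      = (y - p) \<bullet> (y - p) - 2 * u * ((y - p) \<bullet> \<beta>) + u * u * (\<beta> \<bullet> \<beta>)"
    unfolding e by (rule inner_diff_scaleR_self)
  also have "\<dots> = (y - p) \<bullet> (y - p) + u * w * (\<beta> \<bullet> \<beta>)" unfolding yb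
    by (simp add: field_simps)
  finally show ?thesis by (simp add: u_def w_def)
qed

definition lin_part :: "('a::real_vector \<Rightarrow> 'a) \<Rightarrow> 'a \<Rightarrow> 'a" where
  "lin_part f x = f x - f 0"

lemma lin_part_add_const: "f x = lin_part f x + f 0" by (simp add: lin_part_def)

lemma sum_single_coeff_nat:
  fixes f :: "'b \<Rightarrow> 'c::real_vector"
  assumes "finite S" "a \<in> S"
  shows "(\<Sum>\<gamma>\<in>S. real (if \<gamma> = a then k else 0) *\<^sub>R f \<gamma>) = real k *\<^sub>R f a"
proof -
  have "(\<Sum>\<gamma>\<in>S. real (if \<gamma> = a then k else 0) *\<^sub>R f \<gamma>) = (\<Sum>\<gamma>\<in>S. if \<gamma> = a then real k *\<^sub>R f \<gamma> else 0)"
    by (rule sum.cong) simp_all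
  then show ?thesis using assms by simp
qed

lemma sum_single_coeff:
  fixes f :: "'b \<Rightarrow> 'c::real_vector"
  assumes "finite S" "a \<in> S"
  shows "(\<Sum>\<gamma>\<in>S. (if \<gamma> = a then k else 0) *\<^sub>R f \<gamma>) = k *\<^sub>R f a"
proof -
  have "(\<Sum>\<gamma>\<in>S. (if \<gamma> = a then k else 0) *\<^sub>R f \<gamma>) = (\<Sum>\<gamma>\<in>S. if \<gamma> = a then k *\<^sub>R f \<gamma> else 0)"
    by (rule sum.cong) simp_all
  then show ?thesis using assms by simp
qed

lemma sum_single_coeff_1:
  fixes f :: "'b \<Rightarrow> 'c::real_vector"
  assumes "finite S" "a \<in> S"
  shows "(\<Sum>\<gamma>\<in>S. real (if \<gamma> = a then 1 else 0) *\<^sub>R f \<gamma>) = f a"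
  using sum_single_coeff_nat[OF assms, of 1 f] by simp

lemma sum_coeff_add_single:
  fixes f :: "'b \<Rightarrow> 'c::real_vector"
  assumes "finite S" "a \<in> S"
  shows "(\<Sum>\<gamma>\<in>S. real (c \<gamma> + (if \<gamma> = a then k else 0)) *\<^sub>R f \<gamma>)
      = (\<Sum>\<gamma>\<in>S. real (c \<gamma>) *\<^sub>R f \<gamma>) + real k *\<^sub>R f a"
proof -
  have "(\<Sum>\<gamma>\<in>S. real (c \<gamma> + (if \<gamma> = a then k else 0)) *\<^sub>R f \<gamma>) =
        (\<Sum>\<gamma>\<in>S. real (c \<gamma>) *\<^sub>R f \<gamma> + real (if \<gamma> = a then k else 0) *\<^sub>R f \<gamma>)"
    by (rule sum.cong) (simp_all only: of_nat_add scaleR_add_left)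
  also have "\<dots> = (\<Sum>\<gamma>\<in>S. real (c \<gamma>) *\<^sub>R f \<gamma>) + real k *\<^sub>R f a"
    by (simp only: sum.distrib sum_single_coeff_nat[OF assms])
  finally show ?thesis .
qed

lemma independent_coeffs_eq:
  assumes "independent S" "finite S" "(\<Sum>\<gamma>\<in>S. a \<gamma> *\<^sub>R \<gamma>) = (\<Sum>\<gamma>\<in>S. b \<gamma> *\<^sub>R \<gamma>)" "\<gamma> \<in> S"
  shows "a \<gamma> = b \<gamma>"
proof (rule ccontr)
  assume ne: "a \<gamma> \<noteq> b \<gamma>"
  have "(\<Sum>w\<in>S. (a w - b w) *\<^sub>R w) = 0" using assms(3)
    by (simp add: scaleR_diff_left sum_subtractf)
  then have "dependent S" unfolding dependent_finite[OF assms(2)]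
    using ne assms(4) by (intro exI[of _ "\<lambda>w. a w - b w"]) auto
  then show False using assms(1) by simp
qed

lemma span_orthogonal:
  assumes "x \<in> span S" "\<forall>a\<in>S. a \<bullet> y = 0" shows "x \<bullet> y = 0"
  using orthogonal_to_span[of x S y] assms by (auto simp: orthogonal_def inner_commute)

lemma refl_in_span:
  assumes "x \<in> span S" and "\<alpha> \<in> S \<or> (\<forall>s\<in>S. s \<bullet> \<alpha> = 0)"
  shows "refl \<alpha> x \<in> span S"
  using assms(2)
proof
  assume "\<alpha> \<in> S"
  then show ?thesis using assms(1) by (simp add: refl_def span_diff span_scale span_base)
next
  assume "\<forall>s\<in>S. s \<bullet> \<alpha> = 0"
  then have "x \<bullet> \<alpha> = 0" using span_orthogonal assms(1) by blast
  then show ?thesis using assms(1) by (simp add: refl_fixes_orthogonal)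
qed

lemma independent_if_obtuse:
  fixes S :: "'a::real_inner set"
  assumes fin: "finite S"
    and obtuse: "\<And>a b. a \<in> S \<Longrightarrow> b \<in> S \<Longrightarrow> a \<noteq> b \<Longrightarrow> a \<bullet> b \<le> 0"
    and pos: "\<And>a. a \<in> S \<Longrightarrow> 0 < a \<bullet> v"
  shows "independent S"
proof
  assume "dependent S"
  then obtain u w0 where u: "(\<Sum>w\<in>S. u w *\<^sub>R w) = 0" and w0: "w0 \<in> S" "u w0 \<noteq> 0"
    using dependent_finite[OF fin] by auto
  \<comment> \<open>Split the coefficients as \<open>u = p - n\<close> with disjointly supported \<open>p, n \<ge> 0\<close>. The vector
    \<open>x\<close> that both produce has \<open>x \<bullet> x \<le> 0\<close> by obtuseness, and then \<open>x \<bullet> v = 0\<close> forces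
    \<open>p = n = 0\<close>.\<close>
  define p where "p w = max (u w) 0" for w
  define n where "n w = max (- u w) 0" for w
  define x where "x = (\<Sum>w\<in>S. p w *\<^sub>R w)"
  have "p w - n w = u w" for w
    by (simp add: p_def n_def max_def)
  then have "(\<Sum>w\<in>S. p w *\<^sub>R w) - (\<Sum>w\<in>S. n w *\<^sub>R w) = (\<Sum>w\<in>S. u w *\<^sub>R w)"
    by (simp add: sum_subtractf[symmetric] scaleR_diff_left[symmetric])
  then have x_n: "x = (\<Sum>w\<in>S. n w *\<^sub>R w)" using u by (simp add: x_def)
  have "x \<bullet> x = (\<Sum>b\<in>S. \<Sum>a\<in>S. (p a * n b) * (a \<bullet> b))"
    by (subst (2) x_n) (simp add: x_def inner_sum_left inner_sum_right sum_distrib_left mult_ac)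
  also have "\<dots> \<le> 0"
  proof (intro sum_nonpos)
    fix a b assume "a \<in> S" "b \<in> S"
    show "p a * n b * (a \<bullet> b) \<le> 0"
    proof (cases "a = b")
      case True
      then show ?thesis by (simp add: p_def n_def max_def)
    next
      case False
      then show ?thesis
        using obtuse \<open>a \<in> S\<close> \<open>b \<in> S\<close>
        by (intro mult_nonneg_nonpos) (auto simp: p_def n_def)
    qed
  qed
  finally have "x = 0" by (metis inner_eq_zero_iff inner_ge_zero order_antisym)
  have "(\<Sum>w\<in>S. p w * (w \<bullet> v)) = x \<bullet> v"
    by (simp add: x_def inner_sum_left)
  moreover have "(\<Sum>w\<in>S. n w * (w \<bullet> v)) = x \<bullet> v"
    by (simp add: x_n inner_sum_left)
  ultimately
  have "p w * (w \<bullet> v) = 0 \<and> n w * (w \<bullet> v) = 0" if "w \<in> S" for w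
    using that pos \<open>x = 0\<close> fin
    by (simp add: sum_nonneg_eq_0_iff p_def n_def less_imp_le)
  then have "p w0 = 0" "n w0 = 0" using w0 pos by (auto simp: less_le)
  then show False using w0 by (simp add: p_def n_def max_def split: if_splits)
qed

lemma exists_by_real_descent:
  fixes D :: "'b \<Rightarrow> real"
  assumes d: "0 < d" and "P x0" and D_nonneg: "\<And>x. P x \<Longrightarrow> 0 \<le> D x"
    and step: "\<And>x. P x \<Longrightarrow> \<not> Q x \<Longrightarrow> \<exists>y. P y \<and> D y \<le> D x - d"
  shows "\<exists>x. P x \<and> Q x"
proof -
  have "\<forall>x. P x \<and> nat \<lfloor>D x / d\<rfloor> = n \<longrightarrow> (\<exists>x. P x \<and> Q x)" for n
  proof (induction n rule: less_induct)
    case (less n)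
    show ?case
    proof (intro allI impI)
      fix x assume x: "P x \<and> nat \<lfloor>D x / d\<rfloor> = n"
      show "\<exists>x. P x \<and> Q x"
      proof (cases "Q x")
        case True
        then show ?thesis using x by blast
      next
        case False
        then obtain y where y: "P y" "D y \<le> D x - d" using step x by blast
        have "D y / d \<le> D x / d - 1" using y(2) d by (simp add: field_simps)
        then have "\<lfloor>D y / d\<rfloor> \<le> \<lfloor>D x / d\<rfloor> - 1" by linarith
        moreover have "\<lfloor>D y / d\<rfloor> \<ge> 0" using D_nonneg[OF y(1)] d by simp
        ultimately have "nat \<lfloor>D y / d\<rfloor> < n" using x by linarith
        then show ?thesis using less.IH y(1) by blast
      qed
    qed
  qed
  then show ?thesis using assms(2) by blast
qed

lemma Ints_weighted_excess_lt_1: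
  fixes a :: "'b \<Rightarrow> real" and c :: "'b \<Rightarrow> nat"
  assumes "finite S" and c: "\<forall>i\<in>S. c i \<ge> 1" and a: "\<forall>i\<in>S. a i \<in> \<int> \<and> 1 \<le> a i"
    and lt: "(\<Sum>i\<in>S. real (c i) * (a i - 1)) < 1"
  shows "\<forall>i\<in>S. a i = 1"
proof (rule ccontr)
  assume "\<not> ?thesis"
  then obtain j where j: "j \<in> S" "a j \<noteq> 1" by blast
  then obtain n where n: "a j = of_int n" using a by (metis Ints_cases)
  then have "1 \<le> n" "n \<noteq> 1" using a j by auto
  then have "2 \<le> a j" using n by simp
  moreover have "1 \<le> real (c j)" using c j by simp
  ultimately have "1 * 1 \<le> real (c j) * (a j - 1)" by (intro mult_mono) auto
  also have "\<dots> \<le> (\<Sum>i\<in>S. real (c i) * (a i - 1))"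
    using assms(1) a j by (intro member_le_sum) auto
  finally show False using lt by simp
qed

lemma closed_inner_le: "closed {x. x \<bullet> c \<le> (k::real)}"
  using closed_halfspace_le[of c k] by (simp add: inner_commute)

lemma closed_inner_ge: "closed {x. x \<bullet> c \<ge> (k::real)}"
  using closed_halfspace_ge[of k c] by (simp add: inner_commute)

lemma closure_inner_less_subset: "A \<subseteq> {x. x \<bullet> c < k} \<Longrightarrow> closure A \<subseteq> {x. x \<bullet> c \<le> k}"
  by (rule closure_minimal) (auto simp: closed_inner_le)

lemma closure_inner_greater_subset: "A \<subseteq> {x. x \<bullet> c > k} \<Longrightarrow> closure A \<subseteq> {x. x \<bullet> c \<ge> k}"
  by (rule closure_minimal) (auto simp: closed_inner_ge)

lemma aff_dim_le_two_hyperplanes: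
  fixes u w :: "'a::euclidean_space"
  assumes ind: "independent {u, w}" "u \<noteq> w"
    and S: "S \<subseteq> {x. x \<bullet> u = a \<and> x \<bullet> w = b}"
  shows "aff_dim S \<le> int DIM('a) - 2"
proof (cases "S = {}")
  case True then show ?thesis using DIM_positive[where 'a='a] by simp
next
  case False
  then obtain s where s: "s \<in> S" by auto
  define V where "V = {y. \<forall>x\<in>span {u, w}. orthogonal x y}"
  have subV: "subspace V" unfolding V_def by (rule subspace_orthogonal_to_vectors)
  have dV: "dim V + dim (span {u, w}) = dim (UNIV::'a set)"
    unfolding V_def using dim_subspace_orthogonal_to_vectors[of "span {u,w}" UNIV] by simp
  have "dim (span {u, w}) = 2" using ind by (simp add: dim_eq_card_independent)
  then have dimV: "int (dim V) = int DIM('a) - 2" using dV by simp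
  have "(\<lambda>x. x - s) ` S \<subseteq> V"
  proof
    fix y assume "y \<in> (\<lambda>x. x - s) ` S"
    then obtain x where x: "x \<in> S" "y = x - s" by auto
    then have "y \<bullet> u = 0" "y \<bullet> w = 0" using S s by (auto simp: inner_diff_left)
    then have "\<forall>z\<in>{u, w}. orthogonal y z" by (auto simp: orthogonal_def)
    then have "\<forall>z\<in>span {u, w}. orthogonal y z"
      using orthogonal_to_span orthogonal_commute by metis
    then show "y \<in> V" by (auto simp: V_def orthogonal_commute)
  qed
  then have "aff_dim ((\<lambda>x. x - s) ` S) \<le> aff_dim V" by (rule aff_dim_subset)
  also have "\<dots> = int (dim V)" using subV by (simp add: aff_dim_subspace)
  finally show ?thesis using dimV by (simp add: aff_dim_translation_eq_subtract)
qed

lemma aff_dim_wall_nonempty: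
  fixes W :: "'a::euclidean_space set"
  assumes "aff_dim W = int DIM('a) - 1" shows "W \<noteq> {}"
  using assms DIM_positive[where 'a='a] by (auto simp: aff_dim_empty[symmetric])

lemma aff_dim_ge_affine_independent:
  fixes W :: "'a::euclidean_space set"
  assumes "B \<subseteq> W" "\<not> affine_dependent B" "card B = DIM('a)"
  shows "aff_dim W \<ge> int DIM('a) - 1"
  using aff_dim_affine_independent[OF assms(2)] aff_dim_subset[OF assms(1)] assms(3) by simp

lemma less_int_iff_unit_interval:
  fixes t s :: real
  assumes "of_int n < t" "t < of_int n + 1" "of_int n < s" "s < of_int n + 1"
  shows "t < of_int k \<longleftrightarrow> s < of_int k"
proof -
  have "r < of_int k \<longleftrightarrow> n < k" if "of_int n < r" "r < of_int n + 1" for r :: real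
  proof
    assume "r < of_int k"
    then show "n < k" using that(1) by linarith
  next
    assume "n < k"
    then have "of_int n + 1 \<le> (of_int k :: real)" by linarith
    then show "r < of_int k" using that(2) by linarith
  qed
  then show ?thesis using assms by blast
qed

lemma unit_interval_not_int: "0 < (t::real) \<Longrightarrow> t < 1 \<Longrightarrow> t \<noteq> of_int k"
proof
  assume "0 < t" "t < 1" "t = of_int k"
  then have "0 < k" "k < 1" by linarith+
  then show False by simp
qed

lemma dist_int_ge_frac:
  fixes t :: real assumes "t \<notin> \<int>"
  shows "\<bar>t - of_int m\<bar> \<ge> min (t - of_int \<lfloor>t\<rfloor>) (of_int \<lfloor>t\<rfloor> + 1 - t)"
proof (cases "m \<le> \<lfloor>t\<rfloor>")
  case True
  then have "of_int m \<le> (of_int \<lfloor>t\<rfloor> :: real)" by simp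
  then have "t - of_int m \<ge> t - of_int \<lfloor>t\<rfloor>" by simp
  moreover have "t - of_int \<lfloor>t\<rfloor> \<ge> 0" by simp
  ultimately show ?thesis by simp
next
  case False
  then have "of_int m \<ge> (of_int \<lfloor>t\<rfloor> + 1 :: real)" by simp
  moreover have "t < of_int \<lfloor>t\<rfloor> + 1" by linarith
  ultimately show ?thesis by simp
qed

lemma frac_gap_pos:
  fixes t :: real assumes "t \<notin> \<int>"
  shows "min (t - of_int \<lfloor>t\<rfloor>) (of_int \<lfloor>t\<rfloor> + 1 - t) > 0"
proof -
  have "t \<noteq> of_int \<lfloor>t\<rfloor>" using assms by (metis Ints_of_int)
  then have "t - of_int \<lfloor>t\<rfloor> > 0" by linarith
  moreover have "of_int \<lfloor>t\<rfloor> + 1 - t > 0" by linarith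
  ultimately show ?thesis by simp
qed

section \<open>Root systems with a positive system\<close>

locale pos_root_system =
  fixes \<Phi> :: "'a::euclidean_space set" and P :: "'a set" and v :: 'a
  assumes root_sys: "root_system \<Phi>" and v_regular: "\<forall>\<alpha>\<in>\<Phi>. \<alpha> \<bullet> v \<noteq> 0"
    and P_eq: "P = {\<alpha>\<in>\<Phi>. \<alpha> \<bullet> v > 0}"
begin

lemma finite_Phi: "finite \<Phi>" using root_sys by (simp add: root_system_def)

lemma root_nonzero: "\<alpha> \<in> \<Phi> \<Longrightarrow> \<alpha> \<noteq> 0"
  using root_sys by (auto simp: root_system_def)

lemma span_Phi: "span \<Phi> = UNIV" using root_sys by (simp add: root_system_def)

lemma refl_root: "\<alpha> \<in> \<Phi> \<Longrightarrow> \<beta> \<in> \<Phi> \<Longrightarrow> refl \<alpha> \<beta> \<in> \<Phi>"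
  using root_sys by (simp add: root_system_def)

lemma root_coroot_Ints: "\<alpha> \<in> \<Phi> \<Longrightarrow> \<beta> \<in> \<Phi> \<Longrightarrow> \<beta> \<bullet> coroot \<alpha> \<in> \<int>"
  using root_sys by (simp add: root_system_def)

lemma root_multiple: "\<alpha> \<in> \<Phi> \<Longrightarrow> c *\<^sub>R \<alpha> \<in> \<Phi> \<Longrightarrow> c = 1 \<or> c = -1"
  using root_sys by (simp add: root_system_def)

lemma neg_root: "\<alpha> \<in> \<Phi> \<Longrightarrow> - \<alpha> \<in> \<Phi>"
  using refl_root[of \<alpha> \<alpha>] refl_self[of \<alpha>] root_nonzero[of \<alpha>] by simp

lemma finite_P: "finite P" using finite_Phi P_eq by auto

lemma P_subset: "P \<subseteq> \<Phi>" using P_eq by auto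

lemma P_inner_v: "\<alpha> \<in> P \<Longrightarrow> \<alpha> \<bullet> v > 0" using P_eq by auto

lemma root_or_neg_in_P: "\<alpha> \<in> \<Phi> \<Longrightarrow> \<alpha> \<in> P \<or> - \<alpha> \<in> P"
  using v_regular neg_root P_eq by (auto simp: inner_minus_left)

lemma neg_notin_P: "\<alpha> \<in> P \<Longrightarrow> - \<alpha> \<notin> P"
  using P_eq by (auto simp: inner_minus_left)

lemma root_coroot_int: "\<alpha> \<in> \<Phi> \<Longrightarrow> \<beta> \<in> \<Phi> \<Longrightarrow> \<exists>n::int. \<beta> \<bullet> coroot \<alpha> = of_int n"
  using root_coroot_Ints by (meson Ints_cases)

lemma root_inner_strict_Cauchy_Schwarz:
  assumes "\<alpha> \<in> \<Phi>" "\<beta> \<in> \<Phi>" "\<beta> \<noteq> \<alpha>" "\<beta> \<noteq> - \<alpha>"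
  shows "(\<alpha> \<bullet> \<beta>)^2 < (\<alpha> \<bullet> \<alpha>) * (\<beta> \<bullet> \<beta>)"
proof -
  have le: "\<bar>\<alpha> \<bullet> \<beta>\<bar> \<le> norm \<alpha> * norm \<beta>"
    by (rule Cauchy_Schwarz_ineq2)
  have na: "norm \<alpha> > 0" using root_nonzero[OF assms(1)] by simp
  have ne: "\<bar>\<alpha> \<bullet> \<beta>\<bar> \<noteq> norm \<alpha> * norm \<beta>"
  proof
    assume "\<bar>\<alpha> \<bullet> \<beta>\<bar> = norm \<alpha> * norm \<beta>"
    then have "norm \<alpha> *\<^sub>R \<beta> = norm \<beta> *\<^sub>R \<alpha> \<or> norm \<alpha> *\<^sub>R \<beta> = - norm \<beta> *\<^sub>R \<alpha>"
      by (simp add: norm_cauchy_schwarz_abs_eq)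
    then obtain c where c: "\<beta> = c *\<^sub>R \<alpha>"
    proof
      assume eq: "norm \<alpha> *\<^sub>R \<beta> = norm \<beta> *\<^sub>R \<alpha>"
      have "\<beta> = (1 / norm \<alpha>) *\<^sub>R (norm \<alpha> *\<^sub>R \<beta>)"
        using na by simp
      also have "\<dots> = (norm \<beta> / norm \<alpha>) *\<^sub>R \<alpha>" using eq by simp
      finally show ?thesis by (rule that)
    next
      assume eq: "norm \<alpha> *\<^sub>R \<beta> = - norm \<beta> *\<^sub>R \<alpha>"
      have "\<beta> = (1 / norm \<alpha>) *\<^sub>R (norm \<alpha> *\<^sub>R \<beta>)"
        using na by simp
      also have "\<dots> = (- norm \<beta> / norm \<alpha>) *\<^sub>R \<alpha>" using eq by simp
      finally show ?thesis by (rule that)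
    qed
    then have "c = 1 \<or> c = -1" using root_multiple assms by auto
    then show False using c assms by auto
  qed
  have "\<bar>\<alpha> \<bullet> \<beta>\<bar> < norm \<alpha> * norm \<beta>" using le ne by simp
  then have "\<bar>\<alpha> \<bullet> \<beta>\<bar>^2 < (norm \<alpha> * norm \<beta>)^2"
    by (intro power_strict_mono) auto
  then show ?thesis by (simp add: power_mult_distrib power2_norm_eq_inner)
qed

lemma root_diff_root:
  assumes "\<alpha> \<in> \<Phi>" "\<beta> \<in> \<Phi>" "\<beta> \<noteq> \<alpha>" "\<beta> \<noteq> - \<alpha>" "\<alpha> \<bullet> \<beta> > 0"
  shows "\<alpha> - \<beta> \<in> \<Phi>"
proof -
  obtain n where n: "\<alpha> \<bullet> coroot \<beta> = of_int n"
    using root_coroot_int assms by blast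
  obtain m where m: "\<beta> \<bullet> coroot \<alpha> = of_int m"
    using root_coroot_int assms by blast
  have aa: "\<alpha> \<bullet> \<alpha> > 0" "\<beta> \<bullet> \<beta> > 0"
    using root_nonzero assms by auto
  have "real_of_int n > 0" unfolding n[symmetric] using aa assms(5) by (simp add: inner_coroot)
  then have npos: "n > 0" by simp
  have "real_of_int m > 0" unfolding m[symmetric]
    using aa assms(5) by (simp add: inner_coroot inner_commute)
  then have mpos: "m > 0" by simp
  have "real_of_int (n * m) = (\<alpha> \<bullet> coroot \<beta>) * (\<beta> \<bullet> coroot \<alpha>)"
    using n m by simp
  also have "\<dots> = 4 * (\<alpha> \<bullet> \<beta>)^2 / ((\<alpha> \<bullet> \<alpha>) * (\<beta> \<bullet> \<beta>))"
    using aa by (simp add: inner_coroot inner_commute power2_eq_square field_simps)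
  also have "\<dots> < 4"
    using root_inner_strict_Cauchy_Schwarz[OF assms(1-4)] aa by (simp add: field_simps)
  finally have "real_of_int (n * m) < of_int 4" by simp
  then have "n * m < 4" by (simp only: of_int_less_iff)
  then have "n = 1 \<or> m = 1"
  proof (rule contrapos_pp)
    assume "\<not> (n = 1 \<or> m = 1)"
    then have "n \<ge> 2" "m \<ge> 2" using npos mpos by auto
    then have "2 * 2 \<le> n * m" by (intro mult_mono) auto
    then show "\<not> n * m < 4" by simp
  qed
  then show ?thesis
  proof
    assume "n = 1"
    then have "refl \<beta> \<alpha> = \<alpha> - \<beta>" using n by (simp add: refl_def)
    then show ?thesis using refl_root assms by metis
  next
    assume "m = 1"
    then have "refl \<alpha> \<beta> = \<beta> - \<alpha>" using m by (simp add: refl_def)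
    then have "\<beta> - \<alpha> \<in> \<Phi>" using refl_root assms by metis
    from neg_root[OF this] show ?thesis by simp
  qed
qed

lemma root_add_root:
  assumes "\<alpha> \<in> \<Phi>" "\<beta> \<in> \<Phi>" "\<beta> \<noteq> - \<alpha>" "\<alpha> \<bullet> \<beta> < 0"
  shows "\<alpha> + \<beta> \<in> \<Phi>"
proof -
  have "\<alpha> \<bullet> \<alpha> > 0" using root_nonzero assms by auto
  then have "\<beta> \<noteq> \<alpha>" using assms(4) by (metis inner_ge_zero not_less)
  then have "- \<beta> \<noteq> - \<alpha>" by simp
  moreover have "- \<beta> \<noteq> \<alpha>" using assms(3) by auto
  ultimately have "\<alpha> - (- \<beta>) \<in> \<Phi>"
    using root_diff_root[of \<alpha> "-\<beta>"] assms neg_root by (simp add: inner_minus_right)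
  then show ?thesis by simp
qed

definition "Delta = simple_roots P"

lemma simple_in_P: "Delta \<subseteq> P" by (auto simp: Delta_def simple_roots_def)

lemma finite_Delta: "finite Delta" using simple_in_P finite_P finite_subset by blast

lemma simple_inner_v: "\<gamma> \<in> Delta \<Longrightarrow> \<gamma> \<bullet> v > 0"
  using simple_in_P P_inner_v by auto

lemma simple_root: "\<gamma> \<in> Delta \<Longrightarrow> \<gamma> \<in> \<Phi>"
  using simple_in_P P_subset by auto

definition "num_below x = card {\<beta>\<in>P. \<beta> \<bullet> v < x \<bullet> v}"

lemma num_below_less: assumes "\<beta> \<in> P" "\<beta> \<bullet> v < \<alpha> \<bullet> v" shows "num_below \<beta> < num_below \<alpha>"
  unfolding num_below_def
  by (rule psubset_card_mono) (use finite_P assms in auto)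

lemma P_nonneg_comb: "\<alpha> \<in> P \<Longrightarrow> \<exists>c::'a\<Rightarrow>nat. \<alpha> = (\<Sum>\<gamma>\<in>Delta. real (c \<gamma>) *\<^sub>R \<gamma>)"
proof (induction "num_below \<alpha>" arbitrary: \<alpha> rule: less_induct)
  case less
  show ?case
  proof (cases "\<alpha> \<in> Delta")
    case True
    show ?thesis
      by (rule exI[of _ "\<lambda>\<gamma>. if \<gamma> = \<alpha> then 1 else 0"])
         (simp add: sum_single_coeff_1 finite_Delta True)
  next
    case False
    then obtain \<beta> \<gamma> where bg: "\<beta> \<in> P" "\<gamma> \<in> P" "\<alpha> = \<beta> + \<gamma>"
      using less.prems by (auto simp: Delta_def simple_roots_def)
    have "\<beta> \<bullet> v < \<alpha> \<bullet> v" "\<gamma> \<bullet> v < \<alpha> \<bullet> v"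
      using bg P_inner_v by (auto simp: inner_add_left)
    then have "num_below \<beta> < num_below \<alpha>" "num_below \<gamma> < num_below \<alpha>"
      using num_below_less bg by auto
    then obtain cb cg where "\<beta> = (\<Sum>\<gamma>\<in>Delta. real (cb \<gamma>) *\<^sub>R \<gamma>)" "\<gamma> = (\<Sum>\<gamma>\<in>Delta. real (cg \<gamma>) *\<^sub>R \<gamma>)"
      using less.hyps bg by blast
    then show ?thesis
      by (intro exI[of _ "\<lambda>x. cb x + cg x"]) (simp add: bg scaleR_add_left sum.distrib)
  qed
qed

lemma simple_inner_nonpos:
  assumes "\<gamma> \<in> Delta" "\<delta> \<in> Delta" "\<gamma> \<noteq> \<delta>"
  shows "\<gamma> \<bullet> \<delta> \<le> 0"
proof (rule ccontr)
  assume "\<not> ?thesis"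
  then have pos: "\<gamma> \<bullet> \<delta> > 0" by simp
  have gP: "\<gamma> \<in> P" "\<delta> \<in> P" using assms simple_in_P by auto
  have "\<delta> \<noteq> - \<gamma>" using gP neg_notin_P by auto
  then have d: "\<gamma> - \<delta> \<in> \<Phi>"
    using root_diff_root[of \<gamma> \<delta>] assms pos simple_root by auto
  show False
  proof (cases "\<gamma> - \<delta> \<in> P")
    case True
    have nd: "\<forall>\<beta>\<in>P. \<forall>\<gamma>'\<in>P. \<gamma> \<noteq> \<beta> + \<gamma>'"
      using assms(1) by (auto simp: Delta_def simple_roots_def)
    then have "\<gamma> \<noteq> \<delta> + (\<gamma> - \<delta>)" using gP True by blast
    then show False by simp
  next
    case False
    then have "\<delta> - \<gamma> \<in> P" using root_or_neg_in_P[OF d] by simp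
    have nd: "\<forall>\<beta>\<in>P. \<forall>\<gamma>'\<in>P. \<delta> \<noteq> \<beta> + \<gamma>'"
      using assms(2) by (auto simp: Delta_def simple_roots_def)
    then have "\<delta> \<noteq> \<gamma> + (\<delta> - \<gamma>)"
      using gP \<open>\<delta> - \<gamma> \<in> P\<close> by blast
    then show False by simp
  qed
qed

lemma independent_Delta: "independent Delta"
  by (rule independent_if_obtuse[OF finite_Delta simple_inner_nonpos simple_inner_v])

lemma P_in_span_Delta: "\<alpha> \<in> P \<Longrightarrow> \<alpha> \<in> span Delta"
  using P_nonneg_comb by (metis (no_types, lifting) span_base span_scale span_sum)

lemma root_in_span_Delta: "\<alpha> \<in> \<Phi> \<Longrightarrow> \<alpha> \<in> span Delta"
  using root_or_neg_in_P P_in_span_Delta span_neg by fastforce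

lemma span_Delta: "span Delta = UNIV"
proof -
  have "\<Phi> \<subseteq> span Delta" using root_in_span_Delta by auto
  then have "span \<Phi> \<subseteq> span Delta" by (simp add: span_minimal)
  then show ?thesis using span_Phi by auto
qed

lemma card_Delta: "card Delta = DIM('a)"
  using basis_card_eq_dim[of Delta UNIV] independent_Delta span_Delta by (simp add: dim_UNIV)

lemma Delta_coeffs_eq:
  "(\<Sum>\<gamma>\<in>Delta. a \<gamma> *\<^sub>R \<gamma>) = (\<Sum>\<gamma>\<in>Delta. b \<gamma> *\<^sub>R \<gamma>) \<Longrightarrow> \<gamma> \<in> Delta \<Longrightarrow> a \<gamma> = b \<gamma>"
  using independent_coeffs_eq[OF independent_Delta finite_Delta] by blast

lemma positive_coeff_imp_P:
  assumes "\<alpha> \<in> \<Phi>" "\<alpha> = (\<Sum>\<gamma>\<in>Delta. a \<gamma> *\<^sub>R \<gamma>)" "\<gamma>0 \<in> Delta" "a \<gamma>0 > 0"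
  shows "\<alpha> \<in> P"
proof (rule ccontr)
  assume "\<alpha> \<notin> P"
  then have "- \<alpha> \<in> P" using root_or_neg_in_P assms by auto
  then obtain c where c: "- \<alpha> = (\<Sum>\<gamma>\<in>Delta. real (c \<gamma>) *\<^sub>R \<gamma>)"
    using P_nonneg_comb by blast
  then have "\<alpha> = - (\<Sum>\<gamma>\<in>Delta. real (c \<gamma>) *\<^sub>R \<gamma>)"
    by (metis minus_minus)
  then have "\<alpha> = (\<Sum>\<gamma>\<in>Delta. (- real (c \<gamma>)) *\<^sub>R \<gamma>)"
    by (simp add: sum_negf)
  then have "(\<Sum>\<gamma>\<in>Delta. a \<gamma> *\<^sub>R \<gamma>) = (\<Sum>\<gamma>\<in>Delta. (- real (c \<gamma>)) *\<^sub>R \<gamma>)"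
    using assms(2) by simp
  from Delta_coeffs_eq[OF this assms(3)] have "a \<gamma>0 = - real (c \<gamma>0)" .
  then show False using assms by simp
qed

lemma refl_simple_P:
  assumes "\<alpha>i \<in> Delta" "\<beta> \<in> P" "\<beta> \<noteq> \<alpha>i"
  shows "refl \<alpha>i \<beta> \<in> P"
proof -
  obtain c where c: "\<beta> = (\<Sum>\<gamma>\<in>Delta. real (c \<gamma>) *\<^sub>R \<gamma>)"
    using P_nonneg_comb assms by blast
  have "\<exists>j\<in>Delta. j \<noteq> \<alpha>i \<and> c j > 0"
  proof (rule ccontr)
    assume "\<not> ?thesis"
    then have "\<forall>j\<in>Delta. j \<noteq> \<alpha>i \<longrightarrow> c j = 0" by auto
    then have bc: "\<beta> = real (c \<alpha>i) *\<^sub>R \<alpha>i" using c assms(1)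
      by (simp add: sum.remove[OF finite_Delta assms(1)])
    moreover have "\<beta> \<in> \<Phi>" using assms P_subset by auto
    ultimately have "real (c \<alpha>i) = 1 \<or> real (c \<alpha>i) = -1"
      using root_multiple simple_root assms by metis
    then have "real (c \<alpha>i) = 1" by auto
    then show False using bc assms by simp
  qed
  then obtain j where j: "j \<in> Delta" "j \<noteq> \<alpha>i" "c j > 0" by blast
  define n where "n = \<beta> \<bullet> coroot \<alpha>i"
  have eqr: "refl \<alpha>i \<beta> = (\<Sum>\<gamma>\<in>Delta. (real (c \<gamma>) - (if \<gamma> = \<alpha>i then n else 0)) *\<^sub>R \<gamma>)"
    using assms(1) finite_Delta
    by (simp only: refl_def n_def[symmetric] scaleR_diff_left sum_subtractf sum_single_coeff[OF finite_Delta assms(1)] c[symmetric])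
  have inr: "refl \<alpha>i \<beta> \<in> \<Phi>" using refl_root simple_root assms P_subset by auto
  show ?thesis by (rule positive_coeff_imp_P[OF inr eqr j(1)]) (use j in simp)
qed

lemma P_inner_simple_pos:
  assumes "\<beta> \<in> P" shows "\<exists>\<alpha>i\<in>Delta. \<beta> \<bullet> \<alpha>i > 0"
proof (rule ccontr)
  assume "\<not> ?thesis"
  then have le: "\<forall>\<alpha>i\<in>Delta. \<beta> \<bullet> \<alpha>i \<le> 0" by auto
  obtain c where c: "\<beta> = (\<Sum>\<gamma>\<in>Delta. real (c \<gamma>) *\<^sub>R \<gamma>)"
    using P_nonneg_comb assms by blast
  have "\<beta> \<bullet> \<beta> = (\<Sum>\<gamma>\<in>Delta. real (c \<gamma>) * (\<beta> \<bullet> \<gamma>))"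
    by (subst (2) c) (simp add: inner_sum_right)
  also have "\<dots> \<le> 0" using le by (intro sum_nonpos) (simp add: mult_nonneg_nonpos)
  finally have "\<beta> \<bullet> \<beta> = 0" using inner_ge_zero[of \<beta>] by linarith
  then show False using root_nonzero assms P_subset by auto
qed

lemma simple_reflection_descent:
  assumes "\<beta> \<in> P" "\<beta> \<notin> Delta"
  obtains \<alpha>i where "\<alpha>i \<in> Delta" "\<beta> \<bullet> \<alpha>i > 0" "refl \<alpha>i \<beta> \<in> P"
    "num_below (refl \<alpha>i \<beta>) < num_below \<beta>"
proof -
  obtain \<alpha>i where ai: "\<alpha>i \<in> Delta" "\<beta> \<bullet> \<alpha>i > 0"
    using P_inner_simple_pos assms(1) by blast
  have "\<beta> \<noteq> \<alpha>i" using assms(2) ai(1) by auto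
  then have P: "refl \<alpha>i \<beta> \<in> P" using refl_simple_P ai(1) assms(1) by blast
  have "\<alpha>i \<noteq> 0" using ai(1) simple_root root_nonzero by blast
  then have "\<beta> \<bullet> coroot \<alpha>i > 0" using ai(2) by (simp add: inner_coroot)
  then have "refl \<alpha>i \<beta> \<bullet> v < \<beta> \<bullet> v"
    using simple_inner_v[OF ai(1)] by (simp add: refl_def inner_diff_left)
  then show ?thesis using that ai P num_below_less by blast
qed

lemma coroot_P_nonneg_comb:
  "\<beta> \<in> P \<Longrightarrow> \<exists>c::'a\<Rightarrow>nat. coroot \<beta> = (\<Sum>\<gamma>\<in>Delta. real (c \<gamma>) *\<^sub>R coroot \<gamma>)"
proof (induction "num_below \<beta>" arbitrary: \<beta> rule: less_induct)
  case less
  show ?case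
  proof (cases "\<beta> \<in> Delta")
    case True
    show ?thesis
      by (rule exI[of _ "\<lambda>\<gamma>. if \<gamma> = \<beta> then 1 else 0"])
         (simp add: sum_single_coeff_1 finite_Delta True)
  next
    case False
    then obtain \<alpha>i where ai: "\<alpha>i \<in> Delta" "\<beta> \<bullet> \<alpha>i > 0" "refl \<alpha>i \<beta> \<in> P"
      "num_below (refl \<alpha>i \<beta>) < num_below \<beta>"
      using simple_reflection_descent less.prems by blast
    obtain c where c: "coroot (refl \<alpha>i \<beta>) = (\<Sum>\<gamma>\<in>Delta. real (c \<gamma>) *\<^sub>R coroot \<gamma>)"
      using less.hyps ai(3,4) by blast
    obtain n where n: "\<alpha>i \<bullet> coroot \<beta> = of_int n"
      using root_coroot_int ai(1) less.prems simple_root P_subset by blast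
    have "\<beta> \<noteq> 0" using less.prems P_subset root_nonzero by blast
    then have "\<alpha>i \<bullet> coroot \<beta> > 0"
      using ai(2) by (simp add: inner_coroot inner_commute)
    then have "\<alpha>i \<bullet> coroot \<beta> = real (nat n)" using n by simp
    moreover have "\<alpha>i \<noteq> 0" using ai(1) simple_root root_nonzero by blast
    ultimately have "coroot \<beta> = coroot (refl \<alpha>i \<beta>) + real (nat n) *\<^sub>R coroot \<alpha>i"
      by (simp add: coroot_refl_eq)
    then show ?thesis using c
      by (intro exI[of _ "\<lambda>\<gamma>. c \<gamma> + (if \<gamma> = \<alpha>i then nat n else 0)"])
         (simp only: sum_coeff_add_single[OF finite_Delta ai(1)])
  qed
qed

lemma coroot_inj: "\<alpha> \<in> \<Phi> \<Longrightarrow> \<beta> \<in> \<Phi> \<Longrightarrow> coroot \<alpha> = coroot \<beta> \<Longrightarrow> \<alpha> = \<beta>"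
  by (metis coroot_coroot root_nonzero)

lemma coroot_inner_v: "\<beta> \<in> \<Phi> \<Longrightarrow> coroot \<beta> \<bullet> v = (2 / (\<beta> \<bullet> \<beta>)) * (\<beta> \<bullet> v)"
  by (simp add: coroot_def)

lemma coroot_P_inner_v:
  assumes "\<beta> \<in> P" shows "coroot \<beta> \<bullet> v > 0"
proof -
  have "\<beta> \<bullet> \<beta> > 0" using assms P_subset root_nonzero by auto
  then show ?thesis using P_inner_v[OF assms] by (simp add: coroot_def)
qed

lemma coroot_not_P_inner_v: "\<beta> \<in> \<Phi> \<Longrightarrow> \<beta> \<notin> P \<Longrightarrow> coroot \<beta> \<bullet> v < 0"
proof -
  assume a: "\<beta> \<in> \<Phi>" "\<beta> \<notin> P"
  then have "- \<beta> \<in> P" using root_or_neg_in_P by auto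
  then have "coroot (- \<beta>) \<bullet> v > 0" by (rule coroot_P_inner_v)
  then show ?thesis by simp
qed

lemma root_system_coroots: "root_system (coroot ` \<Phi>)"
  unfolding root_system_def
proof (intro conjI ballI allI impI)
  show "finite (coroot ` \<Phi>)" using finite_Phi by simp
  show "0 \<notin> coroot ` \<Phi>" using root_nonzero by auto
  have "\<Phi> \<subseteq> span (coroot ` \<Phi>)"
  proof
    fix \<alpha> assume a: "\<alpha> \<in> \<Phi>"
    have "\<alpha> = ((\<alpha> \<bullet> \<alpha>) / 2) *\<^sub>R coroot \<alpha>"
      using root_nonzero[OF a] by (simp add: coroot_def)
    then show "\<alpha> \<in> span (coroot ` \<Phi>)" using a by (metis imageI span_base span_scale)
  qed
  then have "span \<Phi> \<subseteq> span (coroot ` \<Phi>)" by (simp add: span_minimal)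
  then show "span (coroot ` \<Phi>) = UNIV" using span_Phi by auto
next
  fix a b assume "a \<in> coroot ` \<Phi>" "b \<in> coroot ` \<Phi>"
  then obtain \<alpha> \<beta> where ab: "\<alpha> \<in> \<Phi>" "\<beta> \<in> \<Phi>" "a = coroot \<alpha>" "b = coroot \<beta>"
    by auto
  have "refl a b = coroot (refl \<alpha> \<beta>)"
    using ab root_nonzero by (simp add: refl_coroot coroot_refl)
  then show "refl a b \<in> coroot ` \<Phi>" using refl_root ab by auto
  have "b \<bullet> coroot a = \<alpha> \<bullet> coroot \<beta>"
    using ab root_nonzero by (simp add: coroot_coroot inner_commute)
  then show "b \<bullet> coroot a \<in> \<int>" using root_coroot_Ints ab by simp
next
  fix a c assume a: "a \<in> coroot ` \<Phi>" and ca: "c *\<^sub>R a \<in> coroot ` \<Phi>"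
  then obtain \<alpha> \<beta> where ab: "\<alpha> \<in> \<Phi>" "\<beta> \<in> \<Phi>" "a = coroot \<alpha>" "c *\<^sub>R a = coroot \<beta>"
    by auto
  have bnz: "\<beta> \<bullet> \<beta> \<noteq> 0" "\<alpha> \<bullet> \<alpha> \<noteq> 0"
    using root_nonzero ab by auto
  define d where "d = (\<beta> \<bullet> \<beta>) / 2 * (c * (2 / (\<alpha> \<bullet> \<alpha>)))"
  have "\<beta> = ((\<beta> \<bullet> \<beta>) / 2) *\<^sub>R coroot \<beta>"
    using bnz by (simp add: coroot_def)
  also have "coroot \<beta> = c *\<^sub>R ((2 / (\<alpha> \<bullet> \<alpha>)) *\<^sub>R \<alpha>)"
    using ab by (simp add: coroot_def)
  finally have bd: "\<beta> = d *\<^sub>R \<alpha>" by (simp only: scaleR_scaleR d_def)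
  then have "d = 1 \<or> d = -1" using root_multiple ab by metis
  then have "\<beta> = \<alpha> \<or> \<beta> = - \<alpha>" using bd by auto
  then have "coroot \<beta> = a \<or> coroot \<beta> = - a" using ab by auto
  then have "(c - 1) *\<^sub>R a = 0 \<or> (c + 1) *\<^sub>R a = 0"
    using ab by (auto simp: algebra_simps)
  moreover have "a \<noteq> 0" using ab root_nonzero by simp
  ultimately show "c = 1 \<or> c = -1" by auto
qed

lemma pos_root_system_coroots: "pos_root_system (coroot ` \<Phi>) (coroot ` P) v"
proof
  show "root_system (coroot ` \<Phi>)" by (rule root_system_coroots)
  show "\<forall>\<alpha>\<in>coroot ` \<Phi>. \<alpha> \<bullet> v \<noteq> 0"
    using coroot_inner_v v_regular root_nonzero by auto
  show "coroot ` P = {\<alpha> \<in> coroot ` \<Phi>. 0 < \<alpha> \<bullet> v}"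
  proof
    show "coroot ` P \<subseteq> {\<alpha> \<in> coroot ` \<Phi>. 0 < \<alpha> \<bullet> v}"
      using coroot_P_inner_v P_subset by auto
    show "{\<alpha> \<in> coroot ` \<Phi>. 0 < \<alpha> \<bullet> v} \<subseteq> coroot ` P"
      using coroot_not_P_inner_v by fastforce
  qed
qed

lemma orthogonal_Delta_zero:
  assumes "\<forall>\<beta>\<in>Delta. x \<bullet> \<beta> = 0" shows "x = 0"
proof -
  have "orthogonal x x" using orthogonal_to_span[of x Delta x] span_Delta assms
    by (auto simp: orthogonal_def)
  then show ?thesis by (simp add: orthogonal_def)
qed

lemma orthogonal_simple_coroots_zero:
  assumes "\<forall>\<beta>\<in>Delta. x \<bullet> coroot \<beta> = 0" shows "x = 0"
  using assms simple_root root_nonzero by (intro orthogonal_Delta_zero) (auto simp: coroot_def)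

lemma simple_inner_self_pos: "\<gamma> \<in> Delta \<Longrightarrow> \<gamma> \<bullet> \<gamma> > 0"
  using simple_root root_nonzero by auto

lemma sign_inner_simple_coroot:
  "\<gamma> \<in> Delta \<Longrightarrow>
    (x \<bullet> coroot \<gamma> > 0 \<longleftrightarrow> x \<bullet> \<gamma> > 0) \<and> (x \<bullet> coroot \<gamma> < 0 \<longleftrightarrow> x \<bullet> \<gamma> < 0) \<and>
    (x \<bullet> coroot \<gamma> \<ge> 0 \<longleftrightarrow> x \<bullet> \<gamma> \<ge> 0) \<and> (x \<bullet> coroot \<gamma> \<le> 0 \<longleftrightarrow> x \<bullet> \<gamma> \<le> 0)"
proof -
  assume g: "\<gamma> \<in> Delta"
  obtain k where k: "k > 0" "x \<bullet> coroot \<gamma> = k * (x \<bullet> \<gamma>)"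
    using simple_inner_self_pos[OF g]
    by (intro that[of "2 / (\<gamma> \<bullet> \<gamma>)"]) (auto simp: coroot_def)
  show ?thesis unfolding k(2)
    using k(1) by (simp add: zero_less_mult_iff mult_less_0_iff zero_le_mult_iff mult_le_0_iff)
qed

lemma coroot_inner_v_pos_imp_P: "y \<in> coroot ` \<Phi> \<Longrightarrow> y \<bullet> v > 0 \<Longrightarrow> y \<in> coroot ` P"
  using coroot_not_P_inner_v by fastforce

lemma Delta_nonempty: "Delta \<noteq> {}"
  using card_Delta by auto

lemma P_nonempty: "P \<noteq> {}" using Delta_nonempty simple_in_P by auto

definition "dom_le x y \<longleftrightarrow> (\<exists>c::'a\<Rightarrow>nat. y - x = (\<Sum>\<gamma>\<in>Delta. real (c \<gamma>) *\<^sub>R coroot \<gamma>))"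

lemma dom_le_refl: "dom_le x x"
  unfolding dom_le_def by (rule exI[of _ "\<lambda>_. 0"]) simp

lemma dom_le_trans: "dom_le x y \<Longrightarrow> dom_le y z \<Longrightarrow> dom_le x z"
  unfolding dom_le_def
proof (elim exE)
  fix c d
  assume "y - x = (\<Sum>\<gamma>\<in>Delta. real (c \<gamma>) *\<^sub>R coroot \<gamma>)"
    and "z - y = (\<Sum>\<gamma>\<in>Delta. real (d \<gamma>) *\<^sub>R coroot \<gamma>)"
  then have "z - x = (\<Sum>\<gamma>\<in>Delta. real (c \<gamma> + d \<gamma>) *\<^sub>R coroot \<gamma>)"
    by (simp add: scaleR_add_left sum.distrib algebra_simps)
  then show "\<exists>c::'a\<Rightarrow>nat. z - x = (\<Sum>\<gamma>\<in>Delta. real (c \<gamma>) *\<^sub>R coroot \<gamma>)"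
    by (rule exI[of _ "\<lambda>\<gamma>. c \<gamma> + d \<gamma>"])
qed

lemma coroot_comb_inner_v: "(\<Sum>\<gamma>\<in>Delta. real (c \<gamma>) *\<^sub>R coroot \<gamma>) \<bullet> v
    = (\<Sum>\<gamma>\<in>Delta. real (c \<gamma>) * (coroot \<gamma> \<bullet> v))"
  by (simp add: inner_sum_left)

lemma simple_coroot_inner_v: "\<gamma> \<in> Delta \<Longrightarrow> coroot \<gamma> \<bullet> v > 0"
  using coroot_P_inner_v simple_in_P by auto

lemma dom_le_inner_v: "dom_le x y \<Longrightarrow> x \<bullet> v \<le> y \<bullet> v"
proof -
  assume "dom_le x y"
  then obtain c where c: "y - x = (\<Sum>\<gamma>\<in>Delta. real (c \<gamma>) *\<^sub>R coroot \<gamma>)"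
    by (auto simp: dom_le_def)
  have "(y - x) \<bullet> v \<ge> 0" unfolding c coroot_comb_inner_v
    by (intro sum_nonneg) (simp add: simple_coroot_inner_v less_imp_le)
  then show ?thesis by (simp add: inner_diff_left)
qed

lemma coroot_comb_inner_v_pos:
  assumes "\<gamma>0 \<in> Delta" "c \<gamma>0 > 0"
  shows "(\<Sum>\<gamma>\<in>Delta. real (c \<gamma>) *\<^sub>R coroot \<gamma>) \<bullet> v > 0"
  unfolding coroot_comb_inner_v using assms finite_Delta
  by (intro sum_pos2[of _ \<gamma>0]) (auto simp: simple_coroot_inner_v less_imp_le)

lemma dom_le_inner_v_strict: "dom_le x y \<Longrightarrow> x \<noteq> y \<Longrightarrow> x \<bullet> v < y \<bullet> v"
proof -
  assume "dom_le x y" "x \<noteq> y"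
  then obtain c where c: "y - x = (\<Sum>\<gamma>\<in>Delta. real (c \<gamma>) *\<^sub>R coroot \<gamma>)"
    by (auto simp: dom_le_def)
  have "\<exists>\<gamma>0\<in>Delta. c \<gamma>0 > 0"
  proof (rule ccontr)
    assume "\<not> ?thesis"
    then have "\<forall>\<gamma>\<in>Delta. c \<gamma> = 0" by auto
    then have "y - x = 0" unfolding c by simp
    then show False using \<open>x \<noteq> y\<close> by simp
  qed
  then have "(y - x) \<bullet> v > 0" unfolding c using coroot_comb_inner_v_pos by blast
  then show ?thesis by (simp add: inner_diff_left)
qed

lemma dom_le_antisym: "dom_le x y \<Longrightarrow> dom_le y x \<Longrightarrow> x = y"
  using dom_le_inner_v dom_le_inner_v_strict by fastforce

lemma dom_le_add_simple_coroot: "\<alpha>i \<in> Delta \<Longrightarrow> dom_le x (x + coroot \<alpha>i)"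
  unfolding dom_le_def
  by (rule exI[of _ "\<lambda>\<gamma>. if \<gamma> = \<alpha>i then 1 else 0"]) (simp add: sum_single_coeff_1 finite_Delta)

lemma fund_weight_exists:
  assumes "\<alpha> \<in> Delta" shows "\<exists>w. \<forall>\<beta>\<in>Delta. w \<bullet> coroot \<beta> = (if \<beta> = \<alpha> then 1 else 0)"
proof -
  define L where "L x = (\<Sum>\<beta>\<in>Delta. (x \<bullet> coroot \<beta>) *\<^sub>R \<beta>)" for x
  have lin: "linear L"
    by (rule linearI) (simp_all add: L_def inner_add_left scaleR_add_left sum.distrib scaleR_sum_right)
  have "inj L"
  proof (rule injI)
    fix x y assume "L x = L y"
    then have "(\<Sum>\<beta>\<in>Delta. (x \<bullet> coroot \<beta>) *\<^sub>R \<beta>) = (\<Sum>\<beta>\<in>Delta. (y \<bullet> coroot \<beta>) *\<^sub>R \<beta>)"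
      by (simp add: L_def)
    then have "\<forall>\<beta>\<in>Delta. (x - y) \<bullet> coroot \<beta> = 0"
      using Delta_coeffs_eq[of "\<lambda>\<beta>. x \<bullet> coroot \<beta>" "\<lambda>\<beta>. y \<bullet> coroot \<beta>"]
      by (simp add: inner_diff_left)
    then have "x - y = 0" by (rule orthogonal_simple_coroots_zero)
    then show "x = y" by simp
  qed
  then have "surj L" using linear_injective_imp_surjective lin by blast
  then obtain w where w: "L w = \<alpha>" by (metis surjD)
  have "\<alpha> = (\<Sum>\<beta>\<in>Delta. (if \<beta> = \<alpha> then 1 else 0) *\<^sub>R \<beta>)"
    using sum_single_coeff[OF finite_Delta assms, of 1 "\<lambda>x. x"] by simp
  then have "(\<Sum>\<beta>\<in>Delta. (w \<bullet> coroot \<beta>) *\<^sub>R \<beta>) = (\<Sum>\<beta>\<in>Delta. (if \<beta> = \<alpha> then 1 else 0) *\<^sub>R \<beta>)"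
    using w by (simp add: L_def)
  from Delta_coeffs_eq[OF this] show ?thesis by blast
qed

lemma fund_weight_coroot:
  assumes "\<alpha> \<in> Delta" "\<beta> \<in> Delta"
  shows "fund_weight P \<alpha> \<bullet> coroot \<beta> = (if \<beta> = \<alpha> then 1 else 0)"
proof -
  have "\<exists>!w. \<forall>\<beta>\<in>Delta. w \<bullet> coroot \<beta> = (if \<beta> = \<alpha> then 1 else 0)"
  proof (rule ex_ex1I)
    show "\<exists>w. \<forall>\<beta>\<in>Delta. w \<bullet> coroot \<beta> = (if \<beta> = \<alpha> then 1 else 0)"
      using fund_weight_exists assms by blast
    fix w1 w2
    assume "\<forall>\<beta>\<in>Delta. w1 \<bullet> coroot \<beta> = (if \<beta> = \<alpha> then 1 else 0)"
      and "\<forall>\<beta>\<in>Delta. w2 \<bullet> coroot \<beta> = (if \<beta> = \<alpha> then 1 else 0)"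
    then have "\<forall>\<beta>\<in>Delta. (w1 - w2) \<bullet> coroot \<beta> = 0"
      by (simp add: inner_diff_left)
    then have "w1 - w2 = 0" by (rule orthogonal_simple_coroots_zero)
    then show "w1 = w2" by simp
  qed
  then have "\<forall>\<beta>\<in>Delta. fund_weight P \<alpha> \<bullet> coroot \<beta> = (if \<beta> = \<alpha> then 1 else 0)"
    unfolding fund_weight_def Delta_def[symmetric] by (rule theI')
  then show ?thesis using assms by blast
qed

lemma rho_simple_coroot: "\<beta> \<in> Delta \<Longrightarrow> rho P \<bullet> coroot \<beta> = 1"
proof -
  assume b: "\<beta> \<in> Delta"
  have "rho P \<bullet> coroot \<beta> = (\<Sum>\<alpha>\<in>Delta. fund_weight P \<alpha> \<bullet> coroot \<beta>)"
    by (simp add: rho_def Delta_def inner_sum_left)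
  also have "\<dots> = (\<Sum>\<alpha>\<in>Delta. if \<alpha> = \<beta> then 1 else 0)"
    by (rule sum.cong) (auto simp: fund_weight_coroot b)
  also have "\<dots> = 1" using b finite_Delta by simp
  finally show ?thesis .
qed

lemma rho_coroot_comb: "rho P \<bullet> (\<Sum>\<gamma>\<in>Delta. real (c \<gamma>) *\<^sub>R coroot \<gamma>) = real (\<Sum>\<gamma>\<in>Delta. c \<gamma>)"
  by (simp add: inner_sum_right rho_simple_coroot)

lemma rho_dom_le_mono: "dom_le x y \<Longrightarrow> rho P \<bullet> x \<le> rho P \<bullet> y"
proof -
  assume "dom_le x y"
  then obtain c where "y - x = (\<Sum>\<gamma>\<in>Delta. real (c \<gamma>) *\<^sub>R coroot \<gamma>)"
    by (auto simp: dom_le_def)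
  then have "rho P \<bullet> (y - x) \<ge> 0" by (simp add: rho_coroot_comb sum_nonneg)
  then show ?thesis by (simp add: inner_diff_right)
qed

lemma rho_coroot_P: "\<beta> \<in> P \<Longrightarrow> \<exists>n::nat. rho P \<bullet> coroot \<beta> = real n \<and> n \<ge> 1"
proof -
  assume b: "\<beta> \<in> P"
  obtain c where c: "coroot \<beta> = (\<Sum>\<gamma>\<in>Delta. real (c \<gamma>) *\<^sub>R coroot \<gamma>)"
    using coroot_P_nonneg_comb b by blast
  have "\<exists>\<gamma>\<in>Delta. c \<gamma> > 0"
  proof (rule ccontr)
    assume "\<not> ?thesis"
    then have "coroot \<beta> = 0" using c by simp
    then show False using b P_subset root_nonzero by auto
  qed
  then obtain \<gamma> where "\<gamma> \<in> Delta" "c \<gamma> > 0" by blast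
  then have "(\<Sum>\<gamma>\<in>Delta. c \<gamma>) \<ge> 1" using finite_Delta
    by (metis One_nat_def Suc_leI le_trans member_le_sum zero_le)
  then show ?thesis using c rho_coroot_comb by metis
qed

lemma rho_coroot_int: "\<beta> \<in> \<Phi> \<Longrightarrow> \<exists>n::int. rho P \<bullet> coroot \<beta> = of_int n"
proof -
  assume b: "\<beta> \<in> \<Phi>"
  show ?thesis
  proof (cases "\<beta> \<in> P")
    case True then show ?thesis using rho_coroot_P by (metis of_int_of_nat_eq)
  next
    case False
    then have "- \<beta> \<in> P" using root_or_neg_in_P b by auto
    then obtain n::nat where "rho P \<bullet> coroot (- \<beta>) = real n"
      using rho_coroot_P by blast
    then have "rho P \<bullet> coroot \<beta> = of_int (- int n)" by simp
    then show ?thesis by blast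
  qed
qed

end

section \<open>The highest coroot and the Coxeter number\<close>

locale irr_pos_root_system = pos_root_system +
  assumes irreducible: "irreducible_root_system \<Phi>"
begin

lemma P_in_span_orthogonal_parts:
  assumes parts: "D1 \<union> D2 = Delta" and orth: "\<forall>a\<in>D1. \<forall>b\<in>D2. a \<bullet> b = 0" and "\<beta> \<in> P"
  shows "\<beta> \<in> span D1 \<or> \<beta> \<in> span D2"
  using assms(3)
proof (induction "num_below \<beta>" arbitrary: \<beta> rule: less_induct)
  case less
  show ?case
  proof (cases "\<beta> \<in> Delta")
    case True
    then show ?thesis using parts by (auto intro: span_base)
  next
    case False
    then obtain \<alpha>i where ai: "\<alpha>i \<in> Delta" "refl \<alpha>i \<beta> \<in> P" "num_below (refl \<alpha>i \<beta>) < num_below \<beta>"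
      using simple_reflection_descent less.prems by metis
    then have "refl \<alpha>i \<beta> \<in> span D1 \<or> refl \<alpha>i \<beta> \<in> span D2"
      using less.hyps by blast
    moreover have "\<alpha>i \<in> D1 \<or> (\<forall>s\<in>D1. s \<bullet> \<alpha>i = 0)"
      using ai(1) parts orth by blast
    moreover have "\<alpha>i \<in> D2 \<or> (\<forall>s\<in>D2. s \<bullet> \<alpha>i = 0)"
      using ai(1) parts orth inner_commute by (metis Un_iff)
    ultimately have "refl \<alpha>i (refl \<alpha>i \<beta>) \<in> span D1 \<or> refl \<alpha>i (refl \<alpha>i \<beta>) \<in> span D2"
      using refl_in_span by blast
    moreover have "\<alpha>i \<noteq> 0" using ai(1) simple_root root_nonzero by blast
    ultimately show ?thesis by simp
  qed
qed

lemma Delta_connected: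
  assumes D1: "D1 \<subseteq> Delta" "D1 \<noteq> {}" "D1 \<noteq> Delta"
  shows "\<exists>a\<in>D1. \<exists>b\<in>Delta - D1. a \<bullet> b \<noteq> 0"
proof (rule ccontr)
  define D2 where "D2 = Delta - D1"
  assume "\<not> ?thesis"
  then have orth: "\<forall>a\<in>D1. \<forall>b\<in>D2. a \<bullet> b = 0" by (auto simp: D2_def)
  have parts: "D1 \<union> D2 = Delta" using D1 by (auto simp: D2_def)
  define \<Phi>1 where "\<Phi>1 = {\<beta>\<in>\<Phi>. \<beta> \<in> span D1}"
  define \<Phi>2 where "\<Phi>2 = {\<beta>\<in>\<Phi>. \<beta> \<in> span D2}"
  have "\<Phi>1 \<noteq> {}" "\<Phi>2 \<noteq> {}"
    using D1 simple_root by (auto simp: \<Phi>1_def \<Phi>2_def D2_def intro: span_base)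
  moreover have "\<Phi>1 \<union> \<Phi>2 = \<Phi>"
  proof -
    have "\<beta> \<in> span D1 \<or> \<beta> \<in> span D2" if "\<beta> \<in> \<Phi>" for \<beta>
      using root_or_neg_in_P[OF that] P_in_span_orthogonal_parts[OF parts orth] span_neg
      by (metis minus_minus)
    then show ?thesis by (auto simp: \<Phi>1_def \<Phi>2_def)
  qed
  moreover have "\<alpha> \<bullet> \<beta> = 0" if "\<alpha> \<in> \<Phi>1" "\<beta> \<in> \<Phi>2" for \<alpha> \<beta>
  proof -
    have "\<forall>a\<in>D1. a \<bullet> \<beta> = 0"
      using span_orthogonal[of \<beta> D2] orth that(2) by (auto simp: \<Phi>2_def inner_commute)
    then show ?thesis using span_orthogonal that(1) by (auto simp: \<Phi>1_def)
  qed
  ultimately show False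
    using irreducible unfolding irreducible_root_system_def by blast
qed

definition "maximal_coroot t \<longleftrightarrow> t \<in> coroot ` P \<and> (\<forall>y\<in>coroot ` P. dom_le t y \<longrightarrow> y = t)"

lemma maximal_corootD: "maximal_coroot t \<Longrightarrow> y \<in> coroot ` P \<Longrightarrow> dom_le t y \<Longrightarrow> y = t"
  unfolding maximal_coroot_def by blast

lemma maximal_coroot_above:
  assumes "\<beta> \<in> P" shows "\<exists>t. maximal_coroot t \<and> dom_le (coroot \<beta>) t"
proof -
  define S where "S = {y\<in>coroot ` P. dom_le (coroot \<beta>) y}"
  have finS: "finite S" using finite_P by (simp add: S_def)
  have neS: "coroot \<beta> \<in> S" using assms dom_le_refl by (simp add: S_def)
  define m where "m = Max ((\<lambda>y. y \<bullet> v) ` S)"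
  have "m \<in> (\<lambda>y. y \<bullet> v) ` S" unfolding m_def
    using finS neS by (intro Max_in) auto
  then obtain t where t: "t \<in> S" "t \<bullet> v = m" by auto
  have mx: "\<forall>y\<in>S. y \<bullet> v \<le> t \<bullet> v" using finS t by (auto simp: m_def)
  have "maximal_coroot t"
    unfolding maximal_coroot_def
  proof (intro conjI ballI impI)
    show "t \<in> coroot ` P" using t by (simp add: S_def)
    fix y assume y: "y \<in> coroot ` P" "dom_le t y"
    then have "y \<in> S" using t dom_le_trans by (auto simp: S_def)
    then have "y \<bullet> v \<le> t \<bullet> v" using mx by auto
    then show "y = t" using dom_le_inner_v_strict[OF y(2)] by fastforce
  qed
  then show ?thesis using t by (auto simp: S_def)
qed

lemma maximal_coroot_dominant:
  assumes "maximal_coroot t" "\<alpha>i \<in> Delta" shows "t \<bullet> \<alpha>i \<ge> 0"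
proof (rule ccontr)
  assume "\<not> ?thesis"
  then have neg: "t \<bullet> coroot \<alpha>i < 0"
    using sign_inner_simple_coroot[OF assms(2), of t] by simp
  have tP: "t \<in> coroot ` P" using assms by (simp add: maximal_coroot_def)
  then have tPhi: "t \<in> coroot ` \<Phi>" using P_subset by auto
  have aPhi: "coroot \<alpha>i \<in> coroot ` \<Phi>" using assms simple_root by auto
  have tv: "t \<bullet> v > 0" using tP coroot_P_inner_v by auto
  have av: "coroot \<alpha>i \<bullet> v > 0" using simple_coroot_inner_v assms by auto
  have "coroot \<alpha>i \<noteq> - t" using tv av by (auto simp: inner_minus_left)
  then have "t + coroot \<alpha>i \<in> coroot ` \<Phi>"
    using pos_root_system.root_add_root[OF pos_root_system_coroots tPhi aPhi _ neg] by simp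
  moreover have "(t + coroot \<alpha>i) \<bullet> v > 0" using tv av by (simp add: inner_add_left)
  ultimately have "t + coroot \<alpha>i \<in> coroot ` P" by (rule coroot_inner_v_pos_imp_P)
  moreover have "dom_le t (t + coroot \<alpha>i)"
    using assms by (simp add: dom_le_add_simple_coroot)
  ultimately have "t + coroot \<alpha>i = t" using maximal_corootD[OF assms(1)] by blast
  then show False using av by (auto simp: coroot_def)
qed

lemma coroot_comb_inner_simple_neg:
  assumes a: "a \<in> Delta" "c a > 0" and b: "b \<in> Delta" "c b = 0" and "a \<bullet> b \<noteq> 0"
  shows "(\<Sum>\<gamma>\<in>Delta. real (c \<gamma>) *\<^sub>R coroot \<gamma>) \<bullet> b < 0"
proof -
  have nonpos: "coroot \<gamma> \<bullet> b \<le> 0" if "\<gamma> \<in> Delta" "\<gamma> \<noteq> b" for \<gamma>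
    using simple_inner_nonpos[OF that(1) b(1) that(2)] sign_inner_simple_coroot[OF that(1), of b]
    by (simp add: inner_commute)
  have "a \<noteq> b" using a(2) b(2) by auto
  then have "coroot a \<bullet> b < 0"
    using nonpos[OF a(1)] assms(5) sign_inner_simple_coroot[OF a(1), of b]
    by (simp add: inner_commute)
  have "0 < (\<Sum>\<gamma>\<in>Delta. - (real (c \<gamma>) * (coroot \<gamma> \<bullet> b)))"
  proof (rule sum_pos2[OF finite_Delta a(1)])
    show "0 < - (real (c a) * (coroot a \<bullet> b))"
      using a(2) \<open>coroot a \<bullet> b < 0\<close> by (simp add: mult_pos_neg)
    show "0 \<le> - (real (c \<gamma>) * (coroot \<gamma> \<bullet> b))" if "\<gamma> \<in> Delta" for \<gamma>
      using nonpos[OF that] b(2) by (cases "\<gamma> = b") (auto simp: mult_nonneg_nonpos)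
  qed
  then show ?thesis by (simp add: inner_sum_left sum_negf)
qed

lemma maximal_coroot_full_support:
  assumes "maximal_coroot t"
  shows "\<exists>c::'a\<Rightarrow>nat. t = (\<Sum>\<gamma>\<in>Delta. real (c \<gamma>) *\<^sub>R coroot \<gamma>) \<and> (\<forall>\<gamma>\<in>Delta. c \<gamma> \<ge> 1)"
proof -
  obtain \<tau> where \<tau>: "\<tau> \<in> P" "t = coroot \<tau>"
    using assms by (auto simp: maximal_coroot_def)
  obtain c where c: "t = (\<Sum>\<gamma>\<in>Delta. real (c \<gamma>) *\<^sub>R coroot \<gamma>)"
    using coroot_P_nonneg_comb \<tau> by blast
  define D1 where "D1 = {\<gamma>\<in>Delta. c \<gamma> > 0}"
  have "D1 \<noteq> {}"
  proof
    assume "D1 = {}"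
    then have "t = 0" using c by (simp add: D1_def)
    then show False using \<tau> root_nonzero P_subset by auto
  qed
  moreover have "D1 = Delta"
  proof (rule ccontr)
    assume "D1 \<noteq> Delta"
    then obtain a b where "a \<in> D1" "b \<in> Delta - D1" "a \<bullet> b \<noteq> 0"
      using Delta_connected[of D1] \<open>D1 \<noteq> {}\<close> by (auto simp: D1_def)
    then have "t \<bullet> b < 0" "b \<in> Delta"
      using c coroot_comb_inner_simple_neg[of a c b] by (auto simp: D1_def)
    then show False using maximal_coroot_dominant[OF assms] by force
  qed
  ultimately show ?thesis using c by (auto simp: D1_def Suc_le_eq)
qed

lemma maximal_coroot_dominant_coroot: "maximal_coroot t \<Longrightarrow> \<gamma> \<in> Delta \<Longrightarrow> t \<bullet> coroot \<gamma> \<ge> 0"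
  using maximal_coroot_dominant sign_inner_simple_coroot by blast

lemma maximal_coroot_inner_pos:
  assumes "maximal_coroot t" "maximal_coroot s" shows "t \<bullet> s > 0"
proof -
  obtain c where c: "t = (\<Sum>\<gamma>\<in>Delta. real (c \<gamma>) *\<^sub>R coroot \<gamma>)"
    using maximal_coroot_full_support[OF assms(1)] by blast
  obtain m where m: "s = (\<Sum>\<gamma>\<in>Delta. real (m \<gamma>) *\<^sub>R coroot \<gamma>)" "\<forall>\<gamma>\<in>Delta. m \<gamma> \<ge> 1"
    using maximal_coroot_full_support[OF assms(2)] by blast
  have "t \<noteq> 0" using assms(1) P_subset root_nonzero by (auto simp: maximal_coroot_def)
  have "\<exists>\<gamma>0\<in>Delta. t \<bullet> coroot \<gamma>0 > 0"
  proof (rule ccontr)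
    assume "\<not> ?thesis"
    then have "t \<bullet> t \<le> 0"
      by (subst (2) c) (auto simp: inner_sum_right intro!: sum_nonpos mult_nonneg_nonpos)
    then show False using \<open>t \<noteq> 0\<close> by (metis inner_gt_zero_iff not_le)
  qed
  then obtain \<gamma>0 where g0: "\<gamma>0 \<in> Delta" "t \<bullet> coroot \<gamma>0 > 0"
    by blast
  have "t \<bullet> s = (\<Sum>\<gamma>\<in>Delta. real (m \<gamma>) * (t \<bullet> coroot \<gamma>))"
    by (simp add: m inner_sum_right)
  also have "\<dots> > 0"
    using g0 m(2) maximal_coroot_dominant_coroot[OF assms(1)]
    by (intro sum_pos2[OF finite_Delta g0(1)]) (auto intro!: mult_pos_pos)
  finally show ?thesis .
qed

lemma maximal_coroot_unique:
  assumes "maximal_coroot t" "maximal_coroot s" shows "t = s"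
proof (rule ccontr)
  assume ne: "t \<noteq> s"
  have tP: "t \<in> coroot ` P" and sP: "s \<in> coroot ` P"
    using assms by (auto simp: maximal_coroot_def)
  then have "t \<bullet> v > 0" "s \<bullet> v > 0" using coroot_P_inner_v by auto
  then have "s \<noteq> - t" by auto
  moreover have "t \<in> coroot ` \<Phi>" "s \<in> coroot ` \<Phi>" using tP sP P_subset by auto
  ultimately have "t - s \<in> coroot ` \<Phi>"
    using pos_root_system.root_diff_root[OF pos_root_system_coroots, of t s]
      maximal_coroot_inner_pos[OF assms] ne by simp
  then obtain \<delta> where d: "\<delta> \<in> \<Phi>" "t - s = coroot \<delta>" by auto
  show False
  proof (cases "\<delta> \<in> P")
    case True
    then have "dom_le s t" using coroot_P_nonneg_comb[of \<delta>] d unfolding dom_le_def by simp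
    then show False using maximal_corootD[OF assms(2) tP] ne by auto
  next
    case False
    then have "- \<delta> \<in> P" using root_or_neg_in_P d by auto
    moreover have "s - t = coroot (- \<delta>)" using d by (simp add: algebra_simps)
    ultimately have "dom_le t s"
      using coroot_P_nonneg_comb[of "- \<delta>"] unfolding dom_le_def by simp
    then show False using maximal_corootD[OF assms(1) sP] ne by auto
  qed
qed

definition "theta_v = (SOME t. maximal_coroot t)"

lemma maximal_theta_v: "maximal_coroot theta_v"
proof -
  obtain \<beta> where "\<beta> \<in> P" using P_nonempty by auto
  then have "\<exists>t. maximal_coroot t" using maximal_coroot_above by blast
  then show ?thesis unfolding theta_v_def by (rule someI_ex)
qed

lemma dom_le_theta_v: "\<beta> \<in> P \<Longrightarrow> dom_le (coroot \<beta>) theta_v"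
  using maximal_coroot_above maximal_coroot_unique maximal_theta_v by blast

definition "theta = (SOME \<theta>. \<theta> \<in> P \<and> coroot \<theta> = theta_v)"

lemma theta_in_P_coroot_theta: "theta \<in> P \<and> coroot theta = theta_v"
proof -
  have "\<exists>\<theta>. \<theta> \<in> P \<and> coroot \<theta> = theta_v"
    using maximal_theta_v by (auto simp: maximal_coroot_def)
  then show ?thesis unfolding theta_def by (rule someI_ex)
qed

lemma theta_in_P: "theta \<in> P"
  using theta_in_P_coroot_theta by blast

lemma coroot_theta: "coroot theta = theta_v"
  using theta_in_P_coroot_theta by blast

lemma highest_coroot_eq: "highest_coroot \<Phi> P = theta_v"
  unfolding highest_coroot_def Delta_def[symmetric]
proof (rule the_equality)
  show "theta_v \<in> coroot ` \<Phi>
      \<and> (\<forall>\<beta>\<in>P. \<exists>c::'a\<Rightarrow>nat. theta_v - coroot \<beta> = (\<Sum>\<gamma>\<in>Delta. real (c \<gamma>) *\<^sub>R coroot \<gamma>))"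
  proof
    show "theta_v \<in> coroot ` \<Phi>"
      using theta_in_P coroot_theta P_subset by (metis image_eqI subsetD)
    show "\<forall>\<beta>\<in>P. \<exists>c::'a\<Rightarrow>nat. theta_v - coroot \<beta> = (\<Sum>\<gamma>\<in>Delta. real (c \<gamma>) *\<^sub>R coroot \<gamma>)"
      using dom_le_theta_v by (auto simp: dom_le_def)
  qed
next
  fix t assume t: "t \<in> coroot ` \<Phi>
      \<and> (\<forall>\<beta>\<in>P. \<exists>c::'a\<Rightarrow>nat. t - coroot \<beta> = (\<Sum>\<gamma>\<in>Delta. real (c \<gamma>) *\<^sub>R coroot \<gamma>))"
  then have lt: "dom_le theta_v t" using theta_in_P coroot_theta by (auto simp: dom_le_def) (metis)
  have "theta_v \<bullet> v > 0" using theta_in_P coroot_theta coroot_P_inner_v by metis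
  then have "t \<bullet> v > 0" using dom_le_inner_v[OF lt] by simp
  then have "t \<in> coroot ` P" using t coroot_inner_v_pos_imp_P by auto
  then have "dom_le t theta_v" using dom_le_theta_v by auto
  then show "t = theta_v" using lt dom_le_antisym by auto
qed

lemma theta_v_full_support: "\<exists>c::'a\<Rightarrow>nat. theta_v = (\<Sum>\<gamma>\<in>Delta. real (c \<gamma>) *\<^sub>R coroot \<gamma>)
    \<and> (\<forall>\<gamma>\<in>Delta. c \<gamma> \<ge> 1)"
  using maximal_coroot_full_support[OF maximal_theta_v] .

abbreviation "hcox \<equiv> coxeter_number \<Phi> P"

lemma hcox_eq: "hcox = rho P \<bullet> theta_v + 1"
  by (simp add: coxeter_number_def highest_coroot_eq)

lemma hcox_nat: "\<exists>N::nat. hcox = real N \<and> N \<ge> 2"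
proof -
  obtain n::nat where "rho P \<bullet> coroot theta = real n" "n \<ge> 1"
    using rho_coroot_P theta_in_P coroot_theta by blast
  then show ?thesis using hcox_eq theta_in_P coroot_theta by (intro exI[of _ "n + 1"]) auto
qed

lemma hcox_ge_2: "hcox \<ge> 2" using hcox_nat by auto

lemma hcox_pos: "hcox > 0" using hcox_ge_2 by simp

lemma hcox_Ints: "hcox \<in> \<int>" using hcox_nat by (metis Ints_of_nat)

lemma rho_coroot_P_bounds: "\<beta> \<in> P \<Longrightarrow> 1 \<le> rho P \<bullet> coroot \<beta> \<and> rho P \<bullet> coroot \<beta> \<le> hcox - 1"
  using rho_coroot_P[of \<beta>] rho_dom_le_mono[OF dom_le_theta_v[of \<beta>]] hcox_eq by auto

lemma rho_theta_v: "rho P \<bullet> theta_v = hcox - 1" using hcox_eq by simp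

end

section \<open>Alcoves\<close>

context pos_root_system begin

definition "regular_points = UNIV - \<Union>{hyp \<alpha> k | \<alpha> k. \<alpha> \<in> \<Phi>}"

lemma alcoves_eq_components: "alcoves \<Phi> = components regular_points"
  by (simp add: alcoves_def regular_points_def)

lemma regular_points_iff: "x \<in> regular_points \<longleftrightarrow> (\<forall>\<alpha>\<in>\<Phi>. \<forall>k::int. x \<bullet> coroot \<alpha> \<noteq> of_int k)"
  by (auto simp: regular_points_def hyp_def)

lemma regular_points_iff_Ints: "x \<in> regular_points \<longleftrightarrow> (\<forall>\<alpha>\<in>\<Phi>. x \<bullet> coroot \<alpha> \<notin> \<int>)"
  unfolding regular_points_iff by (auto elim: Ints_cases)

lemma regular_point_margin:
  assumes "x \<in> regular_points" shows "\<exists>e>0. \<forall>\<beta>\<in>\<Phi>. \<forall>m::int. \<bar>x \<bullet> coroot \<beta> - of_int m\<bar> \<ge> e"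
proof -
  define g where "g \<beta> = min (x \<bullet> coroot \<beta> - of_int \<lfloor>x \<bullet> coroot \<beta>\<rfloor>)
      (of_int \<lfloor>x \<bullet> coroot \<beta>\<rfloor> + 1 - x \<bullet> coroot \<beta>)" for \<beta>
  have ni: "\<beta> \<in> \<Phi> \<Longrightarrow> x \<bullet> coroot \<beta> \<notin> \<int>" for \<beta>
    using assms by (simp add: regular_points_iff_Ints)
  have ne: "\<Phi> \<noteq> {}" using Delta_nonempty simple_root by auto
  define e where "e = Min (g ` \<Phi>)"
  have "e \<in> g ` \<Phi>" unfolding e_def using finite_Phi ne by (intro Min_in) auto
  then have epos: "e > 0" using frac_gap_pos ni by (auto simp: g_def)
  have "\<forall>\<beta>\<in>\<Phi>. \<forall>m::int. \<bar>x \<bullet> coroot \<beta> - of_int m\<bar> \<ge> e"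
  proof (intro ballI allI)
    fix \<beta> m assume b: "\<beta> \<in> \<Phi>"
    have "e \<le> g \<beta>" unfolding e_def using finite_Phi b by (intro Min_le) auto
    also have "g \<beta> \<le> \<bar>x \<bullet> coroot \<beta> - of_int m\<bar>" unfolding g_def
      by (rule dist_int_ge_frac[OF ni[OF b]])
    finally show "\<bar>x \<bullet> coroot \<beta> - of_int m\<bar> \<ge> e" .
  qed
  then show ?thesis using epos by blast
qed

lemma root_inner_self_lower_bound: "\<exists>\<mu>>0. \<forall>\<beta>\<in>\<Phi>. \<mu> \<le> \<beta> \<bullet> \<beta>"
proof -
  have "\<Phi> \<noteq> {}" using Delta_nonempty simple_root by auto
  then have "Min ((\<lambda>\<beta>. \<beta> \<bullet> \<beta>) ` \<Phi>) \<in> (\<lambda>\<beta>. \<beta> \<bullet> \<beta>) ` \<Phi>"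
    using finite_Phi by (intro Min_in) auto
  then have "Min ((\<lambda>\<beta>. \<beta> \<bullet> \<beta>) ` \<Phi>) > 0"
    using root_nonzero by auto
  moreover have "\<forall>\<beta>\<in>\<Phi>. Min ((\<lambda>\<beta>. \<beta> \<bullet> \<beta>) ` \<Phi>) \<le> \<beta> \<bullet> \<beta>"
    using finite_Phi by simp
  ultimately show ?thesis by blast
qed

definition "same_side p x \<longleftrightarrow> (\<forall>\<alpha>\<in>\<Phi>. \<forall>k::int. (x \<bullet> coroot \<alpha> < of_int k \<longleftrightarrow> p \<bullet> coroot \<alpha> < of_int k))"

lemma unit_coroots_regular:
  assumes "\<forall>\<beta>\<in>P. 0 < x \<bullet> coroot \<beta> \<and> x \<bullet> coroot \<beta> < 1"
  shows "x \<in> regular_points"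
  unfolding regular_points_iff
proof (intro ballI allI)
  fix \<alpha> k assume "\<alpha> \<in> \<Phi>"
  then consider "\<alpha> \<in> P" | "- \<alpha> \<in> P" using root_or_neg_in_P by blast
  then show "x \<bullet> coroot \<alpha> \<noteq> of_int k"
  proof cases
    case 1
    then show ?thesis using assms unit_interval_not_int by blast
  next
    case 2
    then have "x \<bullet> coroot (- \<alpha>) \<noteq> of_int (- k)"
      using assms unit_interval_not_int by blast
    then show ?thesis by simp
  qed
qed

lemma unit_coroots_same_side:
  assumes x: "\<forall>\<beta>\<in>P. 0 < x \<bullet> coroot \<beta> \<and> x \<bullet> coroot \<beta> < 1"
    and y: "\<forall>\<beta>\<in>P. 0 < y \<bullet> coroot \<beta> \<and> y \<bullet> coroot \<beta> < 1"
  shows "same_side x y"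
  unfolding same_side_def
proof (intro ballI allI)
  fix \<alpha> k assume "\<alpha> \<in> \<Phi>"
  then consider "\<alpha> \<in> P" | "- \<alpha> \<in> P" using root_or_neg_in_P by blast
  then show "y \<bullet> coroot \<alpha> < of_int k \<longleftrightarrow> x \<bullet> coroot \<alpha> < of_int k"
  proof cases
    case 1
    then show ?thesis
      using x[rule_format, OF 1] y[rule_format, OF 1]
        less_int_iff_unit_interval[of 0 "y \<bullet> coroot \<alpha>" "x \<bullet> coroot \<alpha>" k]
          by simp
  next
    case 2
    then show ?thesis
      using x[rule_format, OF 2] y[rule_format, OF 2]
        less_int_iff_unit_interval[of "-1" "y \<bullet> coroot \<alpha>" "x \<bullet> coroot \<alpha>" k]
          by simp
  qed
qed

lemma component_same_side:
  assumes "x \<in> connected_component_set regular_points p"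
  shows "same_side p x"
  unfolding same_side_def
proof (intro ballI allI)
  fix \<alpha> k assume a: "\<alpha> \<in> \<Phi>"
  have C: "connected (connected_component_set regular_points p)"
    "connected_component_set regular_points p \<subseteq> regular_points"
    by (simp_all add: connected_component_subset)
  have pC: "p \<in> connected_component_set regular_points p"
    using assms connected_component_in[of regular_points p x] by simp
  have off_hyp: "y \<bullet> coroot \<alpha> \<noteq> of_int k" if "y \<in> connected_component_set regular_points p" for y
    using that C(2) a by (auto simp: regular_points_iff)
  have "\<not> (x \<bullet> coroot \<alpha> < of_int k \<and> of_int k < p \<bullet> coroot \<alpha>)"
    using connected_ivt_hyperplane[OF C(1) assms pC, of "coroot \<alpha>" "of_int k"] off_hyp
    by (auto simp: inner_commute)
  moreover have "\<not> (p \<bullet> coroot \<alpha> < of_int k \<and> of_int k < x \<bullet> coroot \<alpha>)"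
    using connected_ivt_hyperplane[OF C(1) pC assms, of "coroot \<alpha>" "of_int k"] off_hyp
    by (auto simp: inner_commute)
  ultimately show "x \<bullet> coroot \<alpha> < of_int k \<longleftrightarrow> p \<bullet> coroot \<alpha> < of_int k"
    using off_hyp[OF assms] off_hyp[OF pC] by linarith
qed

lemma same_side_segment_regular:
  assumes p: "p \<in> regular_points" and x: "x \<in> regular_points" and "same_side p x"
  shows "closed_segment p x \<subseteq> regular_points"
proof
  fix z assume z: "z \<in> closed_segment p x"
  show "z \<in> regular_points" unfolding regular_points_iff
  proof (intro ballI allI)
    fix \<alpha> k assume a: "\<alpha> \<in> \<Phi>"
    have side: "x \<bullet> coroot \<alpha> < of_int k \<longleftrightarrow> p \<bullet> coroot \<alpha> < of_int k"
      using assms(3) a by (auto simp: same_side_def)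
    have off: "p \<bullet> coroot \<alpha> \<noteq> of_int k" "x \<bullet> coroot \<alpha> \<noteq> of_int k"
      using p x a by (auto simp: regular_points_iff)
    show "z \<bullet> coroot \<alpha> \<noteq> of_int k"
    proof (cases "p \<bullet> coroot \<alpha> < of_int k")
      case True
      then have "closed_segment p x \<subseteq> {y. coroot \<alpha> \<bullet> y < of_int k}"
        using side by (intro closed_segment_subset convex_halfspace_lt) (auto simp: inner_commute)
      then show ?thesis using z by (auto simp: inner_commute)
    next
      case False
      then have "closed_segment p x \<subseteq> {y. coroot \<alpha> \<bullet> y > of_int k}"
        using side off
        by (intro closed_segment_subset convex_halfspace_gt) (auto simp: inner_commute)
      then show ?thesis using z by (auto simp: inner_commute)
    qed
  qed
qed

lemma connected_component_regular_points:
  assumes p: "p \<in> regular_points"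
  shows "connected_component_set regular_points p = {x \<in> regular_points. same_side p x}"
proof
  show "connected_component_set regular_points p \<subseteq> {x \<in> regular_points. same_side p x}"
    using component_same_side connected_component_subset by blast
  show "{x \<in> regular_points. same_side p x} \<subseteq> connected_component_set regular_points p"
  proof
    fix x assume "x \<in> {x \<in> regular_points. same_side p x}"
    then have "closed_segment p x \<subseteq> connected_component_set regular_points p"
      using same_side_segment_regular[OF p] by (intro connected_component_maximal) auto
    then show "x \<in> connected_component_set regular_points p" by auto
  qed
qed

lemma alcove_eq_component: "A \<in> alcoves \<Phi> \<Longrightarrow> x \<in> A \<Longrightarrow> A = connected_component_set regular_points x"
  unfolding alcoves_eq_components components_iff by (metis connected_component_eq)

lemma alcove_subset_regular: "A \<in> alcoves \<Phi> \<Longrightarrow> A \<subseteq> regular_points"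
  unfolding alcoves_eq_components components_iff using connected_component_subset by blast

lemma alcove_nonempty: "A \<in> alcoves \<Phi> \<Longrightarrow> A \<noteq> {}"
  unfolding alcoves_eq_components by (rule in_components_nonempty)

lemma component_alcove: "x \<in> regular_points \<Longrightarrow> connected_component_set regular_points x \<in> alcoves \<Phi>"
  unfolding alcoves_eq_components by (rule componentsI)

lemma alcove_eq: "A \<in> alcoves \<Phi> \<Longrightarrow> B \<in> alcoves \<Phi> \<Longrightarrow> x \<in> A \<Longrightarrow> x \<in> B \<Longrightarrow> A = B"
  using alcove_eq_component by metis

lemma alcove_same_side:
  assumes "A \<in> alcoves \<Phi>" "x \<in> A" "y \<in> A" shows "same_side x y"
proof -
  have xU: "x \<in> regular_points" using assms alcove_subset_regular by auto
  have "y \<in> connected_component_set regular_points x"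
    using alcove_eq_component[OF assms(1,2)] assms(3) by simp
  then show ?thesis using connected_component_regular_points[OF xU] by simp
qed

lemma alcove_one_side:
  assumes "A \<in> alcoves \<Phi>" "\<alpha> \<in> \<Phi>"
  shows "(\<forall>x\<in>A. x \<bullet> coroot \<alpha> < of_int k) \<or> (\<forall>x\<in>A. x \<bullet> coroot \<alpha> > of_int k)"
proof -
  obtain p where p: "p \<in> A" using alcove_nonempty assms by auto
  have pU: "p \<in> regular_points" using p alcove_subset_regular assms by auto
  show ?thesis
  proof (cases "p \<bullet> coroot \<alpha> < of_int k")
    case True
    then show ?thesis using alcove_same_side[OF assms(1) p] assms(2) by (auto simp: same_side_def)
  next
    case False
    have "\<forall>x\<in>A. x \<bullet> coroot \<alpha> > of_int k"
    proof
      fix x assume x: "x \<in> A"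
      then have "\<not> x \<bullet> coroot \<alpha> < of_int k"
        using alcove_same_side[OF assms(1) p x] assms(2) False by (auto simp: same_side_def)
      moreover have "x \<in> regular_points" using x alcove_subset_regular[OF assms(1)] by blast
      then have "x \<bullet> coroot \<alpha> \<noteq> of_int k"
        using assms(2) by (auto simp: regular_points_iff)
      ultimately show "x \<bullet> coroot \<alpha> > of_int k" by simp
    qed
    then show ?thesis by simp
  qed
qed

lemma alcoves_separated:
  assumes A: "A \<in> alcoves \<Phi>" and B: "B \<in> alcoves \<Phi>" and ne: "A \<noteq> B"
  shows "\<exists>\<beta>\<in>\<Phi>. \<exists>m::int. (\<forall>x\<in>A. x \<bullet> coroot \<beta> < of_int m) \<and> (\<forall>x\<in>B. x \<bullet> coroot \<beta> > of_int m)"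
proof -
  obtain p where p: "p \<in> A" using alcove_nonempty A by auto
  obtain q where q: "q \<in> B" using alcove_nonempty B by auto
  have pU: "p \<in> regular_points" and qU: "q \<in> regular_points"
    using p q alcove_subset_regular A B by auto
  have "\<not> same_side p q"
  proof
    assume "same_side p q"
    then have "q \<in> connected_component_set regular_points p"
      using connected_component_regular_points[OF pU] qU by simp
    then have "q \<in> A" using alcove_eq_component[OF A p] by simp
    then show False using alcove_eq[OF A B _ q] ne by simp
  qed
  then obtain \<beta> k where bk: "\<beta> \<in> \<Phi>" "\<not> (q \<bullet> coroot \<beta> < of_int k \<longleftrightarrow> p \<bullet> coroot \<beta> < of_int k)"
    unfolding same_side_def by blast
  show ?thesis
  proof (cases "p \<bullet> coroot \<beta> < of_int k")
    case True
    then have "\<not> q \<bullet> coroot \<beta> < of_int k" using bk by simp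
    moreover have "q \<bullet> coroot \<beta> \<noteq> of_int k"
      using qU bk(1) by (auto simp: regular_points_iff)
    ultimately have "q \<bullet> coroot \<beta> > of_int k" by linarith
    then have "\<forall>x\<in>B. x \<bullet> coroot \<beta> > of_int k"
      using alcove_one_side[OF B bk(1), of k] q by auto
    moreover have "\<forall>x\<in>A. x \<bullet> coroot \<beta> < of_int k"
      using alcove_one_side[OF A bk(1), of k] p True by auto
    ultimately show ?thesis using bk by blast
  next
    case False
    then have "q \<bullet> coroot \<beta> < of_int k" using bk by simp
    then have "\<forall>x\<in>B. x \<bullet> coroot \<beta> < of_int k"
      using alcove_one_side[OF B bk(1), of k] q by auto
    moreover have "p \<bullet> coroot \<beta> \<noteq> of_int k"
      using pU bk(1) by (auto simp: regular_points_iff)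
    then have "p \<bullet> coroot \<beta> > of_int k" using False by linarith
    then have "\<forall>x\<in>A. x \<bullet> coroot \<beta> > of_int k"
      using alcove_one_side[OF A bk(1), of k] p by auto
    ultimately have "(\<forall>x\<in>A. x \<bullet> coroot (- \<beta>) < of_int (- k))
        \<and> (\<forall>x\<in>B. x \<bullet> coroot (- \<beta>) > of_int (- k))"
      by auto
    then show ?thesis using neg_root[OF bk(1)] by blast
  qed
qed

lemma aff_refl_towards:
  assumes x: "x \<in> regular_points" and p: "p \<in> regular_points"
    and "x \<notin> connected_component_set regular_points p"
    and ex: "\<forall>\<beta>\<in>\<Phi>. \<forall>m::int. ex \<le> \<bar>x \<bullet> coroot \<beta> - of_int m\<bar>" and "0 \<le> ex"
    and ep: "\<forall>\<beta>\<in>\<Phi>. \<forall>m::int. ep \<le> \<bar>p \<bullet> coroot \<beta> - of_int m\<bar>" and "0 \<le> ep"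
    and \<mu>: "\<forall>\<beta>\<in>\<Phi>. \<mu> \<le> \<beta> \<bullet> \<beta>" and "0 \<le> \<mu>"
  obtains \<beta> k where "\<beta> \<in> \<Phi>"
    "(aff_refl \<beta> k x - p) \<bullet> (aff_refl \<beta> k x - p) \<le> (x - p) \<bullet> (x - p) - ex * ep * \<mu>"
proof -
  have "\<not> same_side p x" using assms(1-3) connected_component_regular_points[OF p] by auto
  then obtain \<beta> k where bk: "\<beta> \<in> \<Phi>" "\<not> (x \<bullet> coroot \<beta> < of_int k \<longleftrightarrow> p \<bullet> coroot \<beta> < of_int k)"
    unfolding same_side_def by blast
  define u where "u = x \<bullet> coroot \<beta> - of_int k"
  define w where "w = p \<bullet> coroot \<beta> - of_int k"
  have "u \<noteq> 0" "w \<noteq> 0" using x p bk(1) by (auto simp: regular_points_iff u_def w_def)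
  then have "u * w < 0" using bk(2) by (auto simp: u_def w_def mult_less_0_iff)
  moreover have "ex * ep \<le> \<bar>u\<bar> * \<bar>w\<bar>"
    using ex ep bk(1) assms(5,7) by (intro mult_mono) (auto simp: u_def w_def)
  ultimately have "ex * ep * \<mu> \<le> - (u * w) * (\<beta> \<bullet> \<beta>)"
    using \<mu> bk(1) assms(5,7,9) by (intro mult_mono) (auto simp: abs_mult)
  then have "ex * ep * \<mu> \<le> - (u * w * (\<beta> \<bullet> \<beta>))" by simp
  moreover have "(aff_refl \<beta> k x - p) \<bullet> (aff_refl \<beta> k x - p) = (x - p) \<bullet> (x - p) + u * w * (\<beta> \<bullet> \<beta>)"
    using aff_refl_dist[OF root_nonzero[OF bk(1)]] by (simp add: u_def w_def)
  ultimately have "(aff_refl \<beta> k x - p) \<bullet> (aff_refl \<beta> k x - p) \<le> (x - p) \<bullet> (x - p) - ex * ep * \<mu>"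
    by linarith
  then show ?thesis using that bk(1) by blast
qed

lemma independent_two_coroots:
  assumes "\<alpha> \<in> \<Phi>" "\<beta> \<in> \<Phi>" "\<beta> \<noteq> \<alpha>" "\<beta> \<noteq> - \<alpha>"
  shows "independent {coroot \<alpha>, coroot \<beta>}" "coroot \<alpha> \<noteq> coroot \<beta>"
proof -
  show ne: "coroot \<alpha> \<noteq> coroot \<beta>" using coroot_inj assms by metis
  have "coroot \<beta> \<notin> span {coroot \<alpha>}"
  proof
    assume "coroot \<beta> \<in> span {coroot \<alpha>}"
    then obtain c where c: "coroot \<beta> = c *\<^sub>R coroot \<alpha>"
      by (auto simp: span_singleton)
    have "coroot \<beta> \<in> coroot ` \<Phi>" using assms(2) by blast
    then have "c *\<^sub>R coroot \<alpha> \<in> coroot ` \<Phi>" using c by simp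
    then have "c = 1 \<or> c = -1"
      using root_system_coroots assms unfolding root_system_def by blast
    then have "coroot \<beta> = coroot \<alpha> \<or> coroot \<beta> = coroot (- \<alpha>)"
      using c by auto
    then show False using coroot_inj neg_root assms by metis
  qed
  moreover have "independent {coroot \<alpha>}"
    using root_nonzero assms by (simp add: independent_insert)
  ultimately have "independent (insert (coroot \<beta>) {coroot \<alpha>})"
    using ne by (simp add: independent_insert)
  moreover have "insert (coroot \<beta>) {coroot \<alpha>} = {coroot \<alpha>, coroot \<beta>}"
    by auto
  ultimately show "independent {coroot \<alpha>, coroot \<beta>}" by simp
qed

lemma wall_two_root_hyperplanes:
  assumes "aff_dim W = int DIM('a) - 1" "\<alpha> \<in> \<Phi>" "\<beta> \<in> \<Phi>"
    "W \<subseteq> {x. x \<bullet> coroot \<alpha> = a \<and> x \<bullet> coroot \<beta> = b}"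
  shows "\<beta> = \<alpha> \<or> \<beta> = - \<alpha>"
proof (rule ccontr)
  assume "\<not> ?thesis"
  then have "aff_dim W \<le> int DIM('a) - 2"
    using aff_dim_le_two_hyperplanes[OF independent_two_coroots(1,2)[OF assms(2,3)] assms(4)]
    by blast
  then show False using assms(1) by simp
qed

lemma alcove_across_wall_unique:
  assumes A1: "A1 \<in> alcoves \<Phi>" and A2: "A2 \<in> alcoves \<Phi>" and a: "\<alpha> \<in> \<Phi>"
    and W: "W \<subseteq> closure A1" "W \<subseteq> closure A2" "W \<subseteq> hyp \<alpha> k" "aff_dim W = int DIM('a) - 1"
    and s1: "\<forall>x\<in>A1. x \<bullet> coroot \<alpha> > of_int k" and s2: "\<forall>x\<in>A2. x \<bullet> coroot \<alpha> > of_int k"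
  shows "A1 = A2"
proof (rule ccontr)
  assume "A1 \<noteq> A2"
  then obtain \<beta> m where \<beta>: "\<beta> \<in> \<Phi>"
    and sep: "\<forall>x\<in>A1. x \<bullet> coroot \<beta> < of_int m" "\<forall>x\<in>A2. x \<bullet> coroot \<beta> > of_int m"
    using alcoves_separated[OF A1 A2] by blast
  have "closure A1 \<subseteq> {x. x \<bullet> coroot \<beta> \<le> of_int m}" "closure A2 \<subseteq> {x. x \<bullet> coroot \<beta> \<ge> of_int m}"
    using sep by (auto intro!: closure_inner_less_subset closure_inner_greater_subset)
  then have "W \<subseteq> {x. x \<bullet> coroot \<alpha> = of_int k \<and> x \<bullet> coroot \<beta> = of_int m}"
    using W(1-3) by (fastforce simp: hyp_def)
  moreover obtain w where "w \<in> W" using aff_dim_wall_nonempty[OF W(4)] by blast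
  ultimately have w: "w \<bullet> coroot \<alpha> = of_int k" "w \<bullet> coroot \<beta> = of_int m"
    and "\<beta> = \<alpha> \<or> \<beta> = - \<alpha>"
    using wall_two_root_hyperplanes[OF W(4) a \<beta>] by auto
  obtain x1 x2 where "x1 \<in> A1" "x2 \<in> A2" using alcove_nonempty A1 A2 by blast
  then show False
    using \<open>\<beta> = \<alpha> \<or> \<beta> = - \<alpha>\<close> w s1 s2 sep
    by (fastforce simp: of_int_minus[symmetric] simp del: of_int_minus)
qed

section \<open>The affine Weyl group\<close>

inductive affine_weyl :: "('a \<Rightarrow> 'a) \<Rightarrow> bool" where
  affine_weyl_id: "affine_weyl id"
| affine_weyl_step: "affine_weyl f \<Longrightarrow> \<alpha> \<in> \<Phi> \<Longrightarrow> affine_weyl (aff_refl \<alpha> k \<circ> f)"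

lemma affine_weyl_aff_refl: "\<alpha> \<in> \<Phi> \<Longrightarrow> affine_weyl (aff_refl \<alpha> k)"
  using affine_weyl_step[OF affine_weyl_id] by simp

lemma affine_weyl_comp: "affine_weyl f \<Longrightarrow> affine_weyl g \<Longrightarrow> affine_weyl (f \<circ> g)"
proof (induction rule: affine_weyl.induct)
  case affine_weyl_id then show ?case by simp
next
  case (affine_weyl_step f \<alpha> k)
  then have "affine_weyl (f \<circ> g)" by blast
  then have "affine_weyl (aff_refl \<alpha> k \<circ> (f \<circ> g))"
    using affine_weyl_step(2) by (rule affine_weyl.affine_weyl_step)
  then show ?case by (simp only: comp_assoc)
qed

lemma affine_weyl_inverse:
  "affine_weyl f \<Longrightarrow> \<exists>g. affine_weyl g \<and> (\<forall>x. g (f x) = x) \<and> (\<forall>x. f (g x) = x)"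
proof (induction rule: affine_weyl.induct)
  case affine_weyl_id then show ?case
    by (intro exI[of _ id] conjI affine_weyl.affine_weyl_id) simp_all
next
  case (affine_weyl_step f \<alpha> k)
  then obtain g where g: "affine_weyl g" "\<forall>x. g (f x) = x" "\<forall>x. f (g x) = x"
    by blast
  have anz: "\<alpha> \<noteq> 0" using root_nonzero affine_weyl_step by auto
  have "affine_weyl (g \<circ> aff_refl \<alpha> k)"
    using affine_weyl_comp[OF g(1) affine_weyl_aff_refl[OF affine_weyl_step(2)]] .
  moreover have "\<forall>x. (g \<circ> aff_refl \<alpha> k) ((aff_refl \<alpha> k \<circ> f) x) = x"
    using g anz by (simp add: aff_refl_aff_refl)
  moreover have "\<forall>x. (aff_refl \<alpha> k \<circ> f) ((g \<circ> aff_refl \<alpha> k) x) = x"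
    using g anz by (simp add: aff_refl_aff_refl)
  ultimately show ?case by blast
qed

lemma affine_weyl_structure:
  "affine_weyl f \<Longrightarrow>
    linear (lin_part f) \<and> (\<forall>x y. lin_part f x \<bullet> lin_part f y = x \<bullet> y) \<and>
    (\<forall>\<beta>\<in>\<Phi>. lin_part f \<beta> \<in> \<Phi>) \<and> (\<forall>\<beta>\<in>\<Phi>. f 0 \<bullet> coroot \<beta> \<in> \<int>)"
proof (induction rule: affine_weyl.induct)
  case affine_weyl_id
  have t: "lin_part id = (\<lambda>x. x)" by (auto simp: lin_part_def)
  show ?case unfolding t by (simp add: linear_ident)
next
  case (affine_weyl_step f \<alpha> k)
  have anz: "\<alpha> \<noteq> 0" using root_nonzero affine_weyl_step by auto
  have teq: "lin_part (aff_refl \<alpha> k \<circ> f) = refl \<alpha> \<circ> lin_part f"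
    by (rule ext) (simp add: lin_part_def aff_refl_def refl_diff)
  have lin: "linear (lin_part (aff_refl \<alpha> k \<circ> f))" unfolding teq
    using affine_weyl_step linear_refl by (intro linear_compose) auto
  have orth: "\<forall>x y. lin_part (aff_refl \<alpha> k \<circ> f) x \<bullet> lin_part (aff_refl \<alpha> k \<circ> f) y = x \<bullet> y"
    unfolding teq using affine_weyl_step anz by (simp add: refl_inner)
  have ph: "\<forall>\<beta>\<in>\<Phi>. lin_part (aff_refl \<alpha> k \<circ> f) \<beta> \<in> \<Phi>"
    unfolding teq using affine_weyl_step refl_root by auto
  have "\<forall>\<beta>\<in>\<Phi>. (aff_refl \<alpha> k \<circ> f) 0 \<bullet> coroot \<beta> \<in> \<int>"
  proof
    fix \<beta> assume b: "\<beta> \<in> \<Phi>"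
    have "(aff_refl \<alpha> k \<circ> f) 0 \<bullet> coroot \<beta> = refl \<alpha> (f 0) \<bullet> coroot \<beta> + of_int k * (\<alpha> \<bullet> coroot \<beta>)"
      by (simp add: aff_refl_def inner_add_left)
    also have "refl \<alpha> (f 0) \<bullet> coroot \<beta> = f 0 \<bullet> coroot (refl \<alpha> \<beta>)"
      using anz by (simp add: refl_self_adjoint coroot_refl)
    finally have eq: "(aff_refl \<alpha> k \<circ> f) 0 \<bullet> coroot \<beta>
        = f 0 \<bullet> coroot (refl \<alpha> \<beta>) + of_int k * (\<alpha> \<bullet> coroot \<beta>)" .
    have "f 0 \<bullet> coroot (refl \<alpha> \<beta>) \<in> \<int>"
      using affine_weyl_step refl_root b by auto
    moreover have "\<alpha> \<bullet> coroot \<beta> \<in> \<int>"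
      using root_coroot_Ints affine_weyl_step b by auto
    ultimately show "(aff_refl \<alpha> k \<circ> f) 0 \<bullet> coroot \<beta> \<in> \<int>" unfolding eq
      by (intro Ints_add Ints_mult) auto
  qed
  then show ?case using lin orth ph by blast
qed

context
  fixes f assumes gf: "affine_weyl f"
begin

lemma linear_lin_part: "linear (lin_part f)" using affine_weyl_structure[OF gf] by blast

lemma lin_part_inner: "lin_part f x \<bullet> lin_part f y = x \<bullet> y"
  using affine_weyl_structure[OF gf] by blast

lemma lin_part_root: "\<beta> \<in> \<Phi> \<Longrightarrow> lin_part f \<beta> \<in> \<Phi>"
  using affine_weyl_structure[OF gf] by blast

lemma affine_weyl_0_coroot_Ints: "\<beta> \<in> \<Phi> \<Longrightarrow> f 0 \<bullet> coroot \<beta> \<in> \<int>"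
  using affine_weyl_structure[OF gf] by blast

lemma inj_lin_part: "inj (lin_part f)"
proof (rule injI)
  fix x y assume "lin_part f x = lin_part f y"
  then have "lin_part f (x - y) = 0" using linear_lin_part by (simp add: linear_diff)
  then have "(x - y) \<bullet> (x - y) = 0" using lin_part_inner[of "x - y" "x - y"] by simp
  then show "x = y" by simp
qed

lemma lin_part_Phi: "lin_part f ` \<Phi> = \<Phi>"
proof -
  have sub: "lin_part f ` \<Phi> \<subseteq> \<Phi>" using lin_part_root by auto
  have "card (lin_part f ` \<Phi>) = card \<Phi>"
    using inj_lin_part by (simp add: card_image inj_on_subset)
  then show ?thesis using card_subset_eq[OF finite_Phi sub] by simp
qed

lemma coroot_lin_part: "coroot (lin_part f \<beta>) = lin_part f (coroot \<beta>)"
  using coroot_orthogonal_map[OF linear_lin_part] lin_part_inner by blast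

lemma affine_weyl_inner_coroot: "f x \<bullet> coroot (lin_part f \<beta>)
    = x \<bullet> coroot \<beta> + f 0 \<bullet> coroot (lin_part f \<beta>)"
  by (subst lin_part_add_const[of f x]) (simp add: inner_add_left coroot_lin_part lin_part_inner)

lemma affine_weyl_coroot_shift:
  assumes "\<gamma> \<in> \<Phi>" shows "\<exists>\<beta>\<in>\<Phi>. lin_part f \<beta> = \<gamma> \<and> (\<exists>j::int. f 0 \<bullet> coroot \<gamma> = of_int j
      \<and> (\<forall>x. f x \<bullet> coroot \<gamma> = x \<bullet> coroot \<beta> + of_int j))"
proof -
  obtain \<beta> where b: "\<beta> \<in> \<Phi>" "lin_part f \<beta> = \<gamma>"
    using assms lin_part_Phi by (metis imageE)
  obtain j where j: "f 0 \<bullet> coroot \<gamma> = of_int j"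
    using affine_weyl_0_coroot_Ints assms by (metis Ints_cases)
  have "\<forall>x. f x \<bullet> coroot \<gamma> = x \<bullet> coroot \<beta> + of_int j"
  proof
    fix x
    have "f x \<bullet> coroot (lin_part f \<beta>) = x \<bullet> coroot \<beta> + f 0 \<bullet> coroot (lin_part f \<beta>)"
      by (rule affine_weyl_inner_coroot)
    then show "f x \<bullet> coroot \<gamma> = x \<bullet> coroot \<beta> + of_int j"
      using b j by simp
  qed
  then show ?thesis using b j by blast
qed

lemma affine_weyl_regular_points: "f x \<in> regular_points \<longleftrightarrow> x \<in> regular_points"
proof
  assume fx: "f x \<in> regular_points"
  show "x \<in> regular_points" unfolding regular_points_iff
  proof (intro ballI allI notI)
    fix \<beta> k assume b: "\<beta> \<in> \<Phi>" and e: "x \<bullet> coroot \<beta> = of_int k"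
    obtain j where j: "f 0 \<bullet> coroot (lin_part f \<beta>) = of_int j"
      using affine_weyl_0_coroot_Ints lin_part_root b by (metis Ints_cases)
    have "f x \<bullet> coroot (lin_part f \<beta>) = x \<bullet> coroot \<beta> + f 0 \<bullet> coroot (lin_part f \<beta>)"
      by (rule affine_weyl_inner_coroot)
    then have "f x \<bullet> coroot (lin_part f \<beta>) = of_int (k + j)" using e j by simp
    moreover have "f x \<bullet> coroot (lin_part f \<beta>) \<noteq> of_int (k + j)"
      using fx lin_part_root[OF b] unfolding regular_points_iff by blast
    ultimately show False by simp
  qed
next
  assume x: "x \<in> regular_points"
  show "f x \<in> regular_points" unfolding regular_points_iff
  proof (intro ballI allI notI)
    fix \<gamma> k assume g: "\<gamma> \<in> \<Phi>" and e: "f x \<bullet> coroot \<gamma> = of_int k"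
    obtain \<beta> j where bj: "\<beta> \<in> \<Phi>" "\<forall>x. f x \<bullet> coroot \<gamma> = x \<bullet> coroot \<beta> + of_int j"
      using affine_weyl_coroot_shift[OF g] by blast
    have "x \<bullet> coroot \<beta> = of_int (k - j)"
      using bj e by (metis add_diff_cancel_right' of_int_diff)
    moreover have "x \<bullet> coroot \<beta> \<noteq> of_int (k - j)"
      using x bj(1) unfolding regular_points_iff by blast
    ultimately show False by simp
  qed
qed

lemma affine_weyl_continuous_on: "continuous_on S f"
proof -
  have "bounded_linear (lin_part f)" using linear_lin_part linear_conv_bounded_linear by blast
  then have "continuous_on S (\<lambda>x. lin_part f x + f 0)"
    by (intro continuous_intros linear_continuous_on)
  then show ?thesis by (simp add: lin_part_add_const[symmetric])
qed

lemma inj_affine_weyl: "inj f"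
  by (rule injI) (metis lin_part_add_const add_right_cancel inj_lin_part injD)

end

lemma affine_weyl_margin:
  assumes "affine_weyl f" and "\<forall>\<beta>\<in>\<Phi>. \<forall>m::int. e \<le> \<bar>a \<bullet> coroot \<beta> - of_int m\<bar>"
  shows "\<forall>\<gamma>\<in>\<Phi>. \<forall>m::int. e \<le> \<bar>f a \<bullet> coroot \<gamma> - of_int m\<bar>"
proof (intro ballI allI)
  fix \<gamma> and m :: int assume "\<gamma> \<in> \<Phi>"
  then obtain \<beta> j where "\<beta> \<in> \<Phi>" "f a \<bullet> coroot \<gamma> = a \<bullet> coroot \<beta> + of_int j"
    using affine_weyl_coroot_shift[OF assms(1)] by blast
  then show "e \<le> \<bar>f a \<bullet> coroot \<gamma> - of_int m\<bar>"
    using assms(2) by (metis add_diff_cancel_right' diff_diff_eq2 of_int_diff)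
qed

lemma affine_weyl_inverseE:
  assumes "affine_weyl f" obtains g where "affine_weyl g" "\<And>x. g (f x) = x" "\<And>x. f (g x) = x"
  using affine_weyl_inverse[OF assms] by blast

lemma affine_weyl_component:
  assumes gf: "affine_weyl f" and a: "a \<in> regular_points"
  shows "f ` connected_component_set regular_points a
      = connected_component_set regular_points (f a)"
proof -
  have gen: "h ` connected_component_set regular_points b \<subseteq> connected_component_set regular_points (h b)"
    if "affine_weyl h" "b \<in> regular_points" for h b
  proof (rule connected_component_maximal)
    show "h b \<in> h ` connected_component_set regular_points b" using that by simp
    show "connected (h ` connected_component_set regular_points b)"
      by (rule connected_continuous_image[OF affine_weyl_continuous_on[OF that(1)]]) simp
    show "h ` connected_component_set regular_points b \<subseteq> regular_points"
      using connected_component_subset affine_weyl_regular_points[OF that(1)] by blast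
  qed
  obtain g where g: "affine_weyl g" "\<And>x. g (f x) = x" "\<And>x. f (g x) = x"
    using affine_weyl_inverseE[OF gf] by blast
  have fa: "f a \<in> regular_points" using affine_weyl_regular_points[OF gf] a by simp
  have "g ` connected_component_set regular_points (f a) \<subseteq> connected_component_set regular_points a"
    using gen[OF g(1) fa] g(2) by simp
  then have "f ` (g ` connected_component_set regular_points (f a)) \<subseteq> f ` connected_component_set regular_points a"
    by blast
  moreover have "f ` (g ` X) = X" for X using g(3) by (force simp: image_image)
  ultimately show ?thesis using gen[OF gf a] by auto
qed

lemma affine_weyl_alcove: "affine_weyl f \<Longrightarrow> A \<in> alcoves \<Phi> \<Longrightarrow> f ` A \<in> alcoves \<Phi>"
proof -
  assume gf: "affine_weyl f" and A: "A \<in> alcoves \<Phi>"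
  obtain a where a: "a \<in> A" using alcove_nonempty A by auto
  have aU: "a \<in> regular_points" using a alcove_subset_regular A by auto
  have "f ` A = connected_component_set regular_points (f a)"
    using alcove_eq_component[OF A a] affine_weyl_component[OF gf aU] by simp
  then show ?thesis using component_alcove affine_weyl_regular_points[OF gf] aU by simp
qed

lemma affine_weyl_closure:
  assumes gf: "affine_weyl f" shows "f ` closure A = closure (f ` A)"
proof -
  have gen: "h ` closure B \<subseteq> closure (h ` B)" if "affine_weyl h" for h B
    by (rule image_closure_subset[OF affine_weyl_continuous_on[OF that]]) (auto intro: closure_subset[THEN subsetD])
  obtain g where g: "affine_weyl g" "\<And>x. g (f x) = x" "\<And>x. f (g x) = x"
    using affine_weyl_inverseE[OF gf] by blast
  have "g ` closure (f ` A) \<subseteq> closure (g ` f ` A)" by (rule gen[OF g(1)])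
  also have "g ` f ` A = A" using g(2) by (force simp: image_image)
  finally have "f ` g ` closure (f ` A) \<subseteq> f ` closure A" by blast
  moreover have "f ` g ` closure (f ` A) = closure (f ` A)" using g(3) by (force simp: image_image)
  ultimately have c1: "closure (f ` A) \<subseteq> f ` closure A" by simp
  show ?thesis using gen[OF gf, of A] c1 by (rule equalityI)
qed

lemma affine_weyl_aff_dim:
  assumes gf: "affine_weyl f" shows "aff_dim (f ` W) = aff_dim W"
proof -
  have "f ` W = (+) (f 0) ` (lin_part f ` W)" by (simp add: image_image lin_part_def)
  moreover have "aff_dim ((+) (f 0) ` (lin_part f ` W)) = aff_dim (lin_part f ` W)"
    by (rule aff_dim_translation_eq)
  moreover have "aff_dim (lin_part f ` W) = aff_dim W"
    by (rule aff_dim_injective_linear_image[OF linear_lin_part[OF gf] inj_lin_part[OF gf]])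
  ultimately show ?thesis by simp
qed

lemma affine_weyl_hyp:
  assumes gf: "affine_weyl f" and b: "\<beta> \<in> \<Phi>" and j: "f 0 \<bullet> coroot (lin_part f \<beta>) = of_int j"
  shows "f ` hyp \<beta> k = hyp (lin_part f \<beta>) (k + j)"
proof
  show "f ` hyp \<beta> k \<subseteq> hyp (lin_part f \<beta>) (k + j)"
  proof
    fix y assume "y \<in> f ` hyp \<beta> k"
    then obtain x where x: "x \<in> hyp \<beta> k" "y = f x" by auto
    have "f x \<bullet> coroot (lin_part f \<beta>) = x \<bullet> coroot \<beta> + f 0 \<bullet> coroot (lin_part f \<beta>)"
      by (rule affine_weyl_inner_coroot[OF gf])
    then show "y \<in> hyp (lin_part f \<beta>) (k + j)" using x j by (simp add: hyp_def)
  qed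
  show "hyp (lin_part f \<beta>) (k + j) \<subseteq> f ` hyp \<beta> k"
  proof
    fix y assume y: "y \<in> hyp (lin_part f \<beta>) (k + j)"
    obtain g where g: "affine_weyl g" "\<And>x. g (f x) = x" "\<And>x. f (g x) = x"
      using affine_weyl_inverseE[OF gf] by blast
    have "f (g y) \<bullet> coroot (lin_part f \<beta>) = of_int (k + j)"
      using y g(3) by (simp add: hyp_def)
    moreover have "f (g y) \<bullet> coroot (lin_part f \<beta>) = g y \<bullet> coroot \<beta> + f 0 \<bullet> coroot (lin_part f \<beta>)"
      by (rule affine_weyl_inner_coroot[OF gf])
    ultimately have "g y \<bullet> coroot \<beta> = of_int k" using j by simp
    then have "g y \<in> hyp \<beta> k" by (simp add: hyp_def)
    moreover have "y = f (g y)" using g(3) by simp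
    ultimately show "y \<in> f ` hyp \<beta> k" by blast
  qed
qed

lemma aff_refl_alcove:
  assumes A: "A \<in> alcoves \<Phi>" and a: "\<alpha> \<in> \<Phi>" and s: "\<forall>x\<in>A. x \<bullet> coroot \<alpha> < of_int k"
  shows "aff_refl \<alpha> k ` A \<in> alcoves \<Phi>"
    and "\<forall>x\<in>aff_refl \<alpha> k ` A. x \<bullet> coroot \<alpha> > of_int k"
    and "closure (aff_refl \<alpha> k ` A) \<inter> hyp \<alpha> k = closure A \<inter> hyp \<alpha> k"
proof -
  have anz: "\<alpha> \<noteq> 0" using root_nonzero a by simp
  have W: "affine_weyl (aff_refl \<alpha> k)" using affine_weyl_aff_refl[OF a] .
  show "aff_refl \<alpha> k ` A \<in> alcoves \<Phi>" using affine_weyl_alcove[OF W A] .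
  show "\<forall>x\<in>aff_refl \<alpha> k ` A. x \<bullet> coroot \<alpha> > of_int k"
    using aff_refl_coroot[OF anz] s by auto
  have fixed: "aff_refl \<alpha> k ` X \<inter> hyp \<alpha> k = X \<inter> hyp \<alpha> k" for X
  proof (intro equalityI subsetI)
    fix y assume "y \<in> aff_refl \<alpha> k ` X \<inter> hyp \<alpha> k"
    then obtain x where x: "x \<in> X" "y = aff_refl \<alpha> k x" and y: "y \<in> hyp \<alpha> k"
      by auto
    then have "x = y" using aff_refl_aff_refl[OF anz] aff_refl_fixes_hyp[OF y] by metis
    then show "y \<in> X \<inter> hyp \<alpha> k" using x y by simp
  next
    fix y assume y: "y \<in> X \<inter> hyp \<alpha> k"
    then have "aff_refl \<alpha> k y = y" by (intro aff_refl_fixes_hyp) simp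
    then have "y \<in> aff_refl \<alpha> k ` X" using y by (metis IntD1 image_eqI)
    then show "y \<in> aff_refl \<alpha> k ` X \<inter> hyp \<alpha> k" using y by simp
  qed
  show "closure (aff_refl \<alpha> k ` A) \<inter> hyp \<alpha> k = closure A \<inter> hyp \<alpha> k"
    using affine_weyl_closure[OF W, of A] fixed[of "closure A"] by simp
qed

lemma alcove_arrow_aff_refl:
  assumes A: "A \<in> alcoves \<Phi>" and a: "\<alpha> \<in> \<Phi>" and s: "\<forall>x\<in>A. x \<bullet> coroot \<alpha> < of_int k"
    and W: "aff_dim (closure A \<inter> hyp \<alpha> k) = int DIM('a) - 1"
  shows "alcove_arrow \<Phi> A \<alpha> (aff_refl \<alpha> k ` A)"
proof -
  note A' = aff_refl_alcove[OF A a s]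
  have "A \<noteq> aff_refl \<alpha> k ` A" using s A'(2) alcove_nonempty[OF A] by fastforce
  then show ?thesis unfolding alcove_arrow_def wall_in_def using A A' a s W by blast
qed

lemma alcove_arrow_eq_aff_refl:
  assumes "alcove_arrow \<Phi> A \<alpha> B"
  obtains k where "B = aff_refl \<alpha> k ` A" "\<forall>x\<in>A. x \<bullet> coroot \<alpha> < of_int k"
    "wall_in \<Phi> A \<alpha> k (closure A \<inter> hyp \<alpha> k)"
proof -
  obtain k W where A: "A \<in> alcoves \<Phi>" and B: "B \<in> alcoves \<Phi>" and a: "\<alpha> \<in> \<Phi>"
    and WA: "wall_in \<Phi> A \<alpha> k W" and WB: "wall_in \<Phi> B \<alpha> k W"
    and sA: "\<forall>x\<in>A. x \<bullet> coroot \<alpha> < of_int k" and sB: "\<forall>x\<in>B. x \<bullet> coroot \<alpha> > of_int k"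
    using assms unfolding alcove_arrow_def by blast
  note A' = aff_refl_alcove[OF A a sA]
  have W: "W = closure A \<inter> hyp \<alpha> k" "W = closure B \<inter> hyp \<alpha> k" "aff_dim W = int DIM('a) - 1"
    using WA WB by (auto simp: wall_in_def)
  then have "aff_refl \<alpha> k ` A = B"
    using alcove_across_wall_unique[OF A'(1) B a _ _ _ W(3) A'(2) sB] A'(3) by blast
  then show ?thesis using that sA WA W(1) by blast
qed

lemma affine_weyl_add:
  assumes gf: "affine_weyl f" shows "f (x + y) = f x + lin_part f y"
proof -
  have l: "lin_part f (x + y) = lin_part f x + lin_part f y"
    using linear_lin_part[OF gf] by (simp add: linear_add)
  have "f (x + y) = lin_part f (x + y) + f 0" by (rule lin_part_add_const)
  also have "\<dots> = (lin_part f x + f 0) + lin_part f y" using l by (simp add: algebra_simps)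
  also have "lin_part f x + f 0 = f x" by (rule lin_part_add_const[symmetric])
  finally show ?thesis .
qed

lemma lin_part_inverse:
  assumes gf: "affine_weyl f" and gg: "affine_weyl g" and inv: "\<And>x. g (f x) = x"
  shows "lin_part g (lin_part f x) = x"
proof -
  have "g (f x) = g (lin_part f x + f 0)" by (simp add: lin_part_def)
  also have "\<dots> = g (f 0) + lin_part g (lin_part f x)"
    using affine_weyl_add[OF gg, of "f 0" "lin_part f x"] by (simp add: add.commute)
  finally show ?thesis using inv[of x] inv[of 0] by simp
qed

lemma affine_weyl_alcove_arrow:
  assumes gg: "affine_weyl g" and arr: "alcove_arrow \<Phi> A \<gamma> B"
  shows "alcove_arrow \<Phi> (g ` A) (lin_part g \<gamma>) (g ` B)"
proof -
  obtain k W where A: "A \<in> alcoves \<Phi>" and B: "B \<in> alcoves \<Phi>" and ne: "A \<noteq> B" and c: "\<gamma> \<in> \<Phi>"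
    and WA: "wall_in \<Phi> A \<gamma> k W" and WB: "wall_in \<Phi> B \<gamma> k W"
    and sA: "\<forall>x\<in>A. x \<bullet> coroot \<gamma> < of_int k" and sB: "\<forall>x\<in>B. x \<bullet> coroot \<gamma> > of_int k"
    using arr unfolding alcove_arrow_def by blast
  have tg: "lin_part g \<gamma> \<in> \<Phi>" using lin_part_root[OF gg c] .
  obtain j where j: "g 0 \<bullet> coroot (lin_part g \<gamma>) = of_int j"
    using affine_weyl_0_coroot_Ints[OF gg tg] by (metis Ints_cases)
  have inner: "g x \<bullet> coroot (lin_part g \<gamma>) = x \<bullet> coroot \<gamma> + of_int j" for x
    using affine_weyl_inner_coroot[OF gg, of x \<gamma>] j by simp
  have wall: "wall_in \<Phi> (g ` C) (lin_part g \<gamma>) (k + j) (g ` W)" if WC: "wall_in \<Phi> C \<gamma> k W" for C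
  proof -
    have Wd: "W = closure C \<inter> hyp \<gamma> k" "aff_dim W = int DIM('a) - 1"
      using WC by (auto simp: wall_in_def)
    have "g ` W = g ` closure C \<inter> g ` hyp \<gamma> k"
      using Wd(1) inj_affine_weyl[OF gg] by (simp add: image_Int)
    also have "\<dots> = closure (g ` C) \<inter> hyp (lin_part g \<gamma>) (k + j)"
      using affine_weyl_closure[OF gg] affine_weyl_hyp[OF gg c j] by simp
    finally have eqW: "g ` W = closure (g ` C) \<inter> hyp (lin_part g \<gamma>) (k + j)" .
    have ad: "aff_dim (g ` W) = int DIM('a) - 1"
      using affine_weyl_aff_dim[OF gg, of W] Wd(2) by simp
    show ?thesis unfolding wall_in_def using tg ad eqW by blast
  qed
  have "g ` A \<noteq> g ` B" using ne inj_affine_weyl[OF gg] by (simp add: inj_image_eq_iff)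
  moreover have "\<forall>x\<in>g ` A. x \<bullet> coroot (lin_part g \<gamma>) < of_int (k + j)"
    using sA inner by auto
  moreover have "\<forall>x\<in>g ` B. x \<bullet> coroot (lin_part g \<gamma>) > of_int (k + j)"
    using sB inner by auto
  ultimately show ?thesis unfolding alcove_arrow_def
    using affine_weyl_alcove[OF gg A] affine_weyl_alcove[OF gg B] tg wall[OF WA] wall[OF WB]
    by blast
qed

end

section \<open>The fundamental alcove and the points of Z\<close>

context irr_pos_root_system begin

definition "rho_h = (1 / hcox) *\<^sub>R rho P"

definition "fund_alcove = connected_component_set regular_points rho_h"

lemma rho_h_coroot: "rho_h \<bullet> coroot \<beta> = (rho P \<bullet> coroot \<beta>) / hcox"
  by (simp add: rho_h_def)

lemma rho_h_coroot_simple: "\<alpha>i \<in> Delta \<Longrightarrow> rho_h \<bullet> coroot \<alpha>i = 1 / hcox"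
  by (simp add: rho_h_coroot rho_simple_coroot)

lemma rho_h_coroot_theta: "rho_h \<bullet> coroot theta = 1 - 1 / hcox"
proof -
  have "rho_h \<bullet> coroot theta = (hcox - 1) / hcox"
    using rho_h_coroot[of theta] by (simp add: coroot_theta rho_theta_v)
  then show ?thesis using hcox_pos by (simp add: diff_divide_distrib)
qed

lemma rho_h_coroot_P: "\<beta> \<in> P \<Longrightarrow> 0 < rho_h \<bullet> coroot \<beta> \<and> rho_h \<bullet> coroot \<beta> < 1"
  using rho_coroot_P_bounds[of \<beta>] hcox_pos by (auto simp: rho_h_coroot field_simps)

lemma rho_h_regular: "rho_h \<in> regular_points"
  using rho_h_coroot_P by (intro unit_coroots_regular) blast

lemma fund_alcove_iff: "x \<in> fund_alcove \<longleftrightarrow> (\<forall>\<beta>\<in>P. 0 < x \<bullet> coroot \<beta> \<and> x \<bullet> coroot \<beta> < 1)"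
proof
  assume "x \<in> fund_alcove"
  then have x: "x \<in> regular_points" "same_side rho_h x"
    using connected_component_regular_points[OF rho_h_regular] by (auto simp: fund_alcove_def)
  show "\<forall>\<beta>\<in>P. 0 < x \<bullet> coroot \<beta> \<and> x \<bullet> coroot \<beta> < 1"
  proof
    fix \<beta> assume \<beta>: "\<beta> \<in> P"
    then have "\<beta> \<in> \<Phi>" using P_subset by auto
    then have "x \<bullet> coroot \<beta> \<noteq> of_int 0"
      and side: "x \<bullet> coroot \<beta> < of_int k \<longleftrightarrow> rho_h \<bullet> coroot \<beta> < of_int k" for k
      using x unfolding regular_points_iff same_side_def by blast+
    then show "0 < x \<bullet> coroot \<beta> \<and> x \<bullet> coroot \<beta> < 1"
      using side[of 0] side[of 1] rho_h_coroot_P[OF \<beta>] by auto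
  qed
next
  assume x: "\<forall>\<beta>\<in>P. 0 < x \<bullet> coroot \<beta> \<and> x \<bullet> coroot \<beta> < 1"
  then have "same_side rho_h x" using unit_coroots_same_side[OF _ x] rho_h_coroot_P by blast
  then show "x \<in> fund_alcove"
    using unit_coroots_regular[OF x] connected_component_regular_points[OF rho_h_regular]
    by (simp add: fund_alcove_def)
qed

lemma fund_alcove_alcove: "fund_alcove \<in> alcoves \<Phi>" unfolding fund_alcove_def
  by (rule component_alcove[OF rho_h_regular])

lemma rho_h_fund_alcove: "rho_h \<in> fund_alcove"
  using rho_h_regular by (simp add: fund_alcove_def)

lemma Zset_iff: "z \<in> Zset \<Phi> P \<longleftrightarrow> (\<exists>l\<in>weight_lattice \<Phi>. z = (1 / hcox) *\<^sub>R l) \<and> z \<in> regular_points"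
  by (simp add: Zset_def regular_points_iff_Ints)

lemma rho_weight_lattice: "rho P \<in> weight_lattice \<Phi>"
  unfolding weight_lattice_def
proof (intro CollectI ballI)
  fix \<alpha> assume "\<alpha> \<in> \<Phi>"
  then obtain n where "rho P \<bullet> coroot \<alpha> = of_int n" using rho_coroot_int by blast
  then show "rho P \<bullet> coroot \<alpha> \<in> \<int>" by simp
qed

lemma rho_h_Zset: "rho_h \<in> Zset \<Phi> P"
  using Zset_iff rho_weight_lattice rho_h_regular rho_h_def by blast

lemma fund_alcove_Zset:
  assumes z: "z \<in> fund_alcove" "z \<in> Zset \<Phi> P" shows "z = rho_h"
proof -
  obtain l where l: "l \<in> weight_lattice \<Phi>" "z = (1 / hcox) *\<^sub>R l"
    using z Zset_iff by blast
  have hz: "l = hcox *\<^sub>R z" using l hcox_pos by simp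
  obtain c where c: "theta_v = (\<Sum>\<gamma>\<in>Delta. real (c \<gamma>) *\<^sub>R coroot \<gamma>)" "\<forall>\<gamma>\<in>Delta. c \<gamma> \<ge> 1"
    using theta_v_full_support by blast
  have "l \<bullet> coroot \<gamma> \<in> \<int>" if "\<gamma> \<in> Delta" for \<gamma>
    using l that simple_root by (auto simp: weight_lattice_def)
  moreover have "l \<bullet> coroot \<gamma> > 0" if "\<gamma> \<in> Delta" for \<gamma>
    using z(1) that fund_alcove_iff simple_in_P hz hcox_pos by auto
  ultimately have ge1: "\<forall>\<gamma>\<in>Delta. l \<bullet> coroot \<gamma> \<in> \<int> \<and> 1 \<le> l \<bullet> coroot \<gamma>"
    by (metis Ints_cases of_int_0_less_iff of_int_1_le_iff int_one_le_iff_zero_less)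
  have "z \<bullet> theta_v < 1" using z(1) fund_alcove_iff theta_in_P coroot_theta by auto
  then have "l \<bullet> theta_v < hcox" using hz hcox_pos by simp
  moreover have "l \<bullet> theta_v = (\<Sum>\<gamma>\<in>Delta. real (c \<gamma>) * (l \<bullet> coroot \<gamma>))"
    by (simp add: c inner_sum_right)
  moreover have "hcox = (\<Sum>\<gamma>\<in>Delta. real (c \<gamma>)) + 1"
    using hcox_eq c rho_coroot_comb by simp
  \<comment> \<open>Since \<open>hcox = 1 + \<Sum>c\<close>, the integers \<open>l \<bullet> coroot \<gamma> \<ge> 1\<close> cannot exceed 1, so \<open>l = rho P\<close>.\<close>
  ultimately have "(\<Sum>\<gamma>\<in>Delta. real (c \<gamma>) * (l \<bullet> coroot \<gamma> - 1)) < 1"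
    by (simp add: algebra_simps sum_subtractf)
  then have "\<forall>\<gamma>\<in>Delta. l \<bullet> coroot \<gamma> = 1"
    using Ints_weighted_excess_lt_1[OF finite_Delta c(2) ge1] by blast
  then have "\<forall>\<gamma>\<in>Delta. (l - rho P) \<bullet> coroot \<gamma> = 0"
    using rho_simple_coroot by (simp add: inner_diff_left)
  then have "l - rho P = 0" by (rule orthogonal_simple_coroots_zero)
  then show ?thesis using l by (simp add: rho_h_def)
qed

lemma affine_weyl_Zset:
  assumes gf: "affine_weyl f" and z: "z \<in> Zset \<Phi> P" shows "f z \<in> Zset \<Phi> P"
proof -
  obtain l where l: "l \<in> weight_lattice \<Phi>" "z = (1 / hcox) *\<^sub>R l"
    using z Zset_iff by blast
  define l' where "l' = lin_part f l + hcox *\<^sub>R f 0"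
  have "f z = (1 / hcox) *\<^sub>R l'"
  proof -
    have "f z = lin_part f z + f 0" by (rule lin_part_add_const)
    also have "lin_part f z = (1 / hcox) *\<^sub>R lin_part f l"
      using l linear_lin_part[OF gf] by (simp add: linear_scale)
    finally show ?thesis using hcox_pos by (simp add: l'_def scaleR_add_right)
  qed
  moreover have "l' \<in> weight_lattice \<Phi>"
    unfolding weight_lattice_def
  proof (intro CollectI ballI)
    fix \<gamma> assume g: "\<gamma> \<in> \<Phi>"
    obtain \<beta> where b: "\<beta> \<in> \<Phi>" "lin_part f \<beta> = \<gamma>"
      using g lin_part_Phi[OF gf] by (metis imageE)
    have "lin_part f l \<bullet> coroot \<gamma> = l \<bullet> coroot \<beta>"
      using b coroot_lin_part[OF gf] lin_part_inner[OF gf] by metis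
    then have "lin_part f l \<bullet> coroot \<gamma> \<in> \<int>"
      using l b by (simp add: weight_lattice_def)
    moreover have "(hcox *\<^sub>R f 0) \<bullet> coroot \<gamma> \<in> \<int>"
      using affine_weyl_0_coroot_Ints[OF gf g] hcox_Ints by simp
    ultimately show "l' \<bullet> coroot \<gamma> \<in> \<int>" by (simp add: l'_def inner_add_left)
  qed
  moreover have "f z \<in> regular_points"
    using affine_weyl_regular_points[OF gf] z Zset_iff by blast
  ultimately show ?thesis using Zset_iff by blast
qed

lemma affine_weyl_to_fund_alcove:
  assumes a: "a \<in> regular_points" shows "\<exists>f. affine_weyl f \<and> f a \<in> fund_alcove"
proof -
  obtain ea where ea: "ea > 0" "\<forall>\<beta>\<in>\<Phi>. \<forall>m::int. ea \<le> \<bar>a \<bullet> coroot \<beta> - of_int m\<bar>"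
    using regular_point_margin a by blast
  obtain ep where ep: "ep > 0" "\<forall>\<beta>\<in>\<Phi>. \<forall>m::int. ep \<le> \<bar>rho_h \<bullet> coroot \<beta> - of_int m\<bar>"
    using regular_point_margin rho_h_regular by blast
  obtain \<mu> where \<mu>: "\<mu> > 0" "\<forall>\<beta>\<in>\<Phi>. \<mu> \<le> \<beta> \<bullet> \<beta>"
    using root_inner_self_lower_bound by blast
  \<comment> \<open>Descent on the squared distance from \<open>f a\<close> to \<open>rho_h\<close>: the margins of \<open>a\<close> and \<open>rho_h\<close>
    from all hyperplanes bound its decrease under each separating reflection from below.\<close>
  show ?thesis
  proof (rule exists_by_real_descent)
    show "0 < ea * ep * \<mu>" using ea ep \<mu> by simp
    show "affine_weyl id" by (rule affine_weyl_id)
    show "0 \<le> (f a - rho_h) \<bullet> (f a - rho_h)" for f by simp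
  next
    fix f assume f: "affine_weyl f" and "f a \<notin> fund_alcove"
    moreover have "f a \<in> regular_points" using affine_weyl_regular_points[OF f] a by simp
    ultimately obtain \<beta> k where "\<beta> \<in> \<Phi>" and
      "(aff_refl \<beta> k (f a) - rho_h) \<bullet> (aff_refl \<beta> k (f a) - rho_h)
        \<le> (f a - rho_h) \<bullet> (f a - rho_h) - ea * ep * \<mu>"
      using aff_refl_towards[OF _ rho_h_regular _ affine_weyl_margin[OF f ea(2)] _ ep(2) _ \<mu>(2)] ea ep \<mu>
      by (auto simp: fund_alcove_def)
    then show "\<exists>g. affine_weyl g
        \<and> (g a - rho_h) \<bullet> (g a - rho_h) \<le> (f a - rho_h) \<bullet> (f a - rho_h) - ea * ep * \<mu>"
      using affine_weyl_step[OF f] by (metis comp_apply)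
  qed
qed

lemma alcove_to_fund_alcove:
  assumes A: "A \<in> alcoves \<Phi>" shows "\<exists>f. affine_weyl f \<and> f ` A = fund_alcove"
proof -
  obtain a where a: "a \<in> A" using alcove_nonempty A by auto
  have aU: "a \<in> regular_points" using a alcove_subset_regular A by auto
  obtain f where f: "affine_weyl f" "f a \<in> fund_alcove"
    using affine_weyl_to_fund_alcove aU by blast
  have "f ` A = connected_component_set regular_points (f a)"
    using alcove_eq_component[OF A a] affine_weyl_component[OF f(1) aU] by simp
  also have "\<dots> = fund_alcove"
    using f(2) unfolding fund_alcove_def by (rule connected_component_eq)
  finally show ?thesis using f by blast
qed

lemma Zset_alcove_unique:
  assumes A: "A \<in> alcoves \<Phi>" and z1: "z1 \<in> A" "z1 \<in> Zset \<Phi> P" and z2: "z2 \<in> A" "z2 \<in> Zset \<Phi> P"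
  shows "z1 = z2"
proof -
  obtain f where f: "affine_weyl f" "f ` A = fund_alcove" using alcove_to_fund_alcove A by blast
  have "f z1 = rho_h" using fund_alcove_Zset affine_weyl_Zset[OF f(1) z1(2)] f z1 by blast
  moreover have "f z2 = rho_h" using fund_alcove_Zset affine_weyl_Zset[OF f(1) z2(2)] f z2 by blast
  ultimately show ?thesis using inj_affine_weyl[OF f(1)] by (metis injD)
qed

lemma Zset_alcove_exists:
  assumes A: "A \<in> alcoves \<Phi>" shows "\<exists>z. z \<in> A \<and> z \<in> Zset \<Phi> P"
proof -
  obtain f where f: "affine_weyl f" "f ` A = fund_alcove" using alcove_to_fund_alcove A by blast
  obtain g where g: "affine_weyl g" "\<And>x. g (f x) = x" "\<And>x. f (g x) = x"
    using affine_weyl_inverseE[OF f(1)] by blast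
  have "g rho_h \<in> g ` fund_alcove" using rho_h_fund_alcove by simp
  also have "g ` fund_alcove = g ` f ` A" using f(2) by simp
  also have "\<dots> = A" using g(2) by (simp add: image_image)
  finally show ?thesis using affine_weyl_Zset[OF g(1) rho_h_Zset] by blast
qed

lemma zeta_eq:
  assumes A: "A \<in> alcoves \<Phi>" and z: "z \<in> A" "z \<in> Zset \<Phi> P" shows "zeta \<Phi> P A = z"
  unfolding zeta_def using Zset_alcove_unique[OF A] z by (intro the_equality) auto

lemma zeta_in:
  assumes A: "A \<in> alcoves \<Phi>" shows "zeta \<Phi> P A \<in> A" "zeta \<Phi> P A \<in> Zset \<Phi> P"
  using Zset_alcove_exists[OF A] zeta_eq[OF A] by auto

lemma zeta_affine_weyl:
  assumes gf: "affine_weyl f" and A: "A \<in> alcoves \<Phi>" shows "zeta \<Phi> P (f ` A) = f (zeta \<Phi> P A)"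
  using zeta_eq[OF affine_weyl_alcove[OF gf A]] zeta_in[OF A] affine_weyl_Zset[OF gf] by blast

lemma zeta_fund_alcove: "zeta \<Phi> P fund_alcove = rho_h"
  using zeta_eq[OF fund_alcove_alcove rho_h_fund_alcove rho_h_Zset] .

section \<open>Walls of the fundamental alcove\<close>

lemma closure_fund_alcove: "closure fund_alcove \<subseteq> {x. \<forall>\<beta>\<in>P. 0 \<le> x \<bullet> coroot \<beta> \<and> x \<bullet> coroot \<beta> \<le> 1}"
proof (rule closure_minimal)
  show "fund_alcove \<subseteq> {x. \<forall>\<beta>\<in>P. 0 \<le> x \<bullet> coroot \<beta> \<and> x \<bullet> coroot \<beta> \<le> 1}"
    using fund_alcove_iff by fastforce
  have "{x. \<forall>\<beta>\<in>P. 0 \<le> x \<bullet> coroot \<beta> \<and> x \<bullet> coroot \<beta> \<le> 1}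
      = (\<Inter>\<beta>\<in>P. {x. x \<bullet> coroot \<beta> \<ge> 0} \<inter> {x. x \<bullet> coroot \<beta> \<le> 1})"
    by auto
  moreover have "closed (\<Inter>\<beta>\<in>P. {x. x \<bullet> coroot \<beta> \<ge> 0} \<inter> {x. x \<bullet> coroot \<beta> \<le> 1})"
    by (intro closed_INT ballI closed_Int closed_inner_ge closed_inner_le)
  ultimately show "closed {x. \<forall>\<beta>\<in>P. 0 \<le> x \<bullet> coroot \<beta> \<and> x \<bullet> coroot \<beta> \<le> 1}"
    by simp
qed

lemma closure_fund_alcove_coroot:
  "x \<in> closure fund_alcove \<Longrightarrow> \<beta> \<in> P \<Longrightarrow> 0 \<le> x \<bullet> coroot \<beta> \<and> x \<bullet> coroot \<beta> \<le> 1"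
  using closure_fund_alcove by blast

lemma wall_two_P_hyperplanes:
  assumes "aff_dim W = int DIM('a) - 1" "\<delta>1 \<in> P" "\<delta>2 \<in> P"
    "W \<subseteq> {x. x \<bullet> coroot \<delta>1 = a \<and> x \<bullet> coroot \<delta>2 = b}"
  shows "\<delta>1 = \<delta>2"
  using wall_two_root_hyperplanes[OF assms(1) _ _ assms(4)] assms(2,3) P_subset neg_notin_P by blast

lemma closure_fund_alcove_coroot_comb:
  assumes "x \<in> closure fund_alcove" "x \<bullet> (\<Sum>\<delta>\<in>Delta. real (c \<delta>) *\<^sub>R coroot \<delta>) \<le> 0"
    "\<delta> \<in> Delta" "c \<delta> > 0"
  shows "x \<bullet> coroot \<delta> = 0"
proof -
  have nonneg: "\<forall>\<delta>\<in>Delta. 0 \<le> real (c \<delta>) * (x \<bullet> coroot \<delta>)"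
    using closure_fund_alcove_coroot[OF assms(1)] simple_in_P by (auto intro!: mult_nonneg_nonneg)
  moreover have "(\<Sum>\<delta>\<in>Delta. real (c \<delta>) * (x \<bullet> coroot \<delta>)) \<le> 0"
    using assms(2) by (simp add: inner_sum_right)
  ultimately have "(\<Sum>\<delta>\<in>Delta. real (c \<delta>) * (x \<bullet> coroot \<delta>)) = 0"
    by (simp add: antisym sum_nonneg)
  then have "\<forall>\<delta>\<in>Delta. real (c \<delta>) * (x \<bullet> coroot \<delta>) = 0"
    using nonneg by (simp add: sum_nonneg_eq_0_iff[OF finite_Delta])
  then have "real (c \<delta>) * (x \<bullet> coroot \<delta>) = 0" using assms(3) by blast
  then show ?thesis using assms(4) by simp
qed

lemma fund_alcove_wall_0:
  assumes g: "\<gamma> \<in> P" and W: "W \<subseteq> closure fund_alcove" "W \<subseteq> hyp \<gamma> 0" "aff_dim W = int DIM('a) - 1"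
  shows "\<gamma> \<in> Delta"
proof -
  obtain c where c: "coroot \<gamma> = (\<Sum>\<delta>\<in>Delta. real (c \<delta>) *\<^sub>R coroot \<delta>)"
    using coroot_P_nonneg_comb g by blast
  have zero: "\<forall>x\<in>W. x \<bullet> coroot \<delta> = 0" if "\<delta> \<in> Delta" "c \<delta> > 0" for \<delta>
  proof
    fix x assume "x \<in> W"
    then have "x \<in> closure fund_alcove" "x \<bullet> coroot \<gamma> = 0"
      using W(1,2) by (auto simp: hyp_def)
    then show "x \<bullet> coroot \<delta> = 0"
      using closure_fund_alcove_coroot_comb[of x c \<delta>] that c by simp
  qed
  have "\<exists>\<delta>\<in>Delta. c \<delta> > 0"
  proof (rule ccontr)
    assume "\<not> ?thesis"
    then have "coroot \<gamma> = 0" using c by simp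
    then show False using g P_subset root_nonzero by auto
  qed
  then obtain \<delta> where \<delta>: "\<delta> \<in> Delta" "c \<delta> > 0" by blast
  have "c \<delta>' = 0" if "\<delta>' \<in> Delta" "\<delta>' \<noteq> \<delta>" for \<delta>'
  proof (rule ccontr)
    assume "c \<delta>' \<noteq> 0"
    then have "W \<subseteq> {x. x \<bullet> coroot \<delta> = 0 \<and> x \<bullet> coroot \<delta>' = 0}"
      using zero \<delta> that by auto
    then show False
      using wall_two_P_hyperplanes[OF W(3), of \<delta> \<delta>'] \<delta>(1) that simple_in_P
      by blast
  qed
  then have cg: "coroot \<gamma> = real (c \<delta>) *\<^sub>R coroot \<delta>"
    using c \<delta> by (simp add: sum.remove[OF finite_Delta \<delta>(1)])
  have "coroot \<gamma> \<in> coroot ` \<Phi>" "coroot \<delta> \<in> coroot ` \<Phi>"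
    using g \<delta>(1) P_subset simple_root by auto
  then have "real (c \<delta>) = 1 \<or> real (c \<delta>) = -1"
    using pos_root_system.root_multiple[OF pos_root_system_coroots, of "coroot \<delta>" "real (c \<delta>)"] cg
    by simp
  then have "coroot \<gamma> = coroot \<delta>" using cg by auto
  then show ?thesis using coroot_inj g P_subset \<delta> simple_root by auto
qed

lemma fund_alcove_wall_1:
  assumes g: "\<gamma> \<in> P" and W: "W \<subseteq> closure fund_alcove" "W \<subseteq> hyp \<gamma> 1" "aff_dim W = int DIM('a) - 1"
  shows "\<gamma> = theta"
proof -
  obtain d where d: "theta_v - coroot \<gamma> = (\<Sum>\<delta>\<in>Delta. real (d \<delta>) *\<^sub>R coroot \<delta>)"
    using dom_le_theta_v[OF g] by (auto simp: dom_le_def)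
  have "x \<bullet> (theta_v - coroot \<gamma>) \<le> 0" if "x \<in> W" for x
  proof -
    have "x \<bullet> coroot \<gamma> = 1" "x \<bullet> theta_v \<le> 1"
      using that W(1,2) closure_fund_alcove_coroot[of x theta] theta_in_P
      by (auto simp: hyp_def coroot_theta)
    then show ?thesis by (simp add: inner_diff_right)
  qed
  then have zero: "\<forall>x\<in>W. x \<bullet> coroot \<delta> = 0" if "\<delta> \<in> Delta" "d \<delta> > 0" for \<delta>
    using closure_fund_alcove_coroot_comb[of _ d \<delta>] that W(1) d by auto
  have "\<forall>\<delta>\<in>Delta. d \<delta> = 0"
  proof (rule ccontr)
    assume "\<not> ?thesis"
    then obtain \<delta> where \<delta>: "\<delta> \<in> Delta" "d \<delta> > 0" by auto
    have "x \<bullet> coroot theta = 1" if "x \<in> W" for x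
    proof -
      have "x \<bullet> (theta_v - coroot \<gamma>) = (\<Sum>\<delta>'\<in>Delta. real (d \<delta>') * (x \<bullet> coroot \<delta>'))"
        by (simp add: d inner_sum_right)
      also have "\<dots> = 0"
      proof (intro sum.neutral ballI)
        fix \<delta>' assume "\<delta>' \<in> Delta"
        then show "real (d \<delta>') * (x \<bullet> coroot \<delta>') = 0"
          using zero[of \<delta>'] that by (cases "d \<delta>' = 0") auto
      qed
      finally have "x \<bullet> (theta_v - coroot \<gamma>) = 0" .
      moreover have "x \<bullet> coroot \<gamma> = 1" using that W(2) by (auto simp: hyp_def)
      ultimately show ?thesis by (simp add: coroot_theta inner_diff_right)
    qed
    then have "W \<subseteq> {x. x \<bullet> coroot \<delta> = 0 \<and> x \<bullet> coroot theta = 1}"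
      using zero \<delta> by auto
    moreover from this have "\<delta> = theta"
      using wall_two_P_hyperplanes[OF W(3), of \<delta> theta] \<delta>(1) theta_in_P simple_in_P
      by blast
    moreover obtain w where "w \<in> W" using aff_dim_wall_nonempty[OF W(3)] by blast
    ultimately show False by auto
  qed
  then have "coroot \<gamma> = coroot theta" using d by (simp add: coroot_theta)
  then show ?thesis using coroot_inj g theta_in_P P_subset by blast
qed

lemma fund_alcove_wall_dist_P:
  assumes g: "\<gamma> \<in> P" and W: "W \<subseteq> closure fund_alcove" "W \<subseteq> hyp \<gamma> m" "aff_dim W = int DIM('a) - 1"
  shows "\<bar>rho_h \<bullet> coroot \<gamma> - of_int m\<bar> = 1 / hcox"
proof -
  obtain w where w: "w \<in> W" using aff_dim_wall_nonempty[OF W(3)] by auto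
  then have "0 \<le> w \<bullet> coroot \<gamma>" "w \<bullet> coroot \<gamma> \<le> 1" "w \<bullet> coroot \<gamma> = of_int m"
    using closure_fund_alcove_coroot W g by (auto simp: hyp_def)
  then have "m = 0 \<or> m = 1" by auto
  then show ?thesis
  proof
    assume "m = 0"
    then have "\<gamma> \<in> Delta" using fund_alcove_wall_0 assms by blast
    then show ?thesis using \<open>m = 0\<close> hcox_pos by (simp add: rho_h_coroot_simple)
  next
    assume "m = 1"
    then have "\<gamma> = theta" using fund_alcove_wall_1 assms by blast
    then show ?thesis using \<open>m = 1\<close> hcox_pos by (simp add: rho_h_coroot_theta)
  qed
qed

lemma fund_alcove_wall_dist:
  assumes g: "\<gamma> \<in> \<Phi>" and W: "W \<subseteq> closure fund_alcove" "W \<subseteq> hyp \<gamma> m" "aff_dim W = int DIM('a) - 1"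
  shows "\<bar>rho_h \<bullet> coroot \<gamma> - of_int m\<bar> = 1 / hcox"
proof (cases "\<gamma> \<in> P")
  case True then show ?thesis using fund_alcove_wall_dist_P W by blast
next
  case False
  then have "- \<gamma> \<in> P" using root_or_neg_in_P g by auto
  moreover have "W \<subseteq> hyp (- \<gamma>) (- m)" using W(2) hyp_neg[of \<gamma> m] by simp
  ultimately have "\<bar>rho_h \<bullet> coroot (- \<gamma>) - of_int (- m)\<bar> = 1 / hcox"
    using fund_alcove_wall_dist_P W by blast
  then show ?thesis by (simp add: abs_minus_commute)
qed

lemma zeta_wall_dist:
  assumes A: "A \<in> alcoves \<Phi>" and a: "\<alpha> \<in> \<Phi>" and W: "wall_in \<Phi> A \<alpha> k W"
  shows "\<bar>zeta \<Phi> P A \<bullet> coroot \<alpha> - of_int k\<bar> = 1 / hcox"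
proof -
  obtain f where f: "affine_weyl f" "f ` A = fund_alcove" using alcove_to_fund_alcove A by blast
  have fz: "f (zeta \<Phi> P A) = rho_h"
    using zeta_affine_weyl[OF f(1) A] f(2) zeta_fund_alcove by simp
  have ta: "lin_part f \<alpha> \<in> \<Phi>" using lin_part_root[OF f(1) a] .
  obtain j where j: "f 0 \<bullet> coroot (lin_part f \<alpha>) = of_int j"
    using affine_weyl_0_coroot_Ints[OF f(1) ta] by (metis Ints_cases)
  have Weq: "W = closure A \<inter> hyp \<alpha> k" "aff_dim W = int DIM('a) - 1"
    using W by (auto simp: wall_in_def)
  have "f ` W = f ` closure A \<inter> f ` hyp \<alpha> k"
    using Weq(1) inj_affine_weyl[OF f(1)] by (simp add: image_Int)
  also have "\<dots> = closure fund_alcove \<inter> hyp (lin_part f \<alpha>) (k + j)"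
    using affine_weyl_closure[OF f(1)] f(2) affine_weyl_hyp[OF f(1) a j] by simp
  finally have fW: "f ` W = closure fund_alcove \<inter> hyp (lin_part f \<alpha>) (k + j)" .
  have "aff_dim (f ` W) = int DIM('a) - 1" using affine_weyl_aff_dim[OF f(1)] Weq(2) by simp
  then have "\<bar>rho_h \<bullet> coroot (lin_part f \<alpha>) - of_int (k + j)\<bar> = 1 / hcox"
    using fund_alcove_wall_dist[OF ta] fW by blast
  moreover have "rho_h \<bullet> coroot (lin_part f \<alpha>)
      = zeta \<Phi> P A \<bullet> coroot \<alpha> + f 0 \<bullet> coroot (lin_part f \<alpha>)"
    using affine_weyl_inner_coroot[OF f(1), of "zeta \<Phi> P A" \<alpha>] fz by simp
  ultimately show ?thesis using j by simp
qed

lemma zeta_arrow: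
  assumes "alcove_arrow \<Phi> A \<alpha> B"
  shows "zeta \<Phi> P B - zeta \<Phi> P A = (1 / hcox) *\<^sub>R \<alpha>"
proof -
  obtain k where B: "B = aff_refl \<alpha> k ` A" and s: "\<forall>x\<in>A. x \<bullet> coroot \<alpha> < of_int k"
    and W: "wall_in \<Phi> A \<alpha> k (closure A \<inter> hyp \<alpha> k)"
    using alcove_arrow_eq_aff_refl[OF assms] by blast
  have A: "A \<in> alcoves \<Phi>" and a: "\<alpha> \<in> \<Phi>"
    using assms by (auto simp: alcove_arrow_def)
  define z where "z = zeta \<Phi> P A"
  have "\<bar>z \<bullet> coroot \<alpha> - of_int k\<bar> = 1 / hcox"
    using zeta_wall_dist[OF A a W] by (simp add: z_def)
  moreover have "z \<bullet> coroot \<alpha> < of_int k"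
    using s zeta_in(1)[OF A] by (simp add: z_def)
  ultimately have "z \<bullet> coroot \<alpha> - of_int k = - (1 / hcox)" by linarith
  then have "aff_refl \<alpha> k z = z + (1 / hcox) *\<^sub>R \<alpha>" by (simp add: aff_refl_eq)
  moreover have "zeta \<Phi> P B = aff_refl \<alpha> k z"
    using zeta_affine_weyl[OF affine_weyl_aff_refl[OF a] A] B by (simp add: z_def)
  ultimately show ?thesis by (simp add: z_def)
qed

lemma fund_alcove_simplex:
  assumes pos: "\<forall>\<alpha>i\<in>Delta. y \<bullet> coroot \<alpha>i > 0" and th: "y \<bullet> theta_v < 1"
  shows "y \<in> fund_alcove"
proof -
  have Pb: "0 < y \<bullet> coroot \<beta> \<and> y \<bullet> coroot \<beta> < 1" if b: "\<beta> \<in> P" for \<beta>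
  proof
    obtain c where c: "coroot \<beta> = (\<Sum>\<delta>\<in>Delta. real (c \<delta>) *\<^sub>R coroot \<delta>)"
      using coroot_P_nonneg_comb b by blast
    have "\<exists>\<delta>\<in>Delta. c \<delta> > 0"
    proof (rule ccontr)
      assume "\<not> ?thesis" then have "coroot \<beta> = 0" using c by simp
      then show False using b P_subset root_nonzero by auto
    qed
    then obtain \<delta> where d: "\<delta> \<in> Delta" "c \<delta> > 0" by blast
    have "y \<bullet> coroot \<beta> = (\<Sum>\<delta>\<in>Delta. real (c \<delta>) * (y \<bullet> coroot \<delta>))"
      by (simp add: c inner_sum_right)
    also have "\<dots> > 0"
    proof (rule sum_pos2[OF finite_Delta d(1)])
      show "0 < real (c \<delta>) * (y \<bullet> coroot \<delta>)" using pos d by simp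
      fix i assume "i \<in> Delta"
      then show "0 \<le> real (c i) * (y \<bullet> coroot i)" using pos by (simp add: less_imp_le)
    qed
    finally show "0 < y \<bullet> coroot \<beta>" .
    obtain e where e: "theta_v - coroot \<beta> = (\<Sum>\<delta>\<in>Delta. real (e \<delta>) *\<^sub>R coroot \<delta>)"
      using dom_le_theta_v[OF b] by (auto simp: dom_le_def)
    have "y \<bullet> (theta_v - coroot \<beta>) = (\<Sum>\<delta>\<in>Delta. real (e \<delta>) * (y \<bullet> coroot \<delta>))"
      by (simp add: e inner_sum_right)
    also have "\<dots> \<ge> 0" using pos by (intro sum_nonneg) (simp add: less_imp_le)
    finally show "y \<bullet> coroot \<beta> < 1" using th by (simp add: inner_diff_right)
  qed
  then show ?thesis using fund_alcove_iff by blast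
qed

lemma closure_fund_alcove_simplex:
  assumes pos: "\<forall>\<alpha>i\<in>Delta. x \<bullet> coroot \<alpha>i \<ge> 0" and th: "x \<bullet> theta_v \<le> 1"
  shows "x \<in> closure fund_alcove"
proof (cases "x = rho_h")
  case True then show ?thesis using rho_h_fund_alcove closure_subset by blast
next
  case False
  have "open_segment x rho_h \<subseteq> fund_alcove"
  proof
    fix z assume "z \<in> open_segment x rho_h"
    then obtain u where u: "0 < u" "u < 1" "z = (1 - u) *\<^sub>R x + u *\<^sub>R rho_h"
      by (auto simp: in_segment)
    have "\<forall>\<alpha>i\<in>Delta. z \<bullet> coroot \<alpha>i > 0"
    proof
      fix \<alpha>i assume ai: "\<alpha>i \<in> Delta"
      have "z \<bullet> coroot \<alpha>i = (1 - u) * (x \<bullet> coroot \<alpha>i) + u * (1 / hcox)"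
        using rho_simple_coroot[OF ai] by (simp add: u inner_add_left rho_h_coroot)
      moreover have "(1 - u) * (x \<bullet> coroot \<alpha>i) \<ge> 0" using pos ai u by simp
      moreover have "u * (1 / hcox) > 0" using u hcox_pos by simp
      ultimately show "z \<bullet> coroot \<alpha>i > 0" by linarith
    qed
    moreover have "z \<bullet> theta_v < 1"
    proof -
      have p0t: "rho_h \<bullet> theta_v = (hcox - 1) / hcox"
        using rho_theta_v by (simp add: rho_h_def)
      have "z \<bullet> theta_v = (1 - u) * (x \<bullet> theta_v) + u * ((hcox - 1) / hcox)"
        using p0t by (simp add: u inner_add_left)
      moreover have "(1 - u) * (x \<bullet> theta_v) \<le> 1 - u"
        using th u by (simp add: mult_left_le)
      moreover have "u * ((hcox - 1) / hcox) < u" using u hcox_pos by (simp add: field_simps)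
      ultimately show ?thesis by linarith
    qed
    ultimately show "z \<in> fund_alcove" by (rule fund_alcove_simplex)
  qed
  then have "closure (open_segment x rho_h) \<subseteq> closure fund_alcove" by (rule closure_mono)
  then show ?thesis using False by auto
qed

definition "theta_coeff = (SOME c::'a\<Rightarrow>nat. theta_v = (\<Sum>\<gamma>\<in>Delta. real (c \<gamma>) *\<^sub>R coroot \<gamma>)
    \<and> (\<forall>\<gamma>\<in>Delta. c \<gamma> \<ge> 1))"

lemma theta_coeff_props:
  "theta_v = (\<Sum>\<gamma>\<in>Delta. real (theta_coeff \<gamma>) *\<^sub>R coroot \<gamma>) \<and> (\<forall>\<gamma>\<in>Delta. theta_coeff \<gamma> \<ge> 1)"
  unfolding theta_coeff_def by (fact someI_ex[OF theta_v_full_support])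

lemma theta_v_theta_coeff: "theta_v = (\<Sum>\<gamma>\<in>Delta. real (theta_coeff \<gamma>) *\<^sub>R coroot \<gamma>)"
  using theta_coeff_props by blast

lemma theta_coeff_ge_1: "\<gamma> \<in> Delta \<Longrightarrow> theta_coeff \<gamma> \<ge> 1"
  using theta_coeff_props by blast

definition "vertex j = (1 / real (theta_coeff j)) *\<^sub>R fund_weight P j"

lemma vertex_coroot:
  "j \<in> Delta \<Longrightarrow> i \<in> Delta \<Longrightarrow> vertex j \<bullet> coroot i = (if i = j then 1 / real (theta_coeff j) else 0)"
  by (simp add: vertex_def fund_weight_coroot)

lemma vertex_theta_v: "j \<in> Delta \<Longrightarrow> vertex j \<bullet> theta_v = 1"
proof -
  assume j: "j \<in> Delta"
  have "vertex j \<bullet> theta_v = (\<Sum>i\<in>Delta. real (theta_coeff i) * (vertex j \<bullet> coroot i))"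
    by (subst theta_v_theta_coeff) (simp add: inner_sum_right)
  also have "\<dots> = (\<Sum>i\<in>Delta. if i = j then 1 else 0)"
  proof (rule sum.cong)
    fix i assume i: "i \<in> Delta"
    show "real (theta_coeff i) * (vertex j \<bullet> coroot i) = (if i = j then 1 else 0)"
      using vertex_coroot[OF j i] theta_coeff_ge_1[OF j] by auto
  qed simp
  also have "\<dots> = 1" using j finite_Delta by simp
  finally show ?thesis .
qed

lemma vertex_closure: "j \<in> Delta \<Longrightarrow> vertex j \<in> closure fund_alcove"
  by (rule closure_fund_alcove_simplex) (auto simp: vertex_coroot vertex_theta_v)

lemma zero_closure_fund_alcove: "0 \<in> closure fund_alcove"
  by (rule closure_fund_alcove_simplex) (auto simp: vertex_coroot vertex_theta_v)

lemma inj_on_vertex: "inj_on vertex Delta"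
proof (rule inj_onI)
  fix i j assume ij: "i \<in> Delta" "j \<in> Delta" "vertex i = vertex j"
  show "i = j"
  proof (rule ccontr)
    assume "i \<noteq> j"
    have e1: "vertex i \<bullet> coroot i = 1 / real (theta_coeff i)"
      using vertex_coroot[OF ij(1) ij(1)] by simp
    have e2: "vertex j \<bullet> coroot i = 0"
      using vertex_coroot[OF ij(2) ij(1)] \<open>i \<noteq> j\<close> by simp
    have "1 / real (theta_coeff i) = 0" using e1 e2 ij(3) by simp
    then show False using theta_coeff_ge_1[OF ij(1)] by simp
  qed
qed

lemma vertex_nonzero: "j \<in> Delta \<Longrightarrow> vertex j \<noteq> 0"
proof
  assume j: "j \<in> Delta" and z: "vertex j = 0"
  have "vertex j \<bullet> coroot j = 1 / real (theta_coeff j)" using vertex_coroot j by simp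
  then have "1 / real (theta_coeff j) = 0" using z by simp
  then show False using theta_coeff_ge_1[OF j] by simp
qed

lemma independent_vertices:
  assumes S: "S \<subseteq> Delta" shows "independent (vertex ` S)"
proof
  assume "dependent (vertex ` S)"
  have finS: "finite S" using S finite_Delta finite_subset by blast
  then have finV: "finite (vertex ` S)" by simp
  obtain u where u: "\<exists>w\<in>vertex ` S. u w \<noteq> 0" "(\<Sum>w\<in>vertex ` S. u w *\<^sub>R w) = 0"
    using \<open>dependent (vertex ` S)\<close> unfolding dependent_finite[OF finV] by blast
  then obtain j0 where j0: "j0 \<in> S" "u (vertex j0) \<noteq> 0" by auto
  have j0D: "j0 \<in> Delta" using j0 S by auto
  have val: "w \<bullet> coroot j0 = (if w
      = vertex j0 then 1 / real (theta_coeff j0) else 0)" if w: "w \<in> vertex ` S" for w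
  proof -
    obtain j where jj: "j \<in> S" "w = vertex j" using w by auto
    have jD: "j \<in> Delta" using jj S by auto
    show ?thesis
    proof (cases "j = j0")
      case True then show ?thesis using jj vertex_coroot[OF jD jD] by simp
    next
      case False
      then have "vertex j \<noteq> vertex j0" using inj_on_vertex jD j0D by (meson inj_on_eq_iff)
      then show ?thesis using jj vertex_coroot[OF jD j0D] False by simp
    qed
  qed
  have "0 = (\<Sum>w\<in>vertex ` S. u w *\<^sub>R w) \<bullet> coroot j0" using u(2) by simp
  also have "\<dots> = (\<Sum>w\<in>vertex ` S. u w * (if w = vertex j0 then 1 / real (theta_coeff j0) else 0))"
    by (simp add: inner_sum_left) (rule sum.cong, auto simp: val)
  also have "\<dots> = u (vertex j0) * (1 / real (theta_coeff j0))"
    using finV j0 by (simp add: if_distrib cong: if_cong)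
  finally have "u (vertex j0) * (1 / real (theta_coeff j0)) = 0" by simp
  moreover have "real (theta_coeff j0) \<noteq> 0" using theta_coeff_ge_1[OF j0D] by simp
  ultimately show False using j0 by simp
qed

lemma affine_independent_vertices:
  assumes S: "S \<subseteq> Delta" shows "\<not> affine_dependent (insert 0 (vertex ` S))"
proof -
  have "0 \<notin> vertex ` S" using vertex_nonzero S by auto
  then show ?thesis
    using affine_dependent_iff_dependent[of 0 "vertex ` S"] independent_vertices[OF S] by simp
qed

lemma wall_simple_root:
  assumes ai: "\<alpha>i \<in> Delta"
  shows "aff_dim (closure fund_alcove \<inter> hyp (- \<alpha>i) 0) = int DIM('a) - 1"
proof (rule antisym)
  have "aff_dim (closure fund_alcove \<inter> hyp (- \<alpha>i) 0) \<le> aff_dim (hyp (- \<alpha>i) 0)"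
    by (rule aff_dim_subset) auto
  then show "aff_dim (closure fund_alcove \<inter> hyp (- \<alpha>i) 0) \<le> int DIM('a) - 1"
    using aff_dim_hyp root_nonzero neg_root simple_root ai by metis
  define B where "B = insert 0 (vertex ` (Delta - {\<alpha>i}))"
  have "B \<subseteq> closure fund_alcove \<inter> hyp (- \<alpha>i) 0"
    using zero_closure_fund_alcove vertex_closure vertex_coroot ai by (auto simp: B_def hyp_def)
  moreover have "\<not> affine_dependent B" unfolding B_def
    by (rule affine_independent_vertices) auto
  moreover have "card B = DIM('a)"
  proof -
    have "0 \<notin> vertex ` (Delta - {\<alpha>i})" using vertex_nonzero by auto
    then have "card B = card (vertex ` (Delta - {\<alpha>i})) + 1"
      using finite_Delta by (simp add: B_def)
    also have "card (vertex ` (Delta - {\<alpha>i})) = card (Delta - {\<alpha>i})"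
      using inj_on_vertex by (intro card_image) (auto intro: inj_on_subset)
    also have "\<dots> = DIM('a) - 1" using ai finite_Delta card_Delta by simp
    finally show ?thesis using DIM_positive[where 'a='a] by simp
  qed
  ultimately show "aff_dim (closure fund_alcove \<inter> hyp (- \<alpha>i) 0) \<ge> int DIM('a) - 1"
    by (rule aff_dim_ge_affine_independent)
qed

lemma wall_theta: "aff_dim (closure fund_alcove \<inter> hyp theta 1) = int DIM('a) - 1"
proof (rule antisym)
  have "aff_dim (closure fund_alcove \<inter> hyp theta 1) \<le> aff_dim (hyp theta 1)"
    by (rule aff_dim_subset) auto
  then show "aff_dim (closure fund_alcove \<inter> hyp theta 1) \<le> int DIM('a) - 1"
    using aff_dim_hyp root_nonzero theta_in_P P_subset by (metis subsetD)
  define B where "B = vertex ` Delta"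
  have "B \<subseteq> closure fund_alcove \<inter> hyp theta 1"
    using vertex_closure vertex_theta_v theta_in_P coroot_theta by (auto simp: B_def hyp_def)
  moreover have "\<not> affine_dependent B"
    using affine_independent_subset[OF affine_independent_vertices[of Delta]] by (auto simp: B_def)
  moreover have "card B = DIM('a)" using inj_on_vertex card_Delta by (simp add: B_def card_image)
  ultimately show "aff_dim (closure fund_alcove \<inter> hyp theta 1) \<ge> int DIM('a) - 1"
    by (rule aff_dim_ge_affine_independent)
qed

section \<open>The simply laced case\<close>

lemma simply_laced_inner_self: "simply_laced \<Phi> \<Longrightarrow> \<alpha> \<in> \<Phi> \<Longrightarrow> \<beta> \<in> \<Phi> \<Longrightarrow> \<alpha> \<bullet> \<alpha> = \<beta> \<bullet> \<beta>"
  unfolding simply_laced_def by (metis power2_norm_eq_inner)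

lemma simply_laced_coroot_values:
  assumes sl: "simply_laced \<Phi>" and a: "\<alpha> \<in> \<Phi>" "\<beta> \<in> \<Phi>" "\<beta> \<noteq> \<alpha>" "\<beta> \<noteq> - \<alpha>"
  shows "\<beta> \<bullet> coroot \<alpha> = -1 \<or> \<beta> \<bullet> coroot \<alpha> = 0 \<or> \<beta> \<bullet> coroot \<alpha> = 1"
proof -
  obtain n where n: "\<beta> \<bullet> coroot \<alpha> = of_int n" using root_coroot_int a by blast
  have L: "\<alpha> \<bullet> \<alpha> = \<beta> \<bullet> \<beta>"
    using simply_laced_inner_self sl a by blast
  have Lp: "\<alpha> \<bullet> \<alpha> > 0" using root_nonzero a by simp
  have "(\<alpha> \<bullet> \<beta>)^2 < (\<alpha> \<bullet> \<alpha>)^2"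
    using root_inner_strict_Cauchy_Schwarz[OF a] L by (simp add: power2_eq_square)
  then have "\<bar>\<alpha> \<bullet> \<beta>\<bar> < \<alpha> \<bullet> \<alpha>"
    using Lp by (metis abs_of_pos power2_abs power_less_imp_less_base abs_ge_zero)
  then have "\<bar>\<beta> \<bullet> coroot \<alpha>\<bar> < 2"
    using Lp by (simp add: inner_coroot inner_commute abs_div abs_mult field_simps)
  then have "\<bar>n\<bar> < 2" using n by linarith
  then have "n = -1 \<or> n = 0 \<or> n = 1" by auto
  then show ?thesis using n by auto
qed

lemma simply_laced_obtuse_coroot:
  assumes sl: "simply_laced \<Phi>" and "\<gamma> \<in> \<Phi>" "\<alpha> \<in> \<Phi>" "\<gamma> \<noteq> - \<alpha>" "\<gamma> \<bullet> \<alpha> < 0"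
  shows "\<gamma> \<bullet> coroot \<alpha> = -1"
proof -
  have "\<alpha> \<noteq> 0" using root_nonzero assms(3) by blast
  then have "\<gamma> \<bullet> coroot \<alpha> < 0"
    using assms(5) by (simp add: inner_coroot divide_neg_pos)
  moreover have "\<gamma> \<noteq> \<alpha>"
    using assms(5) inner_ge_zero[of \<alpha>] by (metis not_le)
  ultimately show ?thesis using simply_laced_coroot_values[OF sl assms(3,2)] assms(4) by auto
qed

lemma simply_laced_dominant_root:
  assumes sl: "simply_laced \<Phi>" and g: "\<gamma> \<in> P" and dom: "\<forall>\<alpha>i\<in>Delta. 0 \<le> \<gamma> \<bullet> \<alpha>i"
  shows "\<gamma> = theta"
proof (rule ccontr)
  \<comment> \<open>\<open>theta_v - coroot \<gamma>\<close> is a nonnegative combination of simple coroots and \<open>\<gamma>\<close> is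
    dominant, so \<open>theta \<bullet> \<gamma> \<ge> theta \<bullet> theta\<close>, which strict Cauchy-Schwarz forbids for
    distinct roots of the same length.\<close>
  assume ne: "\<gamma> \<noteq> theta"
  obtain d where d: "theta_v - coroot \<gamma> = (\<Sum>\<delta>\<in>Delta. real (d \<delta>) *\<^sub>R coroot \<delta>)"
    using dom_le_theta_v[OF g] by (auto simp: dom_le_def)
  have "(theta_v - coroot \<gamma>) \<bullet> \<gamma> = (\<Sum>\<delta>\<in>Delta. real (d \<delta>) * (coroot \<delta> \<bullet> \<gamma>))"
    by (simp add: d inner_sum_left)
  also have "\<dots> \<ge> 0"
    using dom sign_inner_simple_coroot
    by (intro sum_nonneg mult_nonneg_nonneg) (auto simp: inner_commute)
  finally have "coroot \<gamma> \<bullet> \<gamma> \<le> theta_v \<bullet> \<gamma>"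
    by (simp add: inner_diff_left)
  have gP: "\<gamma> \<in> \<Phi>" and tP: "theta \<in> \<Phi>" using g theta_in_P P_subset by auto
  have tt: "theta \<bullet> theta > 0" using tP root_nonzero by auto
  have "coroot \<gamma> \<bullet> \<gamma> = 2" using coroot_inner_self root_nonzero gP by blast
  moreover have "theta_v \<bullet> \<gamma> = 2 * (theta \<bullet> \<gamma>) / (theta \<bullet> theta)"
    using coroot_theta[symmetric] by (simp add: coroot_def)
  ultimately have ge: "theta \<bullet> theta \<le> theta \<bullet> \<gamma>"
    using \<open>coroot \<gamma> \<bullet> \<gamma> \<le> theta_v \<bullet> \<gamma>\<close> tt
    by (simp add: field_simps)
  have "\<gamma> \<noteq> - theta" using g theta_in_P neg_notin_P by auto
  then have "(theta \<bullet> \<gamma>)^2 < (theta \<bullet> theta) * (\<gamma> \<bullet> \<gamma>)"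
    using root_inner_strict_Cauchy_Schwarz[OF tP gP] ne by auto
  also have "\<dots> = (theta \<bullet> theta)^2"
    using simply_laced_inner_self[OF sl gP tP] by (simp add: power2_eq_square)
  also have "\<dots> \<le> (theta \<bullet> \<gamma>)^2" using ge tt by (intro power_mono) auto
  finally show False by simp
qed

lemma Zset_neighbour_coroot:
  assumes "rho_h + (1 / hcox) *\<^sub>R \<gamma> \<in> regular_points" and "\<alpha>i \<in> Delta"
  shows "\<gamma> \<bullet> coroot \<alpha>i \<noteq> -1"
proof
  assume "\<gamma> \<bullet> coroot \<alpha>i = -1"
  then have "(rho_h + (1 / hcox) *\<^sub>R \<gamma>) \<bullet> coroot \<alpha>i = of_int 0"
    using rho_h_coroot_simple[OF assms(2)] by (simp add: inner_add_left)
  then show False using assms simple_root unfolding regular_points_iff by blast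
qed

lemma simply_laced_Zset_neighbour:
  assumes sl: "simply_laced \<Phi>" and g: "\<gamma> \<in> \<Phi>" and q: "rho_h + (1 / hcox) *\<^sub>R \<gamma> \<in> regular_points"
  shows "(\<exists>\<alpha>i\<in>Delta. \<gamma> = - \<alpha>i) \<or> \<gamma> = theta"
proof (cases "\<gamma> \<in> P")
  case True
  have "0 \<le> \<gamma> \<bullet> \<alpha>i" if ai: "\<alpha>i \<in> Delta" for \<alpha>i
  proof (rule ccontr)
    assume "\<not> ?thesis"
    moreover have "\<gamma> \<noteq> - \<alpha>i" using True ai simple_in_P neg_notin_P by auto
    ultimately have "\<gamma> \<bullet> coroot \<alpha>i = -1"
      using simply_laced_obtuse_coroot[OF sl g simple_root[OF ai]] by simp
    then show False using Zset_neighbour_coroot[OF q ai] by simp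
  qed
  then show ?thesis using simply_laced_dominant_root[OF sl True] by blast
next
  case False
  then have "- \<gamma> \<in> P" using root_or_neg_in_P g by auto
  then obtain \<alpha>i where ai: "\<alpha>i \<in> Delta" "- \<gamma> \<bullet> \<alpha>i > 0"
    using P_inner_simple_pos by blast
  show ?thesis
  proof (rule disjI1, rule ccontr)
    assume "\<not> (\<exists>\<alpha>i\<in>Delta. \<gamma> = - \<alpha>i)"
    then have "\<gamma> \<bullet> coroot \<alpha>i = -1"
      using simply_laced_obtuse_coroot[OF sl g simple_root[OF ai(1)]] ai by auto
    then show False using Zset_neighbour_coroot[OF q ai(1)] by simp
  qed
qed

lemma fund_alcove_exit:
  assumes "(\<exists>\<alpha>i\<in>Delta. \<gamma> = - \<alpha>i) \<or> \<gamma> = theta"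
  obtains m where "alcove_arrow \<Phi> fund_alcove \<gamma> (aff_refl \<gamma> m ` fund_alcove)"
    and "aff_refl \<gamma> m rho_h = rho_h + (1 / hcox) *\<^sub>R \<gamma>"
proof -
  obtain m where m: "aff_dim (closure fund_alcove \<inter> hyp \<gamma> m) = int DIM('a) - 1"
    "\<forall>x\<in>fund_alcove. x \<bullet> coroot \<gamma> < of_int m" "rho_h \<bullet> coroot \<gamma> - of_int m = - (1 / hcox)"
    using assms
  proof
    assume "\<exists>\<alpha>i\<in>Delta. \<gamma> = - \<alpha>i"
    then obtain \<alpha>i where ai: "\<alpha>i \<in> Delta" "\<gamma> = - \<alpha>i" by blast
    then have "\<forall>x\<in>fund_alcove. x \<bullet> coroot \<gamma> < of_int 0"
      using fund_alcove_iff simple_in_P by auto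
    then show ?thesis using that[of 0] wall_simple_root rho_h_coroot_simple ai by simp
  next
    assume t: "\<gamma> = theta"
    then have "\<forall>x\<in>fund_alcove. x \<bullet> coroot \<gamma> < of_int 1"
      using fund_alcove_iff theta_in_P by auto
    then show ?thesis using that[of 1] wall_theta rho_h_coroot_theta t by simp
  qed
  have "\<gamma> \<in> \<Phi>" using assms simple_root neg_root theta_in_P P_subset by auto
  then show ?thesis
    using that alcove_arrow_aff_refl[OF fund_alcove_alcove _ m(2,1)] m(3) by (simp add: aff_refl_eq)
qed

lemma simply_laced_arrow:
  assumes sl: "simply_laced \<Phi>" and A: "A \<in> alcoves \<Phi>" and B: "B \<in> alcoves \<Phi>" and a: "\<alpha> \<in> \<Phi>"
    and eq: "zeta \<Phi> P B - zeta \<Phi> P A = (1 / hcox) *\<^sub>R \<alpha>"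
  shows "alcove_arrow \<Phi> A \<alpha> B"
proof -
  obtain f where f: "affine_weyl f" "f ` A = fund_alcove" using alcove_to_fund_alcove A by blast
  obtain g where g: "affine_weyl g" "\<And>x. g (f x) = x" "\<And>x. f (g x) = x"
    using affine_weyl_inverseE[OF f(1)] by blast
  define \<gamma> where "\<gamma> = lin_part f \<alpha>"
  have \<gamma>: "\<gamma> \<in> \<Phi>" using lin_part_root[OF f(1) a] by (simp add: \<gamma>_def)
  have "f (zeta \<Phi> P A) = rho_h"
    using zeta_affine_weyl[OF f(1) A] f(2) zeta_fund_alcove by simp
  moreover have "zeta \<Phi> P B = zeta \<Phi> P A + (1 / hcox) *\<^sub>R \<alpha>"
    using eq by (simp add: algebra_simps)
  ultimately have fzB: "f (zeta \<Phi> P B) = rho_h + (1 / hcox) *\<^sub>R \<gamma>"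
    using affine_weyl_add[OF f(1)] linear_lin_part[OF f(1)] by (simp add: \<gamma>_def linear_scale)
  then have "rho_h + (1 / hcox) *\<^sub>R \<gamma> \<in> regular_points"
    using affine_weyl_Zset[OF f(1) zeta_in(2)[OF B]] Zset_iff by auto
  then obtain m where arr: "alcove_arrow \<Phi> fund_alcove \<gamma> (aff_refl \<gamma> m ` fund_alcove)"
    and m: "aff_refl \<gamma> m rho_h = rho_h + (1 / hcox) *\<^sub>R \<gamma>"
    using fund_alcove_exit[OF simply_laced_Zset_neighbour[OF sl \<gamma>]] by blast
  have "f ` B = aff_refl \<gamma> m ` fund_alcove"
  proof (rule alcove_eq)
    show "f ` B \<in> alcoves \<Phi>" using affine_weyl_alcove[OF f(1) B] .
    show "aff_refl \<gamma> m ` fund_alcove \<in> alcoves \<Phi>"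
      using affine_weyl_alcove[OF affine_weyl_aff_refl[OF \<gamma>] fund_alcove_alcove] .
    show "rho_h + (1 / hcox) *\<^sub>R \<gamma> \<in> f ` B"
      using image_eqI[of _ f, OF fzB[symmetric] zeta_in(1)[OF B]] .
    show "rho_h + (1 / hcox) *\<^sub>R \<gamma> \<in> aff_refl \<gamma> m ` fund_alcove"
      using image_eqI[of _ "aff_refl \<gamma> m", OF m[symmetric] rho_h_fund_alcove] .
  qed
  then have "alcove_arrow \<Phi> (g ` f ` A) (lin_part g \<gamma>) (g ` f ` B)"
    using affine_weyl_alcove_arrow[OF g(1) arr] f(2) by simp
  moreover have "g ` f ` X = X" for X using g(2) by (simp add: image_image)
  moreover have "lin_part g \<gamma> = \<alpha>"
    using lin_part_inverse[OF f(1) g(1,2)] by (simp add: \<gamma>_def)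
  ultimately show ?thesis by simp
qed

end

theorem lemma14p3:
  fixes \<Phi> P :: "'a::euclidean_space set"
  assumes "irreducible_root_system \<Phi>"
    and "positive_system \<Phi> P"
  shows "(\<forall>A B \<alpha>. alcove_arrow \<Phi> A \<alpha> B \<longrightarrow>
            zeta \<Phi> P B - zeta \<Phi> P A = (1 / coxeter_number \<Phi> P) *\<^sub>R \<alpha>)
       \<and> (simply_laced \<Phi> \<longrightarrow>
            (\<forall>A B \<alpha>. A \<in> alcoves \<Phi> \<and> B \<in> alcoves \<Phi> \<and> \<alpha> \<in> \<Phi> \<and>
               zeta \<Phi> P B - zeta \<Phi> P A = (1 / coxeter_number \<Phi> P) *\<^sub>R \<alpha>
               \<longrightarrow> alcove_arrow \<Phi> A \<alpha> B))"
proof -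
  obtain v where "\<forall>\<alpha>\<in>\<Phi>. \<alpha> \<bullet> v \<noteq> 0" "P = {\<alpha>\<in>\<Phi>. \<alpha> \<bullet> v > 0}"
    using assms(2) unfolding positive_system_def by blast
  then interpret irr_pos_root_system \<Phi> P v
    using assms(1) by unfold_locales (auto simp: irreducible_root_system_def)
  show ?thesis
  proof (intro conjI allI impI)
    fix A B \<alpha> assume "alcove_arrow \<Phi> A \<alpha> B"
    then show "zeta \<Phi> P B - zeta \<Phi> P A = (1 / coxeter_number \<Phi> P) *\<^sub>R \<alpha>"
      by (rule zeta_arrow)
  next
    fix A B \<alpha>
    assume sl: "simply_laced \<Phi>"
      and h: "A \<in> alcoves \<Phi> \<and> B \<in> alcoves \<Phi> \<and> \<alpha> \<in> \<Phi> \<and>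
               zeta \<Phi> P B - zeta \<Phi> P A = (1 / coxeter_number \<Phi> P) *\<^sub>R \<alpha>"
    then show "alcove_arrow \<Phi> A \<alpha> B" using simply_laced_arrow[OF sl] by blast
  qed
qed

end
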